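(* Assume the standing hypotheses (H). Let $0\le\bar K\in L^4_{\mathfrak P}$. There is a nonnegative $K_{\mathrm{up}}\in L^2_{\mathfrak P}$ (depending on $\bar K$) such that for every $(t,\mathbf x,y)\in\mathbf D\times\mathbb R$, $\boldsymbol\zeta\in\mathbf Z$ and $\psi\in(0,1)$ with $\|\boldsymbol\zeta-\boldsymbol\zeta^\psi(t,\mathbf x)\|\le\bar K(t,\mathbf x)\psi^2$, $$w^\psi_t(t,\mathbf x,y)+\sup_{\boldsymbol\upsilon\in\mathbb R^2}H^\psi(t,\mathbf x,y;\boldsymbol\upsilon,\boldsymbol\zeta)\le K_{\mathrm{up}}(t,\mathbf x)U'(y)\Big(1+\frac{-U''(y)}{U'(y)}\Big)\psi^{1+\mathbf 1_{\{\Sigma\in(\underline\Sigma,\overline\Sigma)\}}}.$$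
   Context: Setting. Fix $T>0$, $S_0>0$, $\Sigma_0>0$, $A_0\in\mathbb R$. $\Omega$: continuous paths $\omega=(\omega^S,\omega^\Sigma,\omega^A):[0,T]\to\mathbb R^3$ with $\omega_0=(S_0,\Sigma_0,A_0)$ (uniform topology, Borel $\sigma$-algebra $\mathcal F$); $S,\Sigma,A$ coordinate processes, $\mathbb F$ their raw filtration, $M_t=\sup_{u\le t}S_u$, $\mathbf X_t=(S_t,A_t,M_t,\Sigma_t)$. $\mathbf G=\mathbb R_+\times\mathbb R\times\mathbb R_+$, $\mathbf D^0=(0,T)\times\mathbf G\times\mathbb R_+$ (points $(t,\mathbf x)$, $\mathbf x=(S,A,M,\Sigma)$); $0<\underline\Sigma<\Sigma_0<\overline\Sigma$, $\mathbf D=(0,T)\times\mathbf G\times[\underline\Sigma,\overline\Sigma]$. $\|\cdot\|$ Euclidean norm, $\mathbf e_4$ fourth unit vector, $x^-=\max(-x,0)$. Call: $\mathcal C(t,S,\Sigma)$ with $\mathcal C_t+\frac12\Sigma^2S^2\mathcal C_{SS}=0$, $\mathcal C(T_{\mathsf C},S,\Sigma)=\mathsf C(S)$. $b^{\mathcal C}(t,\mathbf x;\boldsymbol\zeta)=\nu\mathcal C_\Sigma+\frac12S^2\mathcal C_{SS}(\sigma^2-\Sigma^2)+\sigma\eta S\mathcal C_{S\Sigma}+\frac12(\eta^2+\xi)\mathcal C_{\Sigma\Sigma}$ for $\boldsymbol\zeta=(\nu,\sigma,\eta,\xi)$. Models: $\mathfrak P^{00}$ = probability measures $P$ on $(\Omega,\mathcal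 F)$ with progressively measurable $\boldsymbol\zeta^P=(\nu^P,\sigma^P,\eta^P,\xi^P)$ such that $S$, $\Sigma-\int_0^\cdot\nu^P_tdt$ are continuous local $P$-martingales with $d\langle S\rangle_t=S_t^2(\sigma^P_t)^2dt$, $d\langle\Sigma\rangle_t=((\eta^P_t)^2+\xi^P_t)dt$, $d\langle S,\Sigma\rangle_t=S_t\sigma^P_t\eta^P_tdt$, $S,\Sigma>0$, $\xi^P\ge0$, $b^{\mathcal C}(t,\mathbf X_t;\boldsymbol\zeta^P_t)=0$ $dt\times P$-a.e.; for Borel $\alpha,\beta,\gamma,\delta:[0,T]\times\mathbb R^3\to\mathbb R$, $\mathfrak P^0$ = those $P$ with $dA_t=(\alpha+\frac12(\sigma^P_t)^2\beta)dt+\gamma dS_t+\delta dM_t$. $\boldsymbol\zeta^0(\Sigma)=(0,\Sigma,0,0)^\top$; reference model: $\boldsymbol\zeta^P_t=\boldsymbol\zeta^0(\Sigma_t)$ a.e. Non-traded option: $\mathcal V(\cdot,\Sigma)$ solves $\mathcal V_t+(\alpha+\frac12\beta\Sigma^2)\mathcal V_A+\frac12\Sigma^2S^2(\mathcal V_{SS}+2\gamma\mathcal V_{SA}+\gamma^2\mathcal V_{AA})=0$ on $(0,T)\times\mathbf G$, $\delta\mathcal V_A+\mathcal V_M=0$ on $\{S\ge M\}$, $\mathcal V(T,\cdot,\Sigma)=\mathsf V$. $\Delta=\mathcal V_S+\gamma\mathcal V_A$, $\Gamma=\mathcal V_{SS}+2\gamma\mathcal V_{SA}+\gamma^2\mathcal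 V_{AA}$, $\frac{\partial\Delta}{\partial\Sigma}:=\mathcal V_{S\Sigma}+\gamma\mathcal V_{A\Sigma}$. P&L: $V_t=\mathcal V(t,\mathbf X_t)$, $C_t=\mathcal C(t,S_t,\Sigma_t)$; strategies $\boldsymbol\upsilon=(\theta,\phi)$ real locally bounded progressive; $Y^{\boldsymbol\upsilon,P}_t=Y_0+V_0+\int_0^t\theta dS+\int_0^t\phi dC-V_t$. Preferences: $\Psi=\mathrm{diag}(\psi_\nu,\psi_\sigma,\psi_\eta,\psi_\xi)$, positive; $f(\Sigma,\boldsymbol\zeta)=\frac12(\boldsymbol\zeta-\boldsymbol\zeta^0(\Sigma))^\top\Psi^{-1}(\boldsymbol\zeta-\boldsymbol\zeta^0(\Sigma))$; a utility $U$, strategy set $\mathfrak Y$, model set $\mathfrak P\subset\mathfrak P^0$. Candidate control: $\mathbf c=(\mathcal C_\Sigma,\Sigma S^2\mathcal C_{SS},\Sigma S\mathcal C_{S\Sigma},\frac12\mathcal C_{\Sigma\Sigma})^\top$, $\mathbf v=(\mathcal V_\Sigma,\Sigma(\beta\mathcal V_A+S^2\Gamma),\Sigma S\frac{\partial\Delta}{\partial\Sigma},\frac12\mathcal V_{\Sigma\Sigma})^\top$; $\lambda=\frac{\mathbf c^\top\Psi\mathbf v}{\mathbf c^\top\Psi\mathbf c}$ if $\mathcal V_{\Sigma\Sigma}-\frac{\mathbf c^\top\Psi\mathbf v}{\mathbf c^\top\Psi\mathbf c}\mathcal C_{\Sigma\Sigma}\ge0$, else $\lambda=\frac{\mathbf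 c^\top\Psi\mathbf v-\frac14\mathcal C_{\Sigma\Sigma}\mathcal V_{\Sigma\Sigma}\psi_\xi}{\mathbf c^\top\Psi\mathbf c-\frac14\mathcal C_{\Sigma\Sigma}^2\psi_\xi}$; $\mu=\frac12(\mathcal V_{\Sigma\Sigma}-\lambda\mathcal C_{\Sigma\Sigma})^-$; $\widetilde{\boldsymbol\zeta}=\Psi(\mathbf v-\lambda\mathbf c+\mu\mathbf e_4)$; $\boldsymbol\zeta^\psi=\boldsymbol\zeta^0(\Sigma)+\widetilde{\boldsymbol\zeta}\mathbf 1_{\{\underline\Sigma<\Sigma<\overline\Sigma\}}\psi$; $\widetilde g=\mathbf v^\top\widetilde{\boldsymbol\zeta}$. Cash-equivalent PDE: for $\Sigma\in[\underline\Sigma,\overline\Sigma]$, $\widetilde w_t+(\alpha+\frac12\beta\Sigma^2)\widetilde w_A+\frac12\Sigma^2S^2(\widetilde w_{SS}+2\gamma\widetilde w_{SA}+\gamma^2\widetilde w_{AA})+\frac12\widetilde g(\cdot,\Sigma)=0$ on $(0,T)\times\mathbf G$, $\delta\widetilde w_A+\widetilde w_M=0$ on $\{S\ge M\}$, $\widetilde w(T,\cdot,\Sigma)=0$. $L^p_{\mathfrak P}$: Borel $K$ on $\mathbf D^0$ with $\sup_{P\in\mathfrak P}E^P[\int_0^T|K(t,\mathbf X_t)|^pdt]^{1/p}<\infty$. Candidate asymptotic model family: $(P^\psi)_{\psi\in(0,\psi_0)}\subset\mathfrak P$, $\psi_0\in(0,1)$, with $K_0\in L^4_{\mathfrak P}$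 and $\|\boldsymbol\zeta^{P^\psi}_t-\boldsymbol\zeta^\psi(t,\mathbf X_t)\|\le K_0(t,\mathbf X_t)\psi^2$ $dt\times P^\psi$-a.e. Assumption (A): (a) $\exists K_{\mathfrak Y}$: $Y^{\boldsymbol\upsilon,P}>-K_{\mathfrak Y}$ $dt\times P$-a.e. for all $\boldsymbol\upsilon\in\mathfrak Y$, $P\in\mathfrak P$; (b) $\mathfrak P$ contains a candidate asymptotic model family and a reference model, and constants $\underline\nu<0<\overline\nu$, $0<\underline\sigma<\underline\Sigma$, $\overline\Sigma<\overline\sigma$, $\underline\eta<0<\overline\eta$, $\overline\xi>0$ bound $\nu^P,\sigma^P,\eta^P,\xi^P,\Sigma$ in $[\underline\nu,\overline\nu],[\underline\sigma,\overline\sigma],[\underline\eta,\overline\eta],[0,\overline\xi],[\underline\Sigma,\overline\Sigma]$ $dt\times P$-a.e. for all $P\in\mathfrak P$; (c) $T_{\mathsf C}\ge T$, $\mathcal C\in C^{1,2,2}((0,T_{\mathsf C})\times\mathbb R_+^2)\cap C([0,T_{\mathsf C}]\times\overline{\mathbb R}_+^2)$ solves the call PDE classically for $\Sigma\in[\underline\Sigma,\overline\Sigma]$, $\mathcal C_\Sigma\ne0$ and $|\mathcal C_{\Sigma\Sigma}|\le K_{\mathcal C}(|\mathcal C_\Sigma|+|S^2\mathcal C_{SS}|+|S\mathcal C_{S\Sigma}|)$ on $(0,T)\times\mathbb R_+\times[\underline\Sigma,\overline\Sigma]$ with $K_{\mathcal C}\in L^2_{\mathfrak P}$; (d) $\mathcal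 V\in C^{1,2,2,1,2}(\mathbf D^0)\cap C(\overline{\mathbf D^0})$ solves the $\mathcal V$-PDE classically for $\Sigma\in[\underline\Sigma,\overline\Sigma]$, $|\mathcal V_\Sigma|,|\beta\mathcal V_A+S^2\Gamma|,|S\frac{\partial\Delta}{\partial\Sigma}|,|\mathcal V_{\Sigma\Sigma}|\le K_{\mathcal V}$ on $\mathbf D$; (e) $\widetilde w\in C^{1,2,2,1,2}(\mathbf D^0)\cap C(\overline{\mathbf D^0})$ solves the cash-equivalent PDE classically for $\Sigma\in[\underline\Sigma,\overline\Sigma]$, $0\le\widetilde w\le K_{\widetilde w}$ on $\mathbf D$, and $\widetilde w_\Sigma,S(\widetilde w_S+\gamma\widetilde w_A),\beta\widetilde w_A+S^2(\widetilde w_{SS}+2\gamma\widetilde w_{SA}+\gamma^2\widetilde w_{AA}),S(\widetilde w_{S\Sigma}+\gamma\widetilde w_{A\Sigma}),\widetilde w_{\Sigma\Sigma}\in L^4_{\mathfrak P}$; (f) $U\in C^3(\mathbb R)$, $U'>0$, $U''<0$, $-U''/U'$ nonincreasing. Additional notation. $\mathbf Z=[\underline\nu,\overline\nu]\times[\underline\sigma,\overline\sigma]\times[\underline\eta,\overline\eta]\times[0,\overline\xi]$. $b^{\mathcal V}(t,\mathbf x;\boldsymbol\zeta)=\nu\mathcal V_\Sigma+\frac12(\beta\mathcal V_A+S^2\Gamma)(\sigma^2-\Sigma^2)+\sigma\eta S\frac{\partial\Delta}{\partial\Sigma}+\frac12(\eta^2+\xi)\mathcal V_{\Sigma\Sigma}$.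 $w^\psi(t,\mathbf x,y)=U(y)-U'(y)\widetilde w(t,\mathbf x)\psi$ (subscripts $t,S,A,\Sigma,Y$ denote partial derivatives in $t,S,A,\Sigma,y$). For $\boldsymbol\upsilon=(\theta,\phi)\in\mathbb R^2$, $\boldsymbol\zeta=(\nu,\sigma,\eta,\xi)$, with $D_\theta:=\theta-(\Delta-\phi\mathcal C_S)$, $D_\phi:=\phi\mathcal C_\Sigma-\mathcal V_\Sigma$ and derivatives of $w^\psi$ at $(t,\mathbf x,y)$: $H^\psi(t,\mathbf x,y;\boldsymbol\upsilon,\boldsymbol\zeta)=\frac1\psi U'(y)f(\Sigma,\boldsymbol\zeta)+\nu w^\psi_\Sigma+(\alpha+\frac12\beta\sigma^2)w^\psi_A-b^{\mathcal V}(t,\mathbf x;\boldsymbol\zeta)w^\psi_Y+\frac12\sigma^2S^2(w^\psi_{SS}+2\gamma w^\psi_{SA}+\gamma^2w^\psi_{AA})+\sigma S\eta(w^\psi_{S\Sigma}+\gamma w^\psi_{A\Sigma})+\frac12(\eta^2+\xi)w^\psi_{\Sigma\Sigma}+\sigma^2S^2D_\theta(w^\psi_{SY}+\gamma w^\psi_{AY})+\sigma S\eta D_\phi(w^\psi_{SY}+\gamma w^\psi_{AY})+\sigma S\eta D_\theta w^\psi_{\Sigma Y}+D_\phi(\eta^2+\xi)w^\psi_{\Sigma Y}+\frac12\sigma^2S^2D_\theta^2w^\psi_{YY}+\frac12(\eta^2+\xi)D_\phi^2w^\psi_{YY}+\sigma S\eta D_\theta D_\phi w^\psi_{YY}$.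 Delta-vega hedge $\boldsymbol\upsilon^\star_t=(\Delta-\frac{\mathcal V_\Sigma}{\mathcal C_\Sigma}\mathcal C_S,\frac{\mathcal V_\Sigma}{\mathcal C_\Sigma})(t,\mathbf X_t)$. Standing hypotheses (H): Assumption (A) holds, $\boldsymbol\upsilon^\star\in\mathfrak Y$, and $(P^\psi)_{\psi\in(0,\psi_0)}\subset\mathfrak P$ is a candidate asymptotic model family. *)

theory Defs
  imports "HOL-Probability.Probability"
begin

(* A path omega = (omega^S, omega^Sigma, omega^A) : time -> R^3 *)
type_synonym path = "real \<Rightarrow> real \<times> real \<times> real"
(* functions of (t,S,A,M,Sigma) *)
type_synonym fun5 = "real \<Rightarrow> real \<Rightarrow> real \<Rightarrow> real \<Rightarrow> real \<Rightarrow> real"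
(* functions of (t,S,A,M,Sigma,y) *)
type_synonym fun6 = "real \<Rightarrow> real \<Rightarrow> real \<Rightarrow> real \<Rightarrow> real \<Rightarrow> real \<Rightarrow> real"
(* zeta = (nu, sigma, eta, xi) *)
type_synonym zeta4 = "real \<times> real \<times> real \<times> real"

definition z1 :: "zeta4 \<Rightarrow> real" where "z1 z = fst z"
definition z2 :: "zeta4 \<Rightarrow> real" where "z2 z = fst (snd z)"
definition z3 :: "zeta4 \<Rightarrow> real" where "z3 z = fst (snd (snd z))"
definition z4 :: "zeta4 \<Rightarrow> real" where "z4 z = snd (snd (snd z))"

definition negpart :: "real \<Rightarrow> real" where "negpart x = max (- x) 0"

(* coordinates: 0 = t, 1 = S, 2 = A, 3 = M, 4 = Sigma, 5 = y *)
definition app6 :: "fun6 \<Rightarrow> real list \<Rightarrow> real" where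
  "app6 f p = f (p!0) (p!1) (p!2) (p!3) (p!4) (p!5)"

definition pd :: "nat \<Rightarrow> fun6 \<Rightarrow> fun6" where
  "pd k f = (\<lambda>t S A M Sg y. deriv (\<lambda>z. app6 f ([t,S,A,M,Sg,y][k := z])) ([t,S,A,M,Sg,y] ! k))"

definition pdiff_at :: "nat \<Rightarrow> fun6 \<Rightarrow> real list \<Rightarrow> bool" where
  "pdiff_at k f p \<longleftrightarrow> (\<lambda>z. app6 f (p[k := z])) field_differentiable (at (p!k))"

definition lift5 :: "fun5 \<Rightarrow> fun6" where
  "lift5 f = (\<lambda>t S A M Sg y. f t S A M Sg)"

definition D5 :: "nat \<Rightarrow> fun5 \<Rightarrow> fun5" where
  "D5 k f = (\<lambda>t S A M Sg. pd k (lift5 f) t S A M Sg 0)"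

definition liftC :: "(real \<Rightarrow> real \<Rightarrow> real \<Rightarrow> real) \<Rightarrow> fun5" where
  "liftC C = (\<lambda>t S A M Sg. C t S Sg)"

(* partial derivatives of a function C(t,S,Sigma), indices 0 = t, 1 = S, 4 = Sigma *)
definition DC :: "nat \<Rightarrow> (real \<Rightarrow> real \<Rightarrow> real \<Rightarrow> real) \<Rightarrow> (real \<Rightarrow> real \<Rightarrow> real \<Rightarrow> real)" where
  "DC k C = (\<lambda>t S Sg. D5 k (liftC C) t S 0 0 Sg)"

definition unc5 :: "fun5 \<Rightarrow> real \<times> real \<times> real \<times> real \<times> real \<Rightarrow> real" where
  "unc5 f = (\<lambda>(t,S,A,M,Sg). f t S A M Sg)"

definition pts5 :: "real \<times> real \<times> real \<times> real \<times> real \<Rightarrow> real list" where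
  "pts5 = (\<lambda>(t,S,A,M,Sg). [t,S,A,M,Sg,0])"

definition classical_reg :: "nat set \<Rightarrow> nat set \<Rightarrow> fun5 \<Rightarrow> (real \<times> real \<times> real \<times> real \<times> real) set \<Rightarrow> bool" where
  "classical_reg K1 K2 f D \<longleftrightarrow> continuous_on D (unc5 f) \<and>
     (\<forall>k\<in>K1. (\<forall>p\<in>D. pdiff_at k (lift5 f) (pts5 p)) \<and> continuous_on D (unc5 (D5 k f))) \<and>
     (\<forall>j\<in>K2. \<forall>k\<in>K2. (\<forall>p\<in>D. pdiff_at k (lift5 (D5 j f)) (pts5 p)) \<and>
                        continuous_on D (unc5 (D5 k (D5 j f))))"

definition C12212 :: "fun5 \<Rightarrow> (real \<times> real \<times> real \<times> real \<times> real) set \<Rightarrow> bool" where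
  "C12212 f D \<longleftrightarrow> classical_reg {0,1,2,3,4} {1,2,4} f D"

definition C3 :: "(real \<Rightarrow> real) \<Rightarrow> bool" where
  "C3 U \<longleftrightarrow> (\<forall>x. U field_differentiable (at x) \<and> deriv U field_differentiable (at x)
              \<and> deriv (deriv U) field_differentiable (at x))
           \<and> continuous_on UNIV (deriv (deriv (deriv U)))"

definition D0set :: "real \<Rightarrow> (real \<times> real \<times> real \<times> real \<times> real) set" where
  "D0set T = {(t,S,A,M,Sg). 0 < t \<and> t < T \<and> 0 < S \<and> 0 < M \<and> 0 < Sg}"

definition Dset :: "real \<Rightarrow> real \<Rightarrow> real \<Rightarrow> (real \<times> real \<times> real \<times> real \<times> real) set" where
  "Dset T Sgl Sgu = {(t,S,A,M,Sg). 0 < t \<and> t < T \<and> 0 < S \<and> 0 < M \<and> Sgl \<le> Sg \<and> Sg \<le> Sgu}"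

(* (0,T_C) x R_+^2 for (t,S,Sigma), embedded in 5 coordinates (A, M arbitrary) *)
definition DCset :: "real \<Rightarrow> (real \<times> real \<times> real \<times> real \<times> real) set" where
  "DCset TC = {(t,S,A,M,Sg). 0 < t \<and> t < TC \<and> 0 < S \<and> 0 < Sg}"

definition Zset :: "real \<Rightarrow> real \<Rightarrow> real \<Rightarrow> real \<Rightarrow> real \<Rightarrow> real \<Rightarrow> real \<Rightarrow> zeta4 set" where
  "Zset nul nuu sgl sgu etl etu xiu =
     {z. nul \<le> z1 z \<and> z1 z \<le> nuu \<and> sgl \<le> z2 z \<and> z2 z \<le> sgu \<and> etl \<le> z3 z \<and> z3 z \<le> etu
         \<and> 0 \<le> z4 z \<and> z4 z \<le> xiu}"

definition GammaV :: "(real \<Rightarrow> real \<Rightarrow> real \<Rightarrow> real \<Rightarrow> real) \<Rightarrow> fun5 \<Rightarrow> fun5" where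
  "GammaV gam V = (\<lambda>t S A M Sg. D5 1 (D5 1 V) t S A M Sg + 2 * gam t S A M * D5 2 (D5 1 V) t S A M Sg
                       + (gam t S A M)\<^sup>2 * D5 2 (D5 2 V) t S A M Sg)"

definition DeltaV :: "(real \<Rightarrow> real \<Rightarrow> real \<Rightarrow> real \<Rightarrow> real) \<Rightarrow> fun5 \<Rightarrow> fun5" where
  "DeltaV gam V = (\<lambda>t S A M Sg. D5 1 V t S A M Sg + gam t S A M * D5 2 V t S A M Sg)"

definition dDeltaV :: "(real \<Rightarrow> real \<Rightarrow> real \<Rightarrow> real \<Rightarrow> real) \<Rightarrow> fun5 \<Rightarrow> fun5" where
  "dDeltaV gam V = (\<lambda>t S A M Sg. D5 4 (D5 1 V) t S A M Sg + gam t S A M * D5 4 (D5 2 V) t S A M Sg)"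

definition cvec :: "(real \<Rightarrow> real \<Rightarrow> real \<Rightarrow> real) \<Rightarrow> real \<Rightarrow> real \<Rightarrow> real \<Rightarrow> zeta4" where
  "cvec C t S Sg = (DC 4 C t S Sg, Sg * S\<^sup>2 * DC 1 (DC 1 C) t S Sg, Sg * S * DC 4 (DC 1 C) t S Sg,
                    DC 4 (DC 4 C) t S Sg / 2)"

definition vvec :: "(real \<Rightarrow> real \<Rightarrow> real \<Rightarrow> real \<Rightarrow> real) \<Rightarrow> (real \<Rightarrow> real \<Rightarrow> real \<Rightarrow> real \<Rightarrow> real)
                     \<Rightarrow> fun5 \<Rightarrow> real \<Rightarrow> real \<Rightarrow> real \<Rightarrow> real \<Rightarrow> real \<Rightarrow> zeta4" where
  "vvec bet gam V t S A M Sg = (D5 4 V t S A M Sg,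
       Sg * (bet t S A M * D5 2 V t S A M Sg + S\<^sup>2 * GammaV gam V t S A M Sg),
       Sg * S * dDeltaV gam V t S A M Sg,
       D5 4 (D5 4 V) t S A M Sg / 2)"

(* Psi = diag(psis); a^T Psi b *)
definition ipsi :: "zeta4 \<Rightarrow> zeta4 \<Rightarrow> zeta4 \<Rightarrow> real" where
  "ipsi psis a b = z1 psis * z1 a * z1 b + z2 psis * z2 a * z2 b + z3 psis * z3 a * z3 b + z4 psis * z4 a * z4 b"

definition Psi_mul :: "zeta4 \<Rightarrow> zeta4 \<Rightarrow> zeta4" where
  "Psi_mul psis a = (z1 psis * z1 a, z2 psis * z2 a, z3 psis * z3 a, z4 psis * z4 a)"

definition e4 :: zeta4 where "e4 = (0, 0, 0, 1)"

definition zeta0 :: "real \<Rightarrow> zeta4" where "zeta0 Sg = (0, Sg, 0, 0)"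

(* lambda, with Vgg = V_{Sigma Sigma}, Cgg = C_{Sigma Sigma} *)
definition lamf :: "zeta4 \<Rightarrow> zeta4 \<Rightarrow> zeta4 \<Rightarrow> real \<Rightarrow> real \<Rightarrow> real" where
  "lamf psis c v Cgg Vgg =
     (if Vgg - (ipsi psis c v / ipsi psis c c) * Cgg \<ge> 0 then ipsi psis c v / ipsi psis c c
      else (ipsi psis c v - Cgg * Vgg * z4 psis / 4) / (ipsi psis c c - Cgg\<^sup>2 * z4 psis / 4))"

definition lam_at where
  "lam_at C V bet gam psis t S A M Sg =
     lamf psis (cvec C t S Sg) (vvec bet gam V t S A M Sg) (DC 4 (DC 4 C) t S Sg) (D5 4 (D5 4 V) t S A M Sg)"

definition mu_at where
  "mu_at C V bet gam psis t S A M Sg =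
     negpart (D5 4 (D5 4 V) t S A M Sg - lam_at C V bet gam psis t S A M Sg * DC 4 (DC 4 C) t S Sg) / 2"

definition ztilde where
  "ztilde C V bet gam psis t S A M Sg =
     Psi_mul psis (vvec bet gam V t S A M Sg - lam_at C V bet gam psis t S A M Sg *\<^sub>R cvec C t S Sg
                   + mu_at C V bet gam psis t S A M Sg *\<^sub>R e4)"

definition zeta_psi where
  "zeta_psi C V bet gam psis Sgl Sgu psi t S A M Sg =
     zeta0 Sg + (if Sgl < Sg \<and> Sg < Sgu then psi *\<^sub>R ztilde C V bet gam psis t S A M Sg else 0)"

definition gtilde where
  "gtilde C V bet gam psis t S A M Sg = inner (vvec bet gam V t S A M Sg) (ztilde C V bet gam psis t S A M Sg)"

definition bC :: "(real \<Rightarrow> real \<Rightarrow> real \<Rightarrow> real) \<Rightarrow> real \<Rightarrow> real \<Rightarrow> real \<Rightarrow> zeta4 \<Rightarrow> real" where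
  "bC C t S Sg z = z1 z * DC 4 C t S Sg + S\<^sup>2 * DC 1 (DC 1 C) t S Sg * ((z2 z)\<^sup>2 - Sg\<^sup>2) / 2
                 + z2 z * z3 z * S * DC 4 (DC 1 C) t S Sg + ((z3 z)\<^sup>2 + z4 z) * DC 4 (DC 4 C) t S Sg / 2"

definition bV where
  "bV bet gam V t S A M Sg z = z1 z * D5 4 V t S A M Sg
     + (bet t S A M * D5 2 V t S A M Sg + S\<^sup>2 * GammaV gam V t S A M Sg) * ((z2 z)\<^sup>2 - Sg\<^sup>2) / 2
     + z2 z * z3 z * S * dDeltaV gam V t S A M Sg + ((z3 z)\<^sup>2 + z4 z) * D5 4 (D5 4 V) t S A M Sg / 2"

definition fpen :: "zeta4 \<Rightarrow> real \<Rightarrow> zeta4 \<Rightarrow> real" where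
  "fpen psis Sg z = ((z1 z - z1 (zeta0 Sg))\<^sup>2 / z1 psis + (z2 z - z2 (zeta0 Sg))\<^sup>2 / z2 psis
                   + (z3 z - z3 (zeta0 Sg))\<^sup>2 / z3 psis + (z4 z - z4 (zeta0 Sg))\<^sup>2 / z4 psis) / 2"

definition wpsi :: "(real \<Rightarrow> real) \<Rightarrow> fun5 \<Rightarrow> real \<Rightarrow> fun6" where
  "wpsi U wt psi = (\<lambda>t S A M Sg y. U y - deriv U y * wt t S A M Sg * psi)"

definition Hpsi where
  "Hpsi U wt psi C V alp bet gam psis t S A M Sg y th ph z =
    (let w = wpsi U wt psi;
         wSg = pd 4 w t S A M Sg y; wA = pd 2 w t S A M Sg y; wY = pd 5 w t S A M Sg y;
         wSS = pd 1 (pd 1 w) t S A M Sg y; wSA = pd 2 (pd 1 w) t S A M Sg y;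
         wAA = pd 2 (pd 2 w) t S A M Sg y; wSSg = pd 4 (pd 1 w) t S A M Sg y;
         wASg = pd 4 (pd 2 w) t S A M Sg y; wSgSg = pd 4 (pd 4 w) t S A M Sg y;
         wSY = pd 5 (pd 1 w) t S A M Sg y; wAY = pd 5 (pd 2 w) t S A M Sg y;
         wSgY = pd 5 (pd 4 w) t S A M Sg y; wYY = pd 5 (pd 5 w) t S A M Sg y;
         g = gam t S A M;
         nu = z1 z; sig = z2 z; eta = z3 z; xi = z4 z;
         Dth = th - (DeltaV gam V t S A M Sg - ph * DC 1 C t S Sg);
         Dph = ph * DC 4 C t S Sg - D5 4 V t S A M Sg
     in (1 / psi) * deriv U y * fpen psis Sg z + nu * wSg
        + (alp t S A M + bet t S A M * sig\<^sup>2 / 2) * wA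
        - bV bet gam V t S A M Sg z * wY
        + sig\<^sup>2 * S\<^sup>2 * (wSS + 2 * g * wSA + g\<^sup>2 * wAA) / 2
        + sig * S * eta * (wSSg + g * wASg)
        + (eta\<^sup>2 + xi) * wSgSg / 2
        + sig\<^sup>2 * S\<^sup>2 * Dth * (wSY + g * wAY)
        + sig * S * eta * Dph * (wSY + g * wAY)
        + sig * S * eta * Dth * wSgY
        + Dph * (eta\<^sup>2 + xi) * wSgY
        + sig\<^sup>2 * S\<^sup>2 * Dth\<^sup>2 * wYY / 2
        + (eta\<^sup>2 + xi) * Dph\<^sup>2 * wYY / 2
        + sig * S * eta * Dth * Dph * wYY)"

definition OmegaS :: "real \<Rightarrow> real \<times> real \<times> real \<Rightarrow> path set" where
  "OmegaS T x0 = {\<omega>. continuous_on {0..T} \<omega> \<and> \<omega> 0 = x0 \<and> (\<forall>t. \<omega> t = \<omega> (max 0 (min t T)))}"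

(* Borel sigma-algebra of the uniform topology = sigma-algebra generated by the coordinates *)
definition OmegaM :: "real \<Rightarrow> real \<times> real \<times> real \<Rightarrow> path measure" where
  "OmegaM T x0 = sigma (OmegaS T x0)
     {{\<omega> \<in> OmegaS T x0. \<omega> u \<in> B} | u B. u \<in> {0..T} \<and> B \<in> sets borel}"

definition filt :: "real \<Rightarrow> real \<times> real \<times> real \<Rightarrow> real \<Rightarrow> path measure" where
  "filt T x0 t = sigma (OmegaS T x0)
     {{\<omega> \<in> OmegaS T x0. \<omega> u \<in> B} | u B. u \<in> {0..t} \<and> B \<in> sets borel}"

definition Sp :: "real \<Rightarrow> path \<Rightarrow> real" where "Sp t \<omega> = fst (\<omega> t)"
definition Sgp :: "real \<Rightarrow> path \<Rightarrow> real" where "Sgp t \<omega> = fst (snd (\<omega> t))"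
definition Ap :: "real \<Rightarrow> path \<Rightarrow> real" where "Ap t \<omega> = snd (snd (\<omega> t))"
definition Mp :: "real \<Rightarrow> path \<Rightarrow> real" where "Mp t \<omega> = Sup ((\<lambda>u. Sp u \<omega>) ` {0..max 0 t})"

definition model_measure :: "real \<Rightarrow> real \<times> real \<times> real \<Rightarrow> path measure \<Rightarrow> bool" where
  "model_measure T x0 P \<longleftrightarrow> prob_space P \<and> sets P = sets (OmegaM T x0)"

definition progressive :: "real \<Rightarrow> real \<times> real \<times> real \<Rightarrow> (real \<Rightarrow> path \<Rightarrow> real) \<Rightarrow> bool" where
  "progressive T x0 X \<longleftrightarrow> (\<forall>t\<in>{0..T}.
     (\<lambda>(u,\<omega>). X u \<omega>) \<in> borel_measurable (restrict_space borel {0..t} \<Otimes>\<^sub>M filt T x0 t))"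

definition fmartingale :: "real \<Rightarrow> real \<times> real \<times> real \<Rightarrow> path measure \<Rightarrow> (real \<Rightarrow> path \<Rightarrow> real) \<Rightarrow> bool" where
  "fmartingale T x0 P X \<longleftrightarrow>
     (\<forall>t\<in>{0..T}. X t \<in> borel_measurable (filt T x0 t) \<and> integrable P (X t)) \<and>
     (\<forall>s t B. 0 \<le> s \<longrightarrow> s \<le> t \<longrightarrow> t \<le> T \<longrightarrow> B \<in> sets (filt T x0 s) \<longrightarrow>
        set_lebesgue_integral P B (X t) = set_lebesgue_integral P B (X s))"

definition stopping_time :: "real \<Rightarrow> real \<times> real \<times> real \<Rightarrow> (path \<Rightarrow> real) \<Rightarrow> bool" where
  "stopping_time T x0 \<tau> \<longleftrightarrow> (\<forall>t\<in>{0..T}. {\<omega> \<in> OmegaS T x0. \<tau> \<omega> \<le> t} \<in> sets (filt T x0 t))"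

definition cont_local_mart :: "real \<Rightarrow> real \<times> real \<times> real \<Rightarrow> path measure \<Rightarrow> (real \<Rightarrow> path \<Rightarrow> real) \<Rightarrow> bool" where
  "cont_local_mart T x0 P X \<longleftrightarrow>
     (AE \<omega> in P. continuous_on {0..T} (\<lambda>t. X t \<omega>)) \<and>
     (\<exists>\<tau>::nat \<Rightarrow> path \<Rightarrow> real. (\<forall>n. stopping_time T x0 (\<tau> n)) \<and> (\<forall>n \<omega>. \<tau> n \<omega> \<le> \<tau> (Suc n) \<omega>) \<and>
        (AE \<omega> in P. \<exists>n. T \<le> \<tau> n \<omega>) \<and>
        (\<forall>n. fmartingale T x0 P (\<lambda>t \<omega>. X (min t (\<tau> n \<omega>)) \<omega>)))"

definition time_int :: "(real \<Rightarrow> path \<Rightarrow> real) \<Rightarrow> real \<Rightarrow> path \<Rightarrow> real" where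
  "time_int k t \<omega> = set_lebesgue_integral lborel {0..t} (\<lambda>u. k u \<omega>)"

definition integ_AE :: "real \<Rightarrow> path measure \<Rightarrow> (real \<Rightarrow> path \<Rightarrow> real) \<Rightarrow> bool" where
  "integ_AE T P k \<longleftrightarrow> (AE \<omega> in P. set_integrable lborel {0..T} (\<lambda>u. k u \<omega>))"

(* for continuous local martingales X, Y: d<X,Y>_t = k_t dt, characterised by
   X Y - int_0^. k dt being a continuous local martingale *)
definition qcov :: "real \<Rightarrow> real \<times> real \<times> real \<Rightarrow> path measure \<Rightarrow> (real \<Rightarrow> path \<Rightarrow> real)
                     \<Rightarrow> (real \<Rightarrow> path \<Rightarrow> real) \<Rightarrow> (real \<Rightarrow> path \<Rightarrow> real) \<Rightarrow> bool" where
  "qcov T x0 P X Y k \<longleftrightarrow> integ_AE T P k \<and>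
     cont_local_mart T x0 P (\<lambda>t \<omega>. X t \<omega> * Y t \<omega> - time_int k t \<omega>)"

definition AEdt :: "real \<Rightarrow> path measure \<Rightarrow> (real \<Rightarrow> path \<Rightarrow> bool) \<Rightarrow> bool" where
  "AEdt T P Q \<longleftrightarrow> (AE (t,\<omega>) in (restrict_space lborel {0..T} \<Otimes>\<^sub>M P). Q t \<omega>)"

definition Sgt :: "(real \<Rightarrow> path \<Rightarrow> zeta4) \<Rightarrow> real \<Rightarrow> path \<Rightarrow> real" where
  "Sgt zeta t \<omega> = Sgp t \<omega> - time_int (\<lambda>u \<omega>. z1 (zeta u \<omega>)) t \<omega>"

definition in_P00 :: "real \<Rightarrow> real \<times> real \<times> real \<Rightarrow> (real \<Rightarrow> real \<Rightarrow> real \<Rightarrow> real)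
                       \<Rightarrow> path measure \<Rightarrow> (real \<Rightarrow> path \<Rightarrow> zeta4) \<Rightarrow> bool" where
  "in_P00 T x0 C P zeta \<longleftrightarrow> model_measure T x0 P \<and>
     progressive T x0 (\<lambda>t \<omega>. z1 (zeta t \<omega>)) \<and> progressive T x0 (\<lambda>t \<omega>. z2 (zeta t \<omega>)) \<and>
     progressive T x0 (\<lambda>t \<omega>. z3 (zeta t \<omega>)) \<and> progressive T x0 (\<lambda>t \<omega>. z4 (zeta t \<omega>)) \<and>
     integ_AE T P (\<lambda>t \<omega>. z1 (zeta t \<omega>)) \<and>
     cont_local_mart T x0 P Sp \<and> cont_local_mart T x0 P (Sgt zeta) \<and>
     qcov T x0 P Sp Sp (\<lambda>t \<omega>. (Sp t \<omega>)\<^sup>2 * (z2 (zeta t \<omega>))\<^sup>2) \<and>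
     qcov T x0 P (Sgt zeta) (Sgt zeta) (\<lambda>t \<omega>. (z3 (zeta t \<omega>))\<^sup>2 + z4 (zeta t \<omega>)) \<and>
     qcov T x0 P Sp (Sgt zeta) (\<lambda>t \<omega>. Sp t \<omega> * z2 (zeta t \<omega>) * z3 (zeta t \<omega>)) \<and>
     (AE \<omega> in P. \<forall>t\<in>{0..T}. 0 < Sp t \<omega> \<and> 0 < Sgp t \<omega>) \<and>
     AEdt T P (\<lambda>t \<omega>. 0 \<le> z4 (zeta t \<omega>) \<and> bC C t (Sp t \<omega>) (Sgp t \<omega>) (zeta t \<omega>) = 0)"

definition stj_int :: "(real \<Rightarrow> path \<Rightarrow> real) \<Rightarrow> real \<Rightarrow> path \<Rightarrow> real" where
  "stj_int k t \<omega> = set_lebesgue_integral (interval_measure (\<lambda>u. Mp u \<omega>)) {0<..t} (\<lambda>u. k u \<omega>)"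

definition in_P0 where
  "in_P0 T x0 C alp bet gam del P zeta \<longleftrightarrow> in_P00 T x0 C P zeta \<and>
     (let drift = (\<lambda>t \<omega>. alp t (Sp t \<omega>) (Ap t \<omega>) (Mp t \<omega>)
                         + (z2 (zeta t \<omega>))\<^sup>2 * bet t (Sp t \<omega>) (Ap t \<omega>) (Mp t \<omega>) / 2);
          dl = (\<lambda>t \<omega>. del t (Sp t \<omega>) (Ap t \<omega>) (Mp t \<omega>));
          gm = (\<lambda>t \<omega>. gam t (Sp t \<omega>) (Ap t \<omega>) (Mp t \<omega>));
          N = (\<lambda>t \<omega>. Ap t \<omega> - Ap 0 \<omega> - time_int drift t \<omega> - stj_int dl t \<omega>)
      in integ_AE T P drift \<and>
         (AE \<omega> in P. set_integrable (interval_measure (\<lambda>u. Mp u \<omega>)) {0<..T} (\<lambda>u. dl u \<omega>)) \<and>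
         cont_local_mart T x0 P N \<and>
         qcov T x0 P N N (\<lambda>t \<omega>. (gm t \<omega>)\<^sup>2 * (Sp t \<omega>)\<^sup>2 * (z2 (zeta t \<omega>))\<^sup>2) \<and>
         qcov T x0 P N Sp (\<lambda>t \<omega>. gm t \<omega> * (Sp t \<omega>)\<^sup>2 * (z2 (zeta t \<omega>))\<^sup>2))"

definition strategy :: "real \<Rightarrow> real \<times> real \<times> real \<Rightarrow> (real \<Rightarrow> path \<Rightarrow> real \<times> real) \<Rightarrow> bool" where
  "strategy T x0 ups \<longleftrightarrow>
     progressive T x0 (\<lambda>t \<omega>. fst (ups t \<omega>)) \<and> progressive T x0 (\<lambda>t \<omega>. snd (ups t \<omega>)) \<and>
     (\<exists>\<tau>::nat \<Rightarrow> path \<Rightarrow> real. (\<forall>n. stopping_time T x0 (\<tau> n)) \<and> (\<forall>n \<omega>. \<tau> n \<omega> \<le> \<tau> (Suc n) \<omega>) \<and>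
        (\<forall>\<omega>\<in>OmegaS T x0. \<exists>n. T \<le> \<tau> n \<omega>) \<and>
        (\<forall>n. \<exists>c. \<forall>\<omega>\<in>OmegaS T x0. \<forall>t\<in>{0..T}. t \<le> \<tau> n \<omega> \<longrightarrow> norm (ups t \<omega>) \<le> c))"

(* I = int theta dS + int phi dC, where under P (b^C = 0) dC = C_S dS + C_Sigma d(Sigma - int nu);
   I is characterised as the continuous local martingale started at 0 with the
   corresponding covariations with S, Sigma - int nu and itself *)
definition gains where
  "gains T x0 C P zeta ups I \<longleftrightarrow>
     (let H1 = (\<lambda>t \<omega>. fst (ups t \<omega>) + snd (ups t \<omega>) * DC 1 C t (Sp t \<omega>) (Sgp t \<omega>));
          H2 = (\<lambda>t \<omega>. snd (ups t \<omega>) * DC 4 C t (Sp t \<omega>) (Sgp t \<omega>));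
          aSS = (\<lambda>t \<omega>. (Sp t \<omega>)\<^sup>2 * (z2 (zeta t \<omega>))\<^sup>2);
          aSX = (\<lambda>t \<omega>. Sp t \<omega> * z2 (zeta t \<omega>) * z3 (zeta t \<omega>));
          aXX = (\<lambda>t \<omega>. (z3 (zeta t \<omega>))\<^sup>2 + z4 (zeta t \<omega>))
      in (AE \<omega> in P. I 0 \<omega> = 0) \<and> cont_local_mart T x0 P I \<and>
         qcov T x0 P I Sp (\<lambda>t \<omega>. H1 t \<omega> * aSS t \<omega> + H2 t \<omega> * aSX t \<omega>) \<and>
         qcov T x0 P I (Sgt zeta) (\<lambda>t \<omega>. H1 t \<omega> * aSX t \<omega> + H2 t \<omega> * aXX t \<omega>) \<and>
         qcov T x0 P I I (\<lambda>t \<omega>. (H1 t \<omega>)\<^sup>2 * aSS t \<omega> + 2 * H1 t \<omega> * H2 t \<omega> * aSX t \<omega>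
                               + (H2 t \<omega>)\<^sup>2 * aXX t \<omega>))"

definition Lp_P :: "real \<Rightarrow> path measure set \<Rightarrow> nat \<Rightarrow> fun5 \<Rightarrow> bool" where
  "Lp_P T Ps p K \<longleftrightarrow> unc5 K \<in> borel_measurable (restrict_space borel (D0set T)) \<and>
     (\<exists>B::real. \<forall>P\<in>Ps.
        (\<integral>\<^sup>+\<omega>. (\<integral>\<^sup>+t\<in>{0<..<T}. ennreal (\<bar>K t (Sp t \<omega>) (Ap t \<omega>) (Mp t \<omega>) (Sgp t \<omega>)\<bar> ^ p) \<partial>lborel) \<partial>P)
          \<le> ennreal B)"

definition candidate_family where
  "candidate_family T Ps zeta C V bet gam psis Sgl Sgu Pf psi0 \<longleftrightarrow>
     psi0 \<in> {0<..<1} \<and> (\<forall>psi\<in>{0<..<psi0}. Pf psi \<in> Ps) \<and>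
     (\<exists>K0. Lp_P T Ps 4 K0 \<and>
        (\<forall>psi\<in>{0<..<psi0}. AEdt T (Pf psi) (\<lambda>t \<omega>.
           norm (zeta (Pf psi) t \<omega> - zeta_psi C V bet gam psis Sgl Sgu psi t (Sp t \<omega>) (Ap t \<omega>) (Mp t \<omega>) (Sgp t \<omega>))
             \<le> K0 t (Sp t \<omega>) (Ap t \<omega>) (Mp t \<omega>) (Sgp t \<omega>) * psi\<^sup>2)))"

definition reference_model where
  "reference_model T P zeta \<longleftrightarrow> AEdt T P (\<lambda>t \<omega>. zeta P t \<omega> = zeta0 (Sgp t \<omega>))"

definition assmA_a where
  "assmA_a T x0 C V Y0 Ys Ps zeta \<longleftrightarrow>
     (\<exists>KY::real. \<forall>ups\<in>Ys. \<forall>P\<in>Ps. \<forall>I. gains T x0 C P (zeta P) ups I \<longrightarrow>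
        AEdt T P (\<lambda>t \<omega>. Y0 + V 0 (fst x0) (snd (snd x0)) (fst x0) (fst (snd x0)) + I t \<omega>
                           - V t (Sp t \<omega>) (Ap t \<omega>) (Mp t \<omega>) (Sgp t \<omega>) > - KY))"

definition assmA_b where
  "assmA_b T C V bet gam psis Sgl Sgu Ps zeta nul nuu sgl sgu etl etu xiu \<longleftrightarrow>
     (\<exists>Pf psi0. candidate_family T Ps zeta C V bet gam psis Sgl Sgu Pf psi0) \<and>
     (\<exists>P\<in>Ps. reference_model T P zeta) \<and>
     nul < 0 \<and> 0 < nuu \<and> 0 < sgl \<and> sgl < Sgl \<and> Sgu < sgu \<and> etl < 0 \<and> 0 < etu \<and> 0 < xiu \<and>
     (\<forall>P\<in>Ps. AEdt T P (\<lambda>t \<omega>. zeta P t \<omega> \<in> Zset nul nuu sgl sgu etl etu xiu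
                              \<and> Sgl \<le> Sgp t \<omega> \<and> Sgp t \<omega> \<le> Sgu))"

definition assmA_c where
  "assmA_c T TC Cpay C Sgl Sgu Ps KC \<longleftrightarrow> TC \<ge> T \<and>
     classical_reg {0,1,4} {1,4} (liftC C) (DCset TC) \<and>
     continuous_on {(t,S,Sg). 0 \<le> t \<and> t \<le> TC \<and> 0 \<le> S \<and> 0 \<le> Sg} (\<lambda>(t,S,Sg). C t S Sg) \<and>
     (\<forall>t S Sg. 0 < t \<and> t < TC \<and> 0 < S \<and> Sgl \<le> Sg \<and> Sg \<le> Sgu \<longrightarrow>
        DC 0 C t S Sg + Sg\<^sup>2 * S\<^sup>2 * DC 1 (DC 1 C) t S Sg / 2 = 0) \<and>
     (\<forall>S Sg. 0 < S \<and> Sgl \<le> Sg \<and> Sg \<le> Sgu \<longrightarrow> C TC S Sg = Cpay S) \<and>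
     Lp_P T Ps 2 KC \<and>
     (\<forall>(t,S,A,M,Sg)\<in>Dset T Sgl Sgu. DC 4 C t S Sg \<noteq> 0 \<and>
        \<bar>DC 4 (DC 4 C) t S Sg\<bar> \<le> KC t S A M Sg * (\<bar>DC 4 C t S Sg\<bar> + \<bar>S\<^sup>2 * DC 1 (DC 1 C) t S Sg\<bar>
                                                     + \<bar>S * DC 4 (DC 1 C) t S Sg\<bar>))"

definition assmA_d where
  "assmA_d T Vpay V alp bet gam del Sgl Sgu KV \<longleftrightarrow>
     C12212 V (D0set T) \<and> continuous_on (closure (D0set T)) (unc5 V) \<and>
     (\<forall>(t,S,A,M,Sg)\<in>Dset T Sgl Sgu.
        D5 0 V t S A M Sg + (alp t S A M + bet t S A M * Sg\<^sup>2 / 2) * D5 2 V t S A M Sg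
        + Sg\<^sup>2 * S\<^sup>2 * GammaV gam V t S A M Sg / 2 = 0) \<and>
     (\<forall>(t,S,A,M,Sg)\<in>Dset T Sgl Sgu. S \<ge> M \<longrightarrow> del t S A M * D5 2 V t S A M Sg + D5 3 V t S A M Sg = 0) \<and>
     (\<forall>S A M Sg. 0 < S \<and> 0 < M \<and> Sgl \<le> Sg \<and> Sg \<le> Sgu \<longrightarrow> V T S A M Sg = Vpay S A M) \<and>
     (\<forall>(t,S,A,M,Sg)\<in>Dset T Sgl Sgu.
        \<bar>D5 4 V t S A M Sg\<bar> \<le> KV \<and>
        \<bar>bet t S A M * D5 2 V t S A M Sg + S\<^sup>2 * GammaV gam V t S A M Sg\<bar> \<le> KV \<and>
        \<bar>S * dDeltaV gam V t S A M Sg\<bar> \<le> KV \<and>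
        \<bar>D5 4 (D5 4 V) t S A M Sg\<bar> \<le> KV)"

definition assmA_e where
  "assmA_e T C V wt alp bet gam del psis Sgl Sgu Ps Kw \<longleftrightarrow>
     C12212 wt (D0set T) \<and> continuous_on (closure (D0set T)) (unc5 wt) \<and>
     (\<forall>(t,S,A,M,Sg)\<in>Dset T Sgl Sgu.
        D5 0 wt t S A M Sg + (alp t S A M + bet t S A M * Sg\<^sup>2 / 2) * D5 2 wt t S A M Sg
        + Sg\<^sup>2 * S\<^sup>2 * GammaV gam wt t S A M Sg / 2
        + gtilde C V bet gam psis t S A M Sg / 2 = 0) \<and>
     (\<forall>(t,S,A,M,Sg)\<in>Dset T Sgl Sgu. S \<ge> M \<longrightarrow> del t S A M * D5 2 wt t S A M Sg + D5 3 wt t S A M Sg = 0) \<and>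
     (\<forall>S A M Sg. 0 < S \<and> 0 < M \<and> Sgl \<le> Sg \<and> Sg \<le> Sgu \<longrightarrow> wt T S A M Sg = 0) \<and>
     (\<forall>(t,S,A,M,Sg)\<in>Dset T Sgl Sgu. 0 \<le> wt t S A M Sg \<and> wt t S A M Sg \<le> Kw) \<and>
     Lp_P T Ps 4 (D5 4 wt) \<and>
     Lp_P T Ps 4 (\<lambda>t S A M Sg. S * DeltaV gam wt t S A M Sg) \<and>
     Lp_P T Ps 4 (\<lambda>t S A M Sg. bet t S A M * D5 2 wt t S A M Sg + S\<^sup>2 * GammaV gam wt t S A M Sg) \<and>
     Lp_P T Ps 4 (\<lambda>t S A M Sg. S * dDeltaV gam wt t S A M Sg) \<and>
     Lp_P T Ps 4 (D5 4 (D5 4 wt))"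

definition assmA_f :: "(real \<Rightarrow> real) \<Rightarrow> bool" where
  "assmA_f U \<longleftrightarrow> C3 U \<and> (\<forall>y. deriv U y > 0) \<and> (\<forall>y. deriv (deriv U) y < 0) \<and>
     antimono (\<lambda>y. - deriv (deriv U) y / deriv U y)"

definition delta_vega where
  "delta_vega C V gam = (\<lambda>t \<omega>.
     (DeltaV gam V t (Sp t \<omega>) (Ap t \<omega>) (Mp t \<omega>) (Sgp t \<omega>)
        - D5 4 V t (Sp t \<omega>) (Ap t \<omega>) (Mp t \<omega>) (Sgp t \<omega>) / DC 4 C t (Sp t \<omega>) (Sgp t \<omega>)
          * DC 1 C t (Sp t \<omega>) (Sgp t \<omega>),
      D5 4 V t (Sp t \<omega>) (Ap t \<omega>) (Mp t \<omega>) (Sgp t \<omega>) / DC 4 C t (Sp t \<omega>) (Sgp t \<omega>)))"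

end

theory Submission
  imports Defs
begin

text \<open>Write \<open>w\<^sup>\<psi> = U(y) - U'(y) w\<^sup>~ \<psi>\<close> with \<open>w\<^sup>~\<close> the cash equivalent. Substituting the cash-equivalent
  PDE for \<open>w\<^sup>~\<^sub>t\<close>, \<open>w\<^sup>\<psi>\<^sub>t + H\<^sup>\<psi>\<close> becomes \<open>U'(y)\<close> times the penalty term
  \<open>\<psi> v\<^sup>T\<zeta>\<^sup>~/2 + f(\<Sigma>,\<zeta>)/\<psi> - v\<^sup>T(\<zeta> - \<zeta>\<^sup>0)\<close>, plus terms that each carry a factor \<open>\<psi>\<close> times a
  deviation \<open>\<zeta> - \<zeta>\<^sup>0\<close>, plus the hedging terms. As \<open>\<zeta>\<close> is within \<open>K\<psi>\<^sup>2\<close> of \<open>\<zeta>\<^sup>\<psi>\<close>, which is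
  \<open>\<zeta>\<^sup>0 + \<psi>\<zeta>\<^sup>~\<close> in the interior and \<open>\<zeta>\<^sup>0\<close> on the boundary, every deviation is \<open>O(\<psi>)\<close>. In the
  interior the \<open>O(\<psi>)\<close> part of the penalty term vanishes by complementary slackness of the multipliers
  \<open>\<lambda>\<close>, \<open>\<mu>\<close>; on the boundary it is only \<open>O(\<psi>)\<close>. The hedging terms form a concave quadratic whose
  supremum is \<open>O(\<psi>\<^sup>2)\<close> because \<open>w\<^sup>\<psi>\<^sub>Y\<^sub>Y \<le> U''(y) < 0\<close>; this uses \<open>U''' \<ge> 0\<close>, a consequence of
  decreasing absolute risk aversion. Each term is then bounded by \<open>(U' - U'')\<close> times \<open>\<psi>\<^sup>2\<close> (interior)
  or \<open>\<psi>\<close> (boundary) times a constant times \<open>1 + K\<^sup>2 +\<close> the squared Greeks of \<open>w\<^sup>~\<close>, which lies in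
  \<open>L\<^sup>2\<close> because \<open>K\<close> and those Greeks lie in \<open>L\<^sup>4\<close>.\<close>

section \<open>Partial derivatives of \<open>w\<^sup>\<psi>\<close>\<close>

lemma pd_eq_deriv:
  "pd 0 f t S A M Sg y = deriv (\<lambda>z. f z S A M Sg y) t"
  "pd 1 f t S A M Sg y = deriv (\<lambda>z. f t z A M Sg y) S"
  "pd 2 f t S A M Sg y = deriv (\<lambda>z. f t S z M Sg y) A"
  "pd 4 f t S A M Sg y = deriv (\<lambda>z. f t S A M z y) Sg"
  "pd 5 f t S A M Sg y = deriv (\<lambda>z. f t S A M Sg z) y"
  by (simp_all add: pd_def app6_def)

lemma D5_eq_deriv:
  "D5 0 f t S A M Sg = deriv (\<lambda>z. f z S A M Sg) t"
  "D5 1 f t S A M Sg = deriv (\<lambda>z. f t z A M Sg) S"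
  "D5 2 f t S A M Sg = deriv (\<lambda>z. f t S z M Sg) A"
  "D5 4 f t S A M Sg = deriv (\<lambda>z. f t S A M z) Sg"
  by (simp_all add: D5_def pd_def app6_def lift5_def)

lemma pdiff_at_lift5_iff:
  "pdiff_at 0 (lift5 f) (pts5 (t,S,A,M,Sg)) \<longleftrightarrow> (\<lambda>z. f z S A M Sg) field_differentiable at t"
  "pdiff_at 1 (lift5 f) (pts5 (t,S,A,M,Sg)) \<longleftrightarrow> (\<lambda>z. f t z A M Sg) field_differentiable at S"
  "pdiff_at 2 (lift5 f) (pts5 (t,S,A,M,Sg)) \<longleftrightarrow> (\<lambda>z. f t S z M Sg) field_differentiable at A"
  "pdiff_at 4 (lift5 f) (pts5 (t,S,A,M,Sg)) \<longleftrightarrow> (\<lambda>z. f t S A M z) field_differentiable at Sg"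
  by (simp_all add: pdiff_at_def pts5_def app6_def lift5_def)

lemma C12212_differentiable:
  assumes "C12212 f D" "(t,S,A,M,Sg) \<in> D"
  shows "(\<lambda>z. f z S A M Sg) field_differentiable at t"
    "(\<lambda>z. f t z A M Sg) field_differentiable at S"
    "(\<lambda>z. f t S z M Sg) field_differentiable at A"
    "(\<lambda>z. f t S A M z) field_differentiable at Sg"
  using assms unfolding C12212_def classical_reg_def
  by (metis insertCI pdiff_at_lift5_iff)+

lemma C12212_differentiable2:
  assumes "C12212 f D" "(t,S,A,M,Sg) \<in> D" "j \<in> {1,2,4}"
  shows "(\<lambda>z. D5 j f t z A M Sg) field_differentiable at S"
    "(\<lambda>z. D5 j f t S z M Sg) field_differentiable at A"
    "(\<lambda>z. D5 j f t S A M z) field_differentiable at Sg"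
  using assms unfolding C12212_def classical_reg_def
  by (metis insertCI pdiff_at_lift5_iff)+

lemma deriv_const_minus_scaled:
  fixes g :: "real \<Rightarrow> real"
  assumes "g field_differentiable (at x)"
  shows "deriv (\<lambda>z. a - b * g z * c) x = -(b * c) * deriv g x"
proof -
  have "(g has_field_derivative deriv g x) (at x)"
    using assms by (simp add: field_differentiable_derivI)
  then have "((\<lambda>z. a - b * g z * c) has_field_derivative (-(b * c) * deriv g x)) (at x)"
    by (auto intro!: derivative_eq_intros)
  then show ?thesis by (rule DERIV_imp_deriv)
qed

lemma pd_wpsi:
  assumes "C12212 wt D" "(t,S,A,M,Sg) \<in> D"
  shows "pd 0 (wpsi U wt p) t S A M Sg y = -(deriv U y * p) * D5 0 wt t S A M Sg"
    "pd 1 (wpsi U wt p) t S A M Sg y = -(deriv U y * p) * D5 1 wt t S A M Sg"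
    "pd 2 (wpsi U wt p) t S A M Sg y = -(deriv U y * p) * D5 2 wt t S A M Sg"
    "pd 4 (wpsi U wt p) t S A M Sg y = -(deriv U y * p) * D5 4 wt t S A M Sg"
  using C12212_differentiable[OF assms] unfolding pd_eq_deriv D5_eq_deriv wpsi_def
  by (simp_all add: deriv_const_minus_scaled)

lemma pd_wpsi_y:
  assumes "C3 U"
  shows "pd 5 (wpsi U wt p) t S A M Sg y = deriv U y - deriv (deriv U) y * wt t S A M Sg * p"
proof -
  have "((\<lambda>z. U z - deriv U z * wt t S A M Sg * p) has_field_derivative
        (deriv U y - deriv (deriv U) y * wt t S A M Sg * p)) (at y)"
    using assms unfolding C3_def
    by (auto intro!: derivative_eq_intros simp: field_differentiable_derivI)
  then show ?thesis by (simp add: pd_eq_deriv wpsi_def DERIV_imp_deriv)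
qed

lemma pd_wpsi_yy:
  assumes "C3 U"
  shows "pd 5 (pd 5 (wpsi U wt p)) t S A M Sg y
     = deriv (deriv U) y - deriv (deriv (deriv U)) y * wt t S A M Sg * p"
proof -
  have "((\<lambda>z. deriv U z - deriv (deriv U) z * wt t S A M Sg * p) has_field_derivative
        (deriv (deriv U) y - deriv (deriv (deriv U)) y * wt t S A M Sg * p)) (at y)"
    using assms unfolding C3_def
    by (auto intro!: derivative_eq_intros simp: field_differentiable_derivI)
  moreover have "pd 5 (wpsi U wt p) t S A M Sg = (\<lambda>z. deriv U z - deriv (deriv U) z * wt t S A M Sg * p)"
    using pd_wpsi_y[OF assms] by blast
  ultimately show ?thesis unfolding pd_eq_deriv by (simp add: DERIV_imp_deriv)
qed

lemma pd_wpsi_y_space: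
  assumes "C3 U" "C12212 wt D" "(t,S,A,M,Sg) \<in> D" "k \<in> {1,2,4}"
  shows "pd 5 (pd k (wpsi U wt p)) t S A M Sg y = -(deriv (deriv U) y * p) * D5 k wt t S A M Sg"
proof -
  have "pd k (wpsi U wt p) t S A M Sg = (\<lambda>z. -(deriv U z * p) * D5 k wt t S A M Sg)"
    using pd_wpsi[OF assms(2,3)] assms(4) by auto
  moreover have "(deriv U has_field_derivative deriv (deriv U) y) (at y)"
    using assms(1) unfolding C3_def by (simp add: field_differentiable_derivI)
  then have "((\<lambda>z. -(deriv U z * p) * D5 k wt t S A M Sg) has_field_derivative
        (-(deriv (deriv U) y * p) * D5 k wt t S A M Sg)) (at y)"
    by (auto intro!: derivative_eq_intros)
  ultimately show ?thesis unfolding pd_eq_deriv by (simp add: DERIV_imp_deriv)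
qed

text \<open>The first space derivatives of \<open>w\<^sup>\<psi>\<close> are \<open>-U'(y)\<psi>\<close> times those of \<open>w\<^sup>~\<close> only on the open
  set \<open>D\<^sup>0\<close>, which suffices for differentiating once more.\<close>

lemma pd_wpsi_space2:
  assumes reg: "C12212 wt (D0set T)" and pt: "(t,S,A,M,Sg) \<in> D0set T" and k: "k \<in> {1,2,4}"
  shows "pd 1 (pd k (wpsi U wt p)) t S A M Sg y = -(deriv U y * p) * D5 1 (D5 k wt) t S A M Sg"
    "pd 2 (pd k (wpsi U wt p)) t S A M Sg y = -(deriv U y * p) * D5 2 (D5 k wt) t S A M Sg"
    "pd 4 (pd k (wpsi U wt p)) t S A M Sg y = -(deriv U y * p) * D5 4 (D5 k wt) t S A M Sg"
proof -
  let ?c = "-(deriv U y * p)"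
  have first: "pd k (wpsi U wt p) t' S' A' M' Sg' y = ?c * D5 k wt t' S' A' M' Sg'"
    if "(t',S',A',M',Sg') \<in> D0set T" for t' S' A' M' Sg'
    using pd_wpsi[OF reg that] k by auto
  have diff: "(\<lambda>z. D5 k wt t z A M Sg) field_differentiable at S"
    "(\<lambda>z. D5 k wt t S z M Sg) field_differentiable at A"
    "(\<lambda>z. D5 k wt t S A M z) field_differentiable at Sg"
    using C12212_differentiable2[OF reg pt k] by auto
  have pos: "0 < S" "0 < Sg" using pt by (auto simp: D0set_def)
  have near: "eventually (\<lambda>z. 0 < z) (nhds x)" if "0 < x" for x :: real
    using eventually_nhds_in_open[of "{0<..}" x] that by simp
  have "eventually (\<lambda>z. pd k (wpsi U wt p) t z A M Sg y = ?c * D5 k wt t z A M Sg) (nhds S)"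
    by (rule eventually_mono[OF near[OF pos(1)]], rule first) (use pt in \<open>simp add: D0set_def\<close>)
  then have "deriv (\<lambda>z. pd k (wpsi U wt p) t z A M Sg y) S = deriv (\<lambda>z. ?c * D5 k wt t z A M Sg) S"
    by (rule deriv_cong_ev) simp
  then show "pd 1 (pd k (wpsi U wt p)) t S A M Sg y = ?c * D5 1 (D5 k wt) t S A M Sg"
    by (simp only: pd_eq_deriv D5_eq_deriv deriv_cmult[OF diff(1)])
  have "(\<lambda>z. pd k (wpsi U wt p) t S z M Sg y) = (\<lambda>z. ?c * D5 k wt t S z M Sg)"
    by (rule ext, rule first) (use pt in \<open>simp add: D0set_def\<close>)
  then show "pd 2 (pd k (wpsi U wt p)) t S A M Sg y = ?c * D5 2 (D5 k wt) t S A M Sg"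
    by (simp only: pd_eq_deriv D5_eq_deriv deriv_cmult[OF diff(2)])
  have "eventually (\<lambda>z. pd k (wpsi U wt p) t S A M z y = ?c * D5 k wt t S A M z) (nhds Sg)"
    by (rule eventually_mono[OF near[OF pos(2)]], rule first) (use pt in \<open>simp add: D0set_def\<close>)
  then have "deriv (\<lambda>z. pd k (wpsi U wt p) t S A M z y) Sg = deriv (\<lambda>z. ?c * D5 k wt t S A M z) Sg"
    by (rule deriv_cong_ev) simp
  then show "pd 4 (pd k (wpsi U wt p)) t S A M Sg y = ?c * D5 4 (D5 k wt) t S A M Sg"
    by (simp only: pd_eq_deriv D5_eq_deriv deriv_cmult[OF diff(3)])
qed

section \<open>Decreasing absolute risk aversion\<close>

text \<open>\<open>(-U''/U')' = ((U'')\<^sup>2 - U' U''')/(U')\<^sup>2 \<le> 0\<close>, hence \<open>U' U''' \<ge> (U'')\<^sup>2 \<ge> 0\<close>.\<close>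

lemma deriv3_nonneg_if_DARA:
  assumes "assmA_f U"
  shows "0 \<le> deriv (deriv (deriv U)) y"
proof -
  have C: "C3 U" and U1_pos: "\<And>y. deriv U y > 0"
    and DARA: "antimono (\<lambda>y. - deriv (deriv U) y / deriv U y)"
    using assms by (auto simp: assmA_f_def)
  have d1: "(deriv U has_field_derivative deriv (deriv U) y) (at y)"
    and d2: "(deriv (deriv U) has_field_derivative deriv (deriv (deriv U)) y) (at y)"
    using C unfolding C3_def by (auto simp: field_differentiable_derivI)
  define r where "r = (\<lambda>y. - deriv (deriv U) y / deriv U y)"
  define u1 u2 u3 where "u1 = deriv U y" and "u2 = deriv (deriv U) y" and "u3 = deriv (deriv (deriv U)) y"
  have u1_pos: "u1 > 0" using U1_pos by (simp add: u1_def)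
  have r_deriv: "(r has_field_derivative (- (u3 * u1 - u2 * u2) / (u1 * u1))) (at y)"
    unfolding r_def u1_def u2_def u3_def using d1 d2 U1_pos[of y]
    by (auto intro!: derivative_eq_intros simp: field_simps power2_eq_square)
  have "\<not> (0 < - (u3 * u1 - u2 * u2) / (u1 * u1))"
  proof
    assume "0 < - (u3 * u1 - u2 * u2) / (u1 * u1)"
    from DERIV_pos_inc_right[OF r_deriv this] obtain d where "d > 0"
      and inc: "\<And>h. h > 0 \<Longrightarrow> h < d \<Longrightarrow> r y < r (y + h)" by blast
    have "r (y + d/2) \<le> r y" using DARA \<open>d > 0\<close> unfolding r_def antimono_def by simp
    with inc[of "d/2"] \<open>d > 0\<close> show False by auto
  qed
  then have "u3 * u1 - u2 * u2 \<ge> 0" using u1_pos by (auto simp: field_simps not_less)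
  then have "u3 * u1 \<ge> 0" by (smt (verit) zero_le_square)
  then show ?thesis using u1_pos unfolding u3_def[symmetric] by (simp add: zero_le_mult_iff)
qed


section \<open>The Lagrange multipliers \<open>\<lambda>\<close> and \<open>\<mu>\<close>\<close>

lemma abs_mult_le_mult: "\<bar>a\<bar> \<le> A \<Longrightarrow> \<bar>b\<bar> \<le> B \<Longrightarrow> \<bar>a * b\<bar> \<le> A * (B::real)"
  by (simp add: abs_mult mult_mono')

lemma square_le_of_abs_le: "\<bar>x\<bar> \<le> y \<Longrightarrow> x^2 \<le> (y::real)^2"
  by (metis abs_ge_zero order_trans power2_le_iff_abs_le)

lemma weighted_lagrange_identity4:
  fixes p1 p2 p3 p4 c1 c2 c3 c4 v1 v2 v3 v4 :: real
  shows "(p1 * c1 * c1 + p2 * c2 * c2 + p3 * c3 * c3 + p4 * c4 * c4)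
       * (p1 * v1 * v1 + p2 * v2 * v2 + p3 * v3 * v3 + p4 * v4 * v4)
     - (p1 * c1 * v1 + p2 * c2 * v2 + p3 * c3 * v3 + p4 * c4 * v4)^2
   = p1 * p2 * (c1 * v2 - c2 * v1)^2 + p1 * p3 * (c1 * v3 - c3 * v1)^2 + p1 * p4 * (c1 * v4 - c4 * v1)^2
     + p2 * p3 * (c2 * v3 - c3 * v2)^2 + p2 * p4 * (c2 * v4 - c4 * v2)^2 + p3 * p4 * (c3 * v4 - c4 * v3)^2"
  by (simp add: power2_eq_square algebra_simps)

lemma weighted_cauchy_schwarz4:
  fixes p1 p2 p3 p4 c1 c2 c3 c4 v1 v2 v3 v4 :: real
  assumes "0 \<le> p1" "0 \<le> p2" "0 \<le> p3" "0 \<le> p4"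
  shows "(p1 * c1 * v1 + p2 * c2 * v2 + p3 * c3 * v3 + p4 * c4 * v4)^2
     \<le> (p1 * c1 * c1 + p2 * c2 * c2 + p3 * c3 * c3 + p4 * c4 * c4)
       * (p1 * v1 * v1 + p2 * v2 * v2 + p3 * v3 * v3 + p4 * v4 * v4)"
proof -
  have "0 \<le> p1 * p2 * (c1 * v2 - c2 * v1)^2 + p1 * p3 * (c1 * v3 - c3 * v1)^2 + p1 * p4 * (c1 * v4 - c4 * v1)^2
     + p2 * p3 * (c2 * v3 - c3 * v2)^2 + p2 * p4 * (c2 * v4 - c4 * v2)^2 + p3 * p4 * (c3 * v4 - c4 * v3)^2"
    using assms by (intro add_nonneg_nonneg mult_nonneg_nonneg) auto
  with weighted_lagrange_identity4[of p1 c1 p2 c2 p3 c3 p4 c4 v1 v2 v3 v4] show ?thesis by linarith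
qed

lemma weighted_projection_le:
  fixes p1 p2 p3 p4 c1 c2 c3 c4 v1 v2 v3 v4 :: real
  assumes "0 \<le> p1" "0 \<le> p2" "0 \<le> p3" "0 \<le> p4"
    and cc: "cc = p1 * c1 * c1 + p2 * c2 * c2 + p3 * c3 * c3 + p4 * c4 * c4" and "cc > 0"
    and cv: "cv = p1 * c1 * v1 + p2 * c2 * v2 + p3 * c3 * v3 + p4 * c4 * v4"
    and vv: "vv = p1 * v1 * v1 + p2 * v2 * v2 + p3 * v3 * v3 + p4 * v4 * v4"
  shows "p1 * (cv/cc * c1)^2 + p2 * (cv/cc * c2)^2 + p3 * (cv/cc * c3)^2 + p4 * (cv/cc * c4)^2 \<le> vv"
proof -
  have "p1 * (k * c1)^2 + p2 * (k * c2)^2 + p3 * (k * c3)^2 + p4 * (k * c4)^2 = k^2 * cc" for k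
    by (simp add: cc power2_eq_square algebra_simps)
  then have "p1 * (cv/cc * c1)^2 + p2 * (cv/cc * c2)^2 + p3 * (cv/cc * c3)^2 + p4 * (cv/cc * c4)^2
      = (cv/cc)^2 * cc" .
  also have "\<dots> = cv^2 / cc" using \<open>cc > 0\<close> by (simp add: power2_eq_square field_simps)
  also have "\<dots> \<le> vv"
    using weighted_cauchy_schwarz4[OF assms(1-4), of c1 v1 c2 v2 c3 v3 c4 v4] \<open>cc > 0\<close>
    by (simp add: cc cv vv divide_le_eq mult.commute)
  finally show ?thesis .
qed

text \<open>\<open>\<lambda>\<close> and \<open>\<mu>\<close> are the multipliers of the projection of \<open>v\<close> onto \<open>{\<zeta>. c\<^sup>T\<Psi>\<zeta> = 0, \<zeta>\<^sub>4 \<ge> 0}\<close>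
  in the \<open>\<Psi>\<close>-inner product: the first branch of \<open>\<lambda>\<close> is the unconstrained projection, the second one
  the projection onto the face \<open>\<zeta>\<^sub>4 = 0\<close>. The bounds on the components of \<open>\<lambda> c\<close> come from
  projections being contractions.\<close>

lemma lagrange_multipliers_components:
  fixes p1 p2 p3 p4 c1 c2 c3 c4 v1 v2 v3 v4 lam mu :: real
  assumes p: "0 < p1" "0 < p2" "0 < p3" "0 < p4" and c1: "c1 \<noteq> 0"
    and cc: "cc = p1 * c1 * c1 + p2 * c2 * c2 + p3 * c3 * c3 + p4 * c4 * c4"
    and cv: "cv = p1 * c1 * v1 + p2 * c2 * v2 + p3 * c3 * v3 + p4 * c4 * v4"
    and vv: "vv = p1 * v1 * v1 + p2 * v2 * v2 + p3 * v3 * v3 + p4 * v4 * v4"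
    and lam: "lam = (if 2 * v4 - (cv/cc) * (2 * c4) \<ge> 0 then cv/cc
                    else (cv - (2 * c4) * (2 * v4) * p4/4)/(cc - (2 * c4)^2 * p4/4))"
    and mu: "mu = max (- (2 * v4 - lam * (2 * c4))) 0 / 2"
  shows "p1 * c1 * (v1 - lam * c1) + p2 * c2 * (v2 - lam * c2) + p3 * c3 * (v3 - lam * c3)
       + p4 * c4 * (v4 - lam * c4 + mu) = 0"
    "mu * (v4 - lam * c4 + mu) = 0"
    "p1 * (lam * c1)^2 \<le> vv" "p2 * (lam * c2)^2 \<le> vv" "p3 * (lam * c3)^2 \<le> vv"
    "p4 * (lam * c4)^2 \<le> vv \<and> mu = 0 \<or> v4 - lam * c4 + mu = 0"
proof -
  have sq: "0 \<le> q * x * x" if "0 < q" for q x :: real using that by (simp add: mult.assoc)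
  have "c1 * c1 > 0" using c1 by (metis not_real_square_gt_zero)
  then have pc1: "p1 * c1 * c1 > 0" using p(1) by (simp add: mult.assoc)
  have cc_pos: "cc > 0" unfolding cc using pc1 sq[OF p(2), of c2] sq[OF p(3), of c3] sq[OF p(4), of c4]
    by linarith
  have sq_nonneg: "0 \<le> p1 * x1^2" "0 \<le> p2 * x2^2" "0 \<le> p3 * x3^2" "0 \<le> p4 * x4^2"
    for x1 x2 x3 x4 :: real
    using p by auto
  have "p1 * c1 * (v1 - lam * c1) + p2 * c2 * (v2 - lam * c2) + p3 * c3 * (v3 - lam * c3)
       + p4 * c4 * (v4 - lam * c4 + mu) = 0 \<and> mu * (v4 - lam * c4 + mu) = 0 \<and>
    p1 * (lam * c1)^2 \<le> vv \<and> p2 * (lam * c2)^2 \<le> vv \<and> p3 * (lam * c3)^2 \<le> vv \<and>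
    (p4 * (lam * c4)^2 \<le> vv \<and> mu = 0 \<or> v4 - lam * c4 + mu = 0)"
  proof (cases "2 * v4 - (cv/cc) * (2 * c4) \<ge> 0")
    case True
    then have l: "lam = cv/cc" and m: "mu = 0" by (simp_all add: lam mu)
    have proj: "p1 * (cv/cc * c1)^2 + p2 * (cv/cc * c2)^2 + p3 * (cv/cc * c3)^2 + p4 * (cv/cc * c4)^2 \<le> vv"
      by (rule weighted_projection_le[OF _ _ _ _ cc cc_pos cv vv]) (use p in auto)
    have "p1 * c1 * (v1 - lam * c1) + p2 * c2 * (v2 - lam * c2) + p3 * c3 * (v3 - lam * c3)
        + p4 * c4 * (v4 - lam * c4) = cv - lam * cc"
      by (simp add: cc cv algebra_simps)
    then show ?thesis
      using proj sq_nonneg(1)[of "cv/cc * c1"] sq_nonneg(2)[of "cv/cc * c2"]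
        sq_nonneg(3)[of "cv/cc * c3"] sq_nonneg(4)[of "cv/cc * c4"] cc_pos
      unfolding l m by (auto simp: field_simps)
  next
    case False
    define A a where "A = p1 * c1 * c1 + p2 * c2 * c2 + p3 * c3 * c3"
      and "a = p1 * c1 * v1 + p2 * c2 * v2 + p3 * c3 * v3"
    have A_pos: "A > 0" unfolding A_def using pc1 sq[OF p(2), of c2] sq[OF p(3), of c3] by linarith
    have l: "lam = a/A"
      using False by (simp add: lam cc cv A_def a_def power2_eq_square add.assoc)
    have "v4 * cc - cv * c4 < 0"
    proof -
      have "2 * (v4 * cc - cv * c4)/cc < 0" using False cc_pos by (simp add: field_simps)
      then show ?thesis using cc_pos by (simp add: divide_less_0_iff)
    qed
    moreover have "v4 * A - a * c4 = v4 * cc - cv * c4" by (simp add: A_def a_def cc cv algebra_simps)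
    moreover have "v4 - lam * c4 = (v4 * A - a * c4)/A" using A_pos by (simp add: l field_simps)
    ultimately have "v4 - lam * c4 < 0" using A_pos by (simp add: divide_less_0_iff)
    then have m: "mu = lam * c4 - v4" by (simp add: mu)
    have proj: "p1 * (a/A * c1)^2 + p2 * (a/A * c2)^2 + p3 * (a/A * c3)^2
        \<le> p1 * v1 * v1 + p2 * v2 * v2 + p3 * v3 * v3"
      using weighted_projection_le[of p1 p2 p3 0 A c1 c2 c3 0 a v1 v2 v3 0
          "p1 * v1 * v1 + p2 * v2 * v2 + p3 * v3 * v3"] p A_pos
      by (auto simp: A_def a_def)
    have "p1 * v1 * v1 + p2 * v2 * v2 + p3 * v3 * v3 \<le> vv" using sq[OF p(4), of v4] by (simp add: vv)
    moreover have "p1 * c1 * (v1 - lam * c1) + p2 * c2 * (v2 - lam * c2) + p3 * c3 * (v3 - lam * c3)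
        = a - lam * A"
      by (simp add: A_def a_def algebra_simps)
    moreover have "a - lam * A = 0" using A_pos by (simp add: l)
    ultimately show ?thesis
      using proj sq_nonneg(1)[of "a/A * c1"] sq_nonneg(2)[of "a/A * c2"] sq_nonneg(3)[of "a/A * c3"]
      unfolding m l by auto
  qed
  then show "p1 * c1 * (v1 - lam * c1) + p2 * c2 * (v2 - lam * c2) + p3 * c3 * (v3 - lam * c3)
       + p4 * c4 * (v4 - lam * c4 + mu) = 0"
    "mu * (v4 - lam * c4 + mu) = 0"
    "p1 * (lam * c1)^2 \<le> vv" "p2 * (lam * c2)^2 \<le> vv" "p3 * (lam * c3)^2 \<le> vv"
    "p4 * (lam * c4)^2 \<le> vv \<and> mu = 0 \<or> v4 - lam * c4 + mu = 0"
    by auto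
qed

lemma abs_le_one_plus_square: "\<bar>x\<bar> \<le> 1 + x^2" for x :: real
proof -
  have "0 \<le> (\<bar>x\<bar> - 1)^2" by simp
  then show ?thesis by (simp add: power2_eq_square algebra_simps)
qed

lemma abs_diff_le_of_weighted_square_le:
  fixes p1 p2 p3 p4 x :: real
  assumes p: "0 < p1" "0 < p2" "0 < p3" "0 < p4" and "q \<in> {p1, p2, p3, p4}"
    and x: "q * x^2 \<le> p1 * v1 * v1 + p2 * v2 * v2 + p3 * v3 * v3 + p4 * v4 * v4"
    and v: "\<bar>v1\<bar> \<le> B" "\<bar>v2\<bar> \<le> B" "\<bar>v3\<bar> \<le> B" "\<bar>v4\<bar> \<le> B" "\<bar>vi\<bar> \<le> B"
  shows "\<bar>vi - x\<bar> \<le> B + 1 + (p1 + p2 + p3 + p4) * B^2 * (1/p1 + 1/p2 + 1/p3 + 1/p4)"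
proof -
  have "r * u * u \<le> r * B^2" if "0 < r" "\<bar>u\<bar> \<le> B" for r u
    using that square_le_of_abs_le[OF that(2)] by (simp add: power2_eq_square mult.assoc)
  from this[OF p(1) v(1)] this[OF p(2) v(2)] this[OF p(3) v(3)] this[OF p(4) v(4)]
  have vv: "p1 * v1 * v1 + p2 * v2 * v2 + p3 * v3 * v3 + p4 * v4 * v4 \<le> (p1 + p2 + p3 + p4) * B^2"
    by (simp add: algebra_simps)
  have q: "0 < q" "1/q \<le> 1/p1 + 1/p2 + 1/p3 + 1/p4" using assms(5) p by auto
  have "x^2 \<le> (p1 * v1 * v1 + p2 * v2 * v2 + p3 * v3 * v3 + p4 * v4 * v4) * (1/q)"
    using x q(1) by (simp add: le_divide_eq mult.commute)
  also have "\<dots> \<le> ((p1 + p2 + p3 + p4) * B^2) * (1/p1 + 1/p2 + 1/p3 + 1/p4)"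
    using vv q p by (intro mult_mono) auto
  finally show ?thesis using abs_le_one_plus_square[of x] v(5) by linarith
qed

definition multiplier_bound :: "zeta4 \<Rightarrow> real \<Rightarrow> real" where
  "multiplier_bound psis B = B + 1 + (z1 psis + z2 psis + z3 psis + z4 psis) * B^2
     * (1 / z1 psis + 1 / z2 psis + 1 / z3 psis + 1 / z4 psis)"

text \<open>\<open>w\<close> is the vector with \<open>\<zeta>\<^sup>~ = \<Psi> w\<close>.\<close>

lemma lagrange_multipliers:
  fixes psis c v :: zeta4
  assumes psis: "0 < z1 psis" "0 < z2 psis" "0 < z3 psis" "0 < z4 psis"
    and c1: "z1 c \<noteq> 0" and Cgg: "Cgg = 2 * z4 c" and Vgg: "Vgg = 2 * z4 v"
    and v: "\<bar>z1 v\<bar> \<le> B" "\<bar>z2 v\<bar> \<le> B" "\<bar>z3 v\<bar> \<le> B" "\<bar>z4 v\<bar> \<le> B"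
  defines "lam \<equiv> lamf psis c v Cgg Vgg"
  defines "w \<equiv> v - lam *\<^sub>R c + (negpart (Vgg - lam * Cgg) / 2) *\<^sub>R e4"
  shows "ipsi psis (w - v) w = 0"
    and "\<bar>z1 w\<bar> \<le> multiplier_bound psis B" "\<bar>z2 w\<bar> \<le> multiplier_bound psis B"
    and "\<bar>z3 w\<bar> \<le> multiplier_bound psis B" "\<bar>z4 w\<bar> \<le> multiplier_bound psis B"
proof -
  obtain p1 p2 p3 p4 where ps: "psis = (p1, p2, p3, p4)" by (cases psis) auto
  obtain c1' c2 c3 c4 where cs: "c = (c1', c2, c3, c4)" by (cases c) auto
  obtain v1 v2 v3 v4 where vs: "v = (v1, v2, v3, v4)" by (cases v) auto
  define mu where "mu = negpart (Vgg - lam * Cgg) / 2"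
  define cc cv vv where "cc = p1 * c1' * c1' + p2 * c2 * c2 + p3 * c3 * c3 + p4 * c4 * c4"
    and "cv = p1 * c1' * v1 + p2 * c2 * v2 + p3 * c3 * v3 + p4 * c4 * v4"
    and "vv = p1 * v1 * v1 + p2 * v2 * v2 + p3 * v3 * v3 + p4 * v4 * v4"
  have p: "0 < p1" "0 < p2" "0 < p3" "0 < p4" using psis by (simp_all add: ps z1_def z2_def z3_def z4_def)
  have vb: "\<bar>v1\<bar> \<le> B" "\<bar>v2\<bar> \<le> B" "\<bar>v3\<bar> \<le> B" "\<bar>v4\<bar> \<le> B"
    using v by (simp_all add: vs z1_def z2_def z3_def z4_def)
  have c1': "c1' \<noteq> 0" using c1 by (simp add: cs z1_def)
  have ipsi_eq: "ipsi psis c c = cc" "ipsi psis c v = cv"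
    by (simp_all add: ipsi_def ps cs vs z1_def z2_def z3_def z4_def cc_def cv_def)
  have lam_eq: "lam = (if 2 * v4 - (cv/cc) * (2 * c4) \<ge> 0 then cv/cc
                    else (cv - (2 * c4) * (2 * v4) * p4/4)/(cc - (2 * c4)^2 * p4/4))"
    unfolding lam_def lamf_def ipsi_eq by (simp add: Cgg Vgg cs vs ps z4_def)
  have mu_eq: "mu = max (- (2 * v4 - lam * (2 * c4))) 0 / 2"
    by (simp add: mu_def negpart_def Cgg Vgg cs vs z4_def)
  note K = lagrange_multipliers_components[OF p c1' cc_def cv_def vv_def lam_eq mu_eq]
  have w: "w = (v1 - lam * c1', v2 - lam * c2, v3 - lam * c3, v4 - lam * c4 + mu)"
    by (simp add: w_def mu_def vs cs e4_def)
  show "ipsi psis (w - v) w = 0"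
  proof -
    have "ipsi psis (w - v) w
      = -lam * (p1 * c1' * (v1 - lam * c1') + p2 * c2 * (v2 - lam * c2) + p3 * c3 * (v3 - lam * c3)
          + p4 * c4 * (v4 - lam * c4 + mu)) + p4 * (mu * (v4 - lam * c4 + mu))"
      by (simp add: ipsi_def w vs ps z1_def z2_def z3_def z4_def algebra_simps)
    then show ?thesis using K(1,2) by simp
  qed
  let ?Cw = "multiplier_bound psis B"
  have Cw: "B + 1 + (p1 + p2 + p3 + p4) * B^2 * (1/p1 + 1/p2 + 1/p3 + 1/p4) = ?Cw"
    by (simp add: multiplier_bound_def ps z1_def z2_def z3_def z4_def)
  note bound = abs_diff_le_of_weighted_square_le[OF p _ _ vb(1-4), unfolded Cw]
  have "\<bar>v1 - lam * c1'\<bar> \<le> ?Cw" "\<bar>v2 - lam * c2\<bar> \<le> ?Cw" "\<bar>v3 - lam * c3\<bar> \<le> ?Cw"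
    using bound[OF _ K(3)[unfolded vv_def] vb(1)] bound[OF _ K(4)[unfolded vv_def] vb(2)]
      bound[OF _ K(5)[unfolded vv_def] vb(3)]
    by auto
  then show "\<bar>z1 w\<bar> \<le> ?Cw" "\<bar>z2 w\<bar> \<le> ?Cw" "\<bar>z3 w\<bar> \<le> ?Cw"
    by (simp_all add: w z1_def z2_def z3_def)
  have "0 \<le> ?Cw" using vb(1) p by (simp flip: Cw)
  then show "\<bar>z4 w\<bar> \<le> ?Cw"
    using K(6) bound[of p4 "lam * c4" v4, OF _ _ vb(4)] by (auto simp: w z4_def vv_def)
qed


section \<open>Measurability of functionals of the path\<close>

definition clamp :: "real \<Rightarrow> real \<Rightarrow> real" where "clamp T t = max 0 (min t T)"

lemma space_OmegaM: "space (OmegaM T x0) = OmegaS T x0"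
  unfolding OmegaM_def by (simp add: space_measure_of_conv)

lemma sets_OmegaM: "sets (OmegaM T x0) = sigma_sets (OmegaS T x0)
     {{\<omega> \<in> OmegaS T x0. \<omega> u \<in> B} | u B. u \<in> {0..T} \<and> B \<in> sets borel}"
  unfolding OmegaM_def by (rule sets_measure_of) auto

lemma space_model_measure: "model_measure T x0 P \<Longrightarrow> space P = OmegaS T x0"
  unfolding model_measure_def using sets_eq_imp_space_eq space_OmegaM by metis

lemma measurable_path_eval:
  assumes "model_measure T x0 P" "0 \<le> T"
  shows "(\<lambda>\<omega>. \<omega> u) \<in> measurable P borel"
proof (rule measurableI)
  fix A :: "(real \<times> real \<times> real) set" assume A: "A \<in> sets borel"
  have "(\<lambda>\<omega>. \<omega> u) -` A \<inter> space P = {\<omega> \<in> OmegaS T x0. \<omega> (clamp T u) \<in> A}"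
    using assms(1) by (auto simp: space_model_measure OmegaS_def clamp_def)
  also have "\<dots> \<in> sets (OmegaM T x0)" unfolding sets_OmegaM
  proof (rule sigma_sets.Basic, intro CollectI exI conjI)
    show "{\<omega> \<in> OmegaS T x0. \<omega> (clamp T u) \<in> A} = {\<omega> \<in> OmegaS T x0. \<omega> (clamp T u) \<in> A}" ..
  qed (use A assms(2) in \<open>auto simp: clamp_def\<close>)
  finally show "(\<lambda>\<omega>. \<omega> u) -` A \<inter> space P \<in> sets P"
    using assms(1) by (simp add: model_measure_def)
qed simp

lemma continuous_path:
  assumes "\<omega> \<in> OmegaS T x0" "0 \<le> T"
  shows "continuous_on UNIV \<omega>"
proof -
  have e: "\<omega> = \<omega> \<circ> clamp T" using assms by (auto simp: OmegaS_def clamp_def fun_eq_iff)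
  have "continuous_on UNIV (\<omega> \<circ> clamp T)"
    by (rule continuous_on_compose)
       (use assms in \<open>auto simp: OmegaS_def clamp_def intro!: continuous_intros
          elim: continuous_on_subset\<close>)
  then show ?thesis using e by simp
qed

lemma LIMSEQ_floor_div: "(\<lambda>n. real_of_int \<lfloor>real n * t\<rfloor> / real n) \<longlonglongrightarrow> t"
proof (rule tendsto_sandwich[where f="\<lambda>n. t - 1 / real n" and h="\<lambda>n. t"])
  show "\<forall>\<^sub>F n in sequentially. t - 1 / real n \<le> real_of_int \<lfloor>real n * t\<rfloor> / real n"
    using eventually_gt_at_top[of 0]
  proof eventually_elim
    case (elim n)
    have "real n * t - 1 \<le> real_of_int \<lfloor>real n * t\<rfloor>" by linarith
    from divide_right_mono[OF this, of "real n"] show ?case using elim by (simp add: diff_divide_distrib)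
  qed
  show "\<forall>\<^sub>F n in sequentially. real_of_int \<lfloor>real n * t\<rfloor> / real n \<le> t"
    using eventually_gt_at_top[of 0]
  proof eventually_elim
    case (elim n)
    have "real_of_int \<lfloor>real n * t\<rfloor> \<le> real n * t" by linarith
    from divide_right_mono[OF this, of "real n"] show ?case using elim by simp
  qed
  have "(\<lambda>n. t - 1 / real n) \<longlonglongrightarrow> t - 0"
    by (intro tendsto_diff tendsto_const lim_inverse_n')
  then show "(\<lambda>n. t - 1 / real n) \<longlonglongrightarrow> t" by simp
qed simp

lemma measurable_path_eval_joint:
  assumes "model_measure T x0 P" "0 \<le> T"
  shows "(\<lambda>x. fst x (snd x)) \<in> borel_measurable (P \<Otimes>\<^sub>M lborel)"
proof (rule borel_measurable_LIMSEQ_metric[where f="\<lambda>n x. fst x (real_of_int \<lfloor>real n * snd x\<rfloor> / real n)"])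
  fix n :: nat
  have g: "(\<lambda>x. \<lfloor>real n * snd x\<rfloor>) \<in> measurable (P \<Otimes>\<^sub>M lborel) (count_space UNIV)"
    by measurable
  have f: "(\<lambda>x. fst x (real_of_int i / real n)) \<in> borel_measurable (P \<Otimes>\<^sub>M lborel)" for i :: int
    using measurable_comp[OF measurable_fst measurable_path_eval[OF assms, of "real_of_int i / real n"]]
    by (simp add: o_def)
  show "(\<lambda>x. fst x (real_of_int \<lfloor>real n * snd x\<rfloor> / real n)) \<in> borel_measurable (P \<Otimes>\<^sub>M lborel)"
    by (rule measurable_compose_countable[OF f g])
next
  fix x :: "path \<times> real" assume "x \<in> space (P \<Otimes>\<^sub>M lborel)"
  then have "fst x \<in> OmegaS T x0" using assms(1) by (auto simp: space_pair_measure space_model_measure)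
  then have c: "continuous_on UNIV (fst x)" by (rule continuous_path) (use assms in auto)
  show "(\<lambda>n. fst x (real_of_int \<lfloor>real n * snd x\<rfloor> / real n)) \<longlonglongrightarrow> fst x (snd x)"
    by (rule isCont_tendsto_compose[OF _ LIMSEQ_floor_div])
       (use c in \<open>simp add: continuous_on_eq_continuous_at\<close>)
qed

lemma measurable_Sp_joint:
  assumes "model_measure T x0 P" "0 \<le> T"
  shows "(\<lambda>x. Sp u (fst x)) \<in> borel_measurable (P \<Otimes>\<^sub>M lborel)"
proof -
  have e: "(\<lambda>x. fst x u) \<in> borel_measurable (P \<Otimes>\<^sub>M lborel)"
    using measurable_comp[OF measurable_fst measurable_path_eval[OF assms, of u]] by (simp add: o_def)
  show ?thesis unfolding Sp_def
    by (rule borel_measurable_continuous_on[OF _ e]) (intro continuous_intros)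
qed

lemma continuous_Sp:
  assumes "\<omega> \<in> OmegaS T x0" "0 \<le> T"
  shows "continuous_on UNIV (\<lambda>u. Sp u \<omega>)"
  unfolding Sp_def using continuous_path[OF assms] by (intro continuous_intros) (auto intro: continuous_on_compose2)

text \<open>The running maximum is a supremum over countably many rational times, hence measurable.\<close>

lemma Mp_eq_SUP:
  assumes "\<omega> \<in> OmegaS T x0" "0 \<le> T"
  shows "Mp t \<omega> = (SUP kn\<in>UNIV. (if real (fst kn) / real (snd kn) \<le> max 0 t
               then Sp (real (fst kn) / real (snd kn)) \<omega> else Sp 0 \<omega>))"
proof -
  define f where "f = (\<lambda>u. Sp u \<omega>)"
  define s where "s = max 0 t"
  define G where "G = (\<lambda>kn::nat\<times>nat. if real (fst kn) / real (snd kn) \<le> s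
               then f (real (fst kn) / real (snd kn)) else f 0)"
  have c: "continuous_on UNIV f" unfolding f_def by (rule continuous_Sp[OF assms])
  have s0: "0 \<le> s" by (simp add: s_def)
  have bA: "bdd_above (f ` {0..s})"
    by (rule bounded_imp_bdd_above, rule compact_imp_bounded, rule compact_continuous_image)
       (use c in \<open>auto intro: continuous_on_subset\<close>)
  have GA: "G kn \<in> f ` {0..s}" for kn using s0 by (auto simp: G_def)
  have bG: "bdd_above (range G)" using bA GA by (meson bdd_above_mono image_subsetI)
  have "Sup (f ` {0..s}) = (SUP kn. G kn)"
  proof (rule antisym)
    show "Sup (f ` {0..s}) \<le> (SUP kn. G kn)"
    proof (rule cSup_least)
      show "f ` {0..s} \<noteq> {}" using s0 by auto
      fix a assume "a \<in> f ` {0..s}"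
      then obtain u where u: "u \<in> {0..s}" "a = f u" by auto
      define q where "q = (\<lambda>n::nat. real_of_int \<lfloor>real n * u\<rfloor> / real n)"
      have lim: "(\<lambda>n. f (q n)) \<longlonglongrightarrow> f u" unfolding q_def
        by (rule isCont_tendsto_compose[OF _ LIMSEQ_floor_div])
           (use c in \<open>simp add: continuous_on_eq_continuous_at\<close>)
      have "f (q n) \<le> (SUP kn. G kn)" for n
      proof -
        have nn: "0 \<le> \<lfloor>real n * u\<rfloor>" using u by auto
        have qle: "q n \<le> s"
        proof (cases "n = 0")
          case False
          have "real_of_int \<lfloor>real n * u\<rfloor> \<le> real n * u" by linarith
          then have "q n \<le> u" using False unfolding q_def by (simp add: divide_le_eq mult.commute)
          then show ?thesis using u by auto
        qed (simp add: q_def s0)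
        have "G (nat \<lfloor>real n * u\<rfloor>, n) = f (q n)"
          using nn qle by (simp add: G_def q_def)
        then show ?thesis using cSUP_upper[OF UNIV_I bG, of "(nat \<lfloor>real n * u\<rfloor>, n)"] by simp
      qed
      then have "f u \<le> (SUP kn. G kn)" by (intro LIMSEQ_le_const2[OF lim]) blast
      then show "a \<le> (SUP kn. G kn)" using u by simp
    qed
    show "(SUP kn. G kn) \<le> Sup (f ` {0..s})"
      by (rule cSUP_least) (use GA bA in \<open>auto intro: cSup_upper\<close>)
  qed
  then show ?thesis by (simp add: Mp_def f_def s_def G_def)
qed

lemma measurable_Mp_joint:
  assumes "model_measure T x0 P" "0 \<le> T"
  shows "(\<lambda>x. Mp (snd x) (fst x)) \<in> borel_measurable (P \<Otimes>\<^sub>M lborel)"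
proof -
  note ev[measurable] = measurable_Sp_joint[OF assms]
  have m: "(\<lambda>x. SUP kn\<in>UNIV. (if real (fst kn) / real (snd kn) \<le> max 0 (snd x)
               then Sp (real (fst kn) / real (snd kn)) (fst x) else Sp 0 (fst x)))
        \<in> borel_measurable (P \<Otimes>\<^sub>M lborel)"
  proof (rule borel_measurable_cSUP)
    fix x :: "path \<times> real" assume "x \<in> space (P \<Otimes>\<^sub>M lborel)"
    then have om: "fst x \<in> OmegaS T x0" using assms(1) by (auto simp: space_pair_measure space_model_measure)
    define s where "s = max 0 (snd x)"
    have bA: "bdd_above ((\<lambda>u. Sp u (fst x)) ` {0..s})"
      by (rule bounded_imp_bdd_above, rule compact_imp_bounded, rule compact_continuous_image)
         (use continuous_Sp[OF om assms(2)] in \<open>auto intro: continuous_on_subset\<close>)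
    show "bdd_above ((\<lambda>kn. if real (fst kn) / real (snd kn) \<le> max 0 (snd x)
               then Sp (real (fst kn) / real (snd kn)) (fst x) else Sp 0 (fst x)) ` UNIV)"
      by (rule bdd_above_mono[OF bA]) (auto simp: s_def)
  qed measurable
  show ?thesis
  proof (rule measurable_cong[THEN iffD1, OF _ m])
    fix x :: "path \<times> real" assume "x \<in> space (P \<Otimes>\<^sub>M lborel)"
    then have om: "fst x \<in> OmegaS T x0" using assms(1) by (auto simp: space_pair_measure space_model_measure)
    show "(SUP kn\<in>UNIV. (if real (fst kn) / real (snd kn) \<le> max 0 (snd x)
               then Sp (real (fst kn) / real (snd kn)) (fst x) else Sp 0 (fst x))) = Mp (snd x) (fst x)"
      by (rule Mp_eq_SUP[OF om assms(2), symmetric])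
  qed
qed

definition path_state :: "path \<times> real \<Rightarrow> real \<times> real \<times> real \<times> real \<times> real" where
  "path_state x = (snd x, Sp (snd x) (fst x), Ap (snd x) (fst x), Mp (snd x) (fst x), Sgp (snd x) (fst x))"

lemma measurable_path_state:
  assumes "model_measure T x0 P" "0 \<le> T"
  shows "path_state \<in> borel_measurable (P \<Otimes>\<^sub>M lborel)"
proof -
  have e: "(\<lambda>x. fst x (snd x)) \<in> borel_measurable (P \<Otimes>\<^sub>M lborel)" by (rule measurable_path_eval_joint[OF assms])
  have s: "(\<lambda>x. Sp (snd x) (fst x)) \<in> borel_measurable (P \<Otimes>\<^sub>M lborel)" unfolding Sp_def
    by (rule borel_measurable_continuous_on[OF _ e]) (intro continuous_intros)
  have a: "(\<lambda>x. Ap (snd x) (fst x)) \<in> borel_measurable (P \<Otimes>\<^sub>M lborel)" unfolding Ap_def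
    by (rule borel_measurable_continuous_on[OF _ e]) (intro continuous_intros)
  have g: "(\<lambda>x. Sgp (snd x) (fst x)) \<in> borel_measurable (P \<Otimes>\<^sub>M lborel)" unfolding Sgp_def
    by (rule borel_measurable_continuous_on[OF _ e]) (intro continuous_intros)
  have t: "(\<lambda>x::path\<times>real. snd x) \<in> borel_measurable (P \<Otimes>\<^sub>M lborel)" by measurable
  show ?thesis unfolding path_state_def
    by (intro borel_measurable_Pair t s a g measurable_Mp_joint[OF assms])
qed

definition extend_D0 :: "real \<Rightarrow> fun5 \<Rightarrow> real \<times> real \<times> real \<times> real \<times> real \<Rightarrow> real" where
  "extend_D0 T K p = (if p \<in> D0set T then unc5 K p else 0)"

lemma D0set_in_borel: "D0set T \<in> sets borel"
proof -
  have "D0set T = {p :: real \<times> real \<times> real \<times> real \<times> real. 0 < fst p \<and> fst p < T \<and> 0 < fst (snd p)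
       \<and> 0 < fst (snd (snd (snd p))) \<and> 0 < snd (snd (snd (snd p)))}"
    by (auto simp: D0set_def)
  also have "\<dots> \<in> sets borel"
    by (intro borel_open open_Collect_conj open_Collect_less continuous_intros)
  finally show ?thesis .
qed

lemma measurable_extend_D0:
  assumes "unc5 K \<in> borel_measurable (restrict_space borel (D0set T))"
  shows "extend_D0 T K \<in> borel_measurable borel"
proof -
  have "(\<lambda>x. if x \<in> D0set T then unc5 K x else 0) \<in> borel_measurable borel"
    using assms by (subst measurable_restrict_space_iff[symmetric]) (auto simp: D0set_in_borel)
  then show ?thesis by (simp add: extend_D0_def[abs_def])
qed

lemma Sp_le_Mp:
  assumes "\<omega> \<in> OmegaS T x0" "0 \<le> T" "0 \<le> t"
  shows "Sp t \<omega> \<le> Mp t \<omega>"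
proof -
  have bA: "bdd_above ((\<lambda>u. Sp u \<omega>) ` {0..max 0 t})"
    by (rule bounded_imp_bdd_above, rule compact_imp_bounded, rule compact_continuous_image)
       (use continuous_Sp[OF assms(1,2)] in \<open>auto intro: continuous_on_subset\<close>)
  show ?thesis unfolding Mp_def by (rule cSup_upper[OF _ bA]) (use assms in auto)
qed

lemma path_state_in_D0set:
  assumes "\<omega> \<in> OmegaS T x0" "0 \<le> T" "\<forall>t\<in>{0..T}. 0 < Sp t \<omega> \<and> 0 < Sgp t \<omega>" "t \<in> {0<..<T}"
  shows "path_state (\<omega>, t) \<in> D0set T"
proof -
  have "t \<in> {0..T}" "0 \<le> t" using assms(4) by auto
  then have "0 < Sp t \<omega>" "0 < Sgp t \<omega>" using assms(3) by auto
  moreover have "Sp t \<omega> \<le> Mp t \<omega>" using Sp_le_Mp[OF assms(1,2) \<open>0 \<le> t\<close>] .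
  ultimately show ?thesis using assms(4) by (simp add: path_state_def D0set_def)
qed

definition positive_models :: "real \<Rightarrow> real \<times> real \<times> real \<Rightarrow> path measure set \<Rightarrow> bool" where
  "positive_models T x0 Ps \<longleftrightarrow> 0 \<le> T \<and> (\<forall>P\<in>Ps. model_measure T x0 P \<and>
      (AE \<omega> in P. \<forall>t\<in>{0..T}. 0 < Sp t \<omega> \<and> 0 < Sgp t \<omega>))"

text \<open>The inner integral in the definition of \<open>L\<^sup>p\<close>, with \<open>K\<close> extended by \<open>0\<close> off \<open>D\<^sup>0\<close> to make
  it jointly measurable in \<open>(\<omega>, t)\<close>.\<close>

definition time_integral :: "real \<Rightarrow> fun5 \<Rightarrow> nat \<Rightarrow> path \<Rightarrow> ennreal" where
  "time_integral T K p \<omega> =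
     (\<integral>\<^sup>+t\<in>{0<..<T}. ennreal (\<bar>extend_D0 T K (path_state (\<omega>, t))\<bar> ^ p) \<partial>lborel)"

lemma measurable_extend_D0_path_state:
  assumes "model_measure T x0 P" "0 \<le> T" "unc5 K \<in> borel_measurable (restrict_space borel (D0set T))"
  shows "(\<lambda>x. extend_D0 T K (path_state x)) \<in> borel_measurable (P \<Otimes>\<^sub>M lborel)"
  using measurable_comp[OF measurable_path_state[OF assms(1,2)] measurable_extend_D0[OF assms(3)]]
  by (simp add: o_def)

lemma measurable_time_integral:
  assumes "model_measure T x0 P" "0 \<le> T" "unc5 K \<in> borel_measurable (restrict_space borel (D0set T))"
  shows "time_integral T K p \<in> borel_measurable P"
proof -
  note [measurable] = measurable_extend_D0_path_state[OF assms]
  have "(\<lambda>(\<omega>,t). ennreal (\<bar>extend_D0 T K (path_state (\<omega>,t))\<bar> ^ p) * indicator {0<..<T} t)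
      \<in> borel_measurable (P \<Otimes>\<^sub>M lborel)"
    by measurable
  from lborel.borel_measurable_nn_integral[OF this] show ?thesis
    by (simp add: time_integral_def[abs_def])
qed

lemma time_integral_AE_eq:
  assumes "positive_models T x0 Ps" "P \<in> Ps"
  shows "AE \<omega> in P. (\<integral>\<^sup>+t\<in>{0<..<T}. ennreal (\<bar>K t (Sp t \<omega>) (Ap t \<omega>) (Mp t \<omega>) (Sgp t \<omega>)\<bar> ^ p) \<partial>lborel)
     = time_integral T K p \<omega>"
proof -
  have mm: "model_measure T x0 P" and T0: "0 \<le> T"
    and pos: "AE \<omega> in P. \<forall>t\<in>{0..T}. 0 < Sp t \<omega> \<and> 0 < Sgp t \<omega>"
    using assms by (auto simp: positive_models_def)
  show ?thesis
  proof (rule AE_mp[OF pos], intro AE_I2 impI)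
    fix \<omega> assume "\<omega> \<in> space P" and pos: "\<forall>t\<in>{0..T}. 0 < Sp t \<omega> \<and> 0 < Sgp t \<omega>"
    then have \<omega>: "\<omega> \<in> OmegaS T x0" using mm by (simp add: space_model_measure)
    show "(\<integral>\<^sup>+t\<in>{0<..<T}. ennreal (\<bar>K t (Sp t \<omega>) (Ap t \<omega>) (Mp t \<omega>) (Sgp t \<omega>)\<bar> ^ p) \<partial>lborel)
      = time_integral T K p \<omega>"
      unfolding time_integral_def
    proof (rule nn_integral_cong)
      fix t :: real
      show "ennreal (\<bar>K t (Sp t \<omega>) (Ap t \<omega>) (Mp t \<omega>) (Sgp t \<omega>)\<bar> ^ p) * indicator {0<..<T} t
          = ennreal (\<bar>extend_D0 T K (path_state (\<omega>, t))\<bar> ^ p) * indicator {0<..<T} t"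
      proof (cases "t \<in> {0<..<T}")
        case True
        then have "path_state (\<omega>, t) \<in> D0set T" by (rule path_state_in_D0set[OF \<omega> T0 pos])
        then show ?thesis by (simp add: extend_D0_def unc5_def path_state_def)
      qed simp
    qed
  qed
qed

lemma Lp_P_iff_time_integral:
  assumes "positive_models T x0 Ps"
  shows "Lp_P T Ps p K \<longleftrightarrow> unc5 K \<in> borel_measurable (restrict_space borel (D0set T)) \<and>
     (\<exists>B. \<forall>P\<in>Ps. (\<integral>\<^sup>+\<omega>. time_integral T K p \<omega> \<partial>P) \<le> ennreal B)"
proof -
  have "(\<integral>\<^sup>+\<omega>. (\<integral>\<^sup>+t\<in>{0<..<T}. ennreal (\<bar>K t (Sp t \<omega>) (Ap t \<omega>) (Mp t \<omega>) (Sgp t \<omega>)\<bar> ^ p) \<partial>lborel) \<partial>P)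
      = (\<integral>\<^sup>+\<omega>. time_integral T K p \<omega> \<partial>P)" if "P \<in> Ps" for P
    by (rule nn_integral_cong_AE[OF time_integral_AE_eq[OF assms that]])
  then show ?thesis unfolding Lp_P_def by (metis (no_types, lifting))
qed

lemma nn_integral_lincomb_square_le:
  fixes f g :: "'a \<Rightarrow> real"
  assumes [measurable]: "f \<in> borel_measurable M" "g \<in> borel_measurable M" "A \<in> sets M"
  shows "(\<integral>\<^sup>+x\<in>A. ennreal (\<bar>a * f x + b * g x\<bar>^2) \<partial>M)
    \<le> ennreal (2 * a^2) * (\<integral>\<^sup>+x\<in>A. ennreal (\<bar>f x\<bar>^2) \<partial>M)
      + ennreal (2 * b^2) * (\<integral>\<^sup>+x\<in>A. ennreal (\<bar>g x\<bar>^2) \<partial>M)"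
proof -
  have pointwise: "ennreal (\<bar>a * u + b * v\<bar>^2) \<le> ennreal (2 * a^2) * ennreal (\<bar>u\<bar>^2) + ennreal (2 * b^2) * ennreal (\<bar>v\<bar>^2)"
    for u v :: real
  proof -
    have "0 \<le> (a * u - b * v)^2" by simp
    then have "\<bar>a * u + b * v\<bar>^2 \<le> 2 * a^2 * \<bar>u\<bar>^2 + 2 * b^2 * \<bar>v\<bar>^2"
      by (simp add: power2_eq_square algebra_simps)
    then show ?thesis by (simp add: ennreal_mult[symmetric] ennreal_plus[symmetric] del: ennreal_plus)
  qed
  have "(\<integral>\<^sup>+x\<in>A. ennreal (\<bar>a * f x + b * g x\<bar>^2) \<partial>M)
      \<le> (\<integral>\<^sup>+x. ennreal (2 * a^2) * (ennreal (\<bar>f x\<bar>^2) * indicator A x)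
              + ennreal (2 * b^2) * (ennreal (\<bar>g x\<bar>^2) * indicator A x) \<partial>M)"
    by (intro nn_integral_mono)
       (use pointwise in \<open>auto simp: distrib_right[symmetric] mult.assoc[symmetric]
          intro!: mult_right_mono\<close>)
  also have "\<dots> = ennreal (2 * a^2) * (\<integral>\<^sup>+x\<in>A. ennreal (\<bar>f x\<bar>^2) \<partial>M)
      + ennreal (2 * b^2) * (\<integral>\<^sup>+x\<in>A. ennreal (\<bar>g x\<bar>^2) \<partial>M)"
    by (simp add: nn_integral_add nn_integral_cmult)
  finally show ?thesis .
qed

lemma unc5_lincomb:
  "unc5 (\<lambda>t S A M Sg. a * f t S A M Sg + b * g t S A M Sg) = (\<lambda>x. a * unc5 f x + b * unc5 g x)"
  by (auto simp: unc5_def fun_eq_iff split: prod.split)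

lemma Lp_P_lincomb:
  assumes models: "positive_models T x0 Ps" and f: "Lp_P T Ps 2 f" and g: "Lp_P T Ps 2 g"
  shows "Lp_P T Ps 2 (\<lambda>t S A M Sg. a * f t S A M Sg + b * g t S A M Sg)"
proof -
  let ?h = "\<lambda>t S A M Sg. a * f t S A M Sg + b * g t S A M Sg"
  have fm: "unc5 f \<in> borel_measurable (restrict_space borel (D0set T))"
    and gm: "unc5 g \<in> borel_measurable (restrict_space borel (D0set T))"
    using f g by (auto simp: Lp_P_def)
  obtain Bf Bg where Bf: "\<forall>P\<in>Ps. (\<integral>\<^sup>+\<omega>. time_integral T f 2 \<omega> \<partial>P) \<le> ennreal Bf"
    and Bg: "\<forall>P\<in>Ps. (\<integral>\<^sup>+\<omega>. time_integral T g 2 \<omega> \<partial>P) \<le> ennreal Bg"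
    using f g Lp_P_iff_time_integral[OF models] by meson
  have T0: "0 \<le> T" using models by (simp add: positive_models_def)
  have bound: "(\<integral>\<^sup>+\<omega>. time_integral T ?h 2 \<omega> \<partial>P) \<le> ennreal (2 * a^2 * max Bf 0 + 2 * b^2 * max Bg 0)"
    if P: "P \<in> Ps" for P
  proof -
    have mm: "model_measure T x0 P" using models P by (simp add: positive_models_def)
    have ext_h: "extend_D0 T ?h x = a * extend_D0 T f x + b * extend_D0 T g x" for x
      by (simp add: extend_D0_def unc5_lincomb)
    have "time_integral T ?h 2 \<omega>
        \<le> ennreal (2 * a^2) * time_integral T f 2 \<omega> + ennreal (2 * b^2) * time_integral T g 2 \<omega>"
      if "\<omega> \<in> space P" for \<omega>
      unfolding time_integral_def ext_h
      by (rule nn_integral_lincomb_square_le)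
         (use measurable_compose_Pair1[OF that measurable_extend_D0_path_state[OF mm T0]] fm gm in auto)
    then have "(\<integral>\<^sup>+\<omega>. time_integral T ?h 2 \<omega> \<partial>P)
        \<le> (\<integral>\<^sup>+\<omega>. ennreal (2 * a^2) * time_integral T f 2 \<omega> + ennreal (2 * b^2) * time_integral T g 2 \<omega> \<partial>P)"
      by (intro nn_integral_mono) auto
    also have "\<dots> = ennreal (2 * a^2) * (\<integral>\<^sup>+\<omega>. time_integral T f 2 \<omega> \<partial>P)
        + ennreal (2 * b^2) * (\<integral>\<^sup>+\<omega>. time_integral T g 2 \<omega> \<partial>P)"
      using measurable_time_integral[OF mm T0 fm] measurable_time_integral[OF mm T0 gm]
      by (simp add: nn_integral_add nn_integral_cmult)
    also have "\<dots> \<le> ennreal (2 * a^2) * ennreal (max Bf 0) + ennreal (2 * b^2) * ennreal (max Bg 0)"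
      using Bf Bg P by (intro add_mono mult_left_mono) (auto intro: order_trans ennreal_leI)
    also have "\<dots> = ennreal (2 * a^2 * max Bf 0 + 2 * b^2 * max Bg 0)"
      using ennreal_plus[of "2 * a^2 * max Bf 0" "2 * b^2 * max Bg 0"]
        ennreal_mult[of "2 * a^2" "max Bf 0"] ennreal_mult[of "2 * b^2" "max Bg 0"] by simp
    finally show ?thesis .
  qed
  have "unc5 ?h \<in> borel_measurable (restrict_space borel (D0set T))"
    unfolding unc5_lincomb using fm gm by measurable
  with bound show ?thesis using Lp_P_iff_time_integral[OF models] by blast
qed

lemma Lp_P_square:
  assumes "Lp_P T Ps (2 * p) f"
  shows "Lp_P T Ps p (\<lambda>t S A M Sg. (f t S A M Sg)^2)"
proof -
  have "unc5 f \<in> borel_measurable (restrict_space borel (D0set T))" using assms by (simp add: Lp_P_def)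
  moreover have "unc5 (\<lambda>t S A M Sg. (f t S A M Sg)^2) = (\<lambda>x. (unc5 f x)^2)"
    by (auto simp: unc5_def fun_eq_iff split: prod.split)
  ultimately have "unc5 (\<lambda>t S A M Sg. (f t S A M Sg)^2) \<in> borel_measurable (restrict_space borel (D0set T))"
    by simp
  moreover have "\<bar>x^2\<bar>^p = \<bar>x\<bar>^(2 * p)" for x :: real
    by (simp add: power_abs[symmetric] power_mult)
  ultimately show ?thesis using assms unfolding Lp_P_def by simp
qed

lemma Lp_P_const:
  assumes "positive_models T x0 Ps"
  shows "Lp_P T Ps p (\<lambda>t S A M Sg. c)"
proof -
  have T0: "0 \<le> T" using assms by (simp add: positive_models_def)
  have "(\<integral>\<^sup>+\<omega>. (\<integral>\<^sup>+t\<in>{0<..<T}. ennreal (\<bar>c\<bar> ^ p) \<partial>lborel) \<partial>P) = ennreal (\<bar>c\<bar>^p * T)"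
    if "P \<in> Ps" for P
  proof -
    have "prob_space P" using assms that by (simp add: positive_models_def model_measure_def)
    then show ?thesis
      using T0 by (simp add: nn_integral_cmult_indicator ennreal_mult prob_space.emeasure_space_1)
  qed
  then show ?thesis unfolding Lp_P_def by (auto simp: unc5_def case_prod_beta')
qed


section \<open>The pointwise estimate\<close>

lemma concave_quadratic_le:
  fixes m L xi b X w :: real
  assumes "w < 0" "0 \<le> xi"
  shows "m * L + xi * b * X + w/2 * (m^2 + xi * X^2) \<le> (L^2 + xi * b^2)/(-2 * w)"
proof -
  have c: "0 < -2 * w" using assms(1) by simp
  have 1: "m * L + w/2 * m^2 \<le> L^2/(-2 * w)"
  proof -
    have "0 \<le> (L + w * m)^2" by simp
    then have "(m * L + w/2 * m^2) * (-2 * w) \<le> L^2" by (simp add: power2_eq_square algebra_simps)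
    then show ?thesis by (simp only: pos_le_divide_eq[OF c])
  qed
  have "b * X + w/2 * X^2 \<le> b^2/(-2 * w)"
  proof -
    have "0 \<le> (b + w * X)^2" by simp
    then have "(b * X + w/2 * X^2) * (-2 * w) \<le> b^2" by (simp add: power2_eq_square algebra_simps)
    then show ?thesis by (simp only: pos_le_divide_eq[OF c])
  qed
  then have 2: "xi * (b * X + w/2 * X^2) \<le> xi * (b^2/(-2 * w))" using assms(2) by (rule mult_left_mono)
  have "m * L + xi * b * X + w/2 * (m^2 + xi * X^2) = (m * L + w/2 * m^2) + xi * (b * X + w/2 * X^2)"
    by (simp add: algebra_simps)
  also have "\<dots> \<le> L^2/(-2 * w) + xi * (b^2/(-2 * w))" using 1 2 by (rule add_mono)
  also have "\<dots> = (L^2 + xi * b^2)/(-2 * w)" by (simp add: add_divide_distrib)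
  finally show ?thesis .
qed

text \<open>The terms of \<open>H\<^sup>\<psi>\<close> involving the hedge form a concave quadratic in \<open>m = \<sigma> S D\<^sub>\<theta> + \<eta> D\<^sub>\<phi>\<close> and
  \<open>D\<^sub>\<phi>\<close> (with \<open>w\<^sup>\<psi>\<^sub>Y\<^sub>Y \<le> U''(y) < 0\<close>); its supremum is of order \<open>\<psi>\<^sup>2\<close> because the mixed
  derivatives \<open>w\<^sup>\<psi>\<^sub>S\<^sub>Y\<close>, \<open>w\<^sup>\<psi>\<^sub>\<Sigma>\<^sub>Y\<close> are of order \<open>\<psi>\<close>.\<close>

lemma hedging_terms_le:
  fixes sig S eta xi Dth Dph a b wYY u2 p DW WSg :: real
  assumes "wYY \<le> u2" "u2 < 0" "0 \<le> xi"
    and a: "a = -(u2 * p) * DW" and b: "b = -(u2 * p) * WSg"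
  shows "sig^2 * S^2 * Dth * a + sig * S * eta * Dph * a + sig * S * eta * Dth * b + Dph * (eta^2+xi) * b
        + sig^2 * S^2 * Dth^2 * wYY/2 + (eta^2+xi) * Dph^2 * wYY/2 + sig * S * eta * Dth * Dph * wYY
     \<le> (-u2) * p^2 * ((sig * (S * DW) + eta * WSg)^2 + xi * WSg^2) / 2"
proof -
  define m L where "m = sig * S * Dth + eta * Dph" and "L = sig * S * a + eta * b"
  have w: "wYY < 0" using assms by linarith
  have "sig^2 * S^2 * Dth * a + sig * S * eta * Dph * a + sig * S * eta * Dth * b + Dph * (eta^2+xi) * b
        + sig^2 * S^2 * Dth^2 * wYY/2 + (eta^2+xi) * Dph^2 * wYY/2 + sig * S * eta * Dth * Dph * wYY
      = m * L + xi * b * Dph + wYY/2 * (m^2 + xi * Dph^2)"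
    unfolding m_def L_def power2_eq_square by (simp add: algebra_simps)
  also have "\<dots> \<le> (L^2 + xi * b^2)/(-2 * wYY)"
    by (rule concave_quadratic_le[OF w assms(3)])
  also have "\<dots> \<le> (L^2 + xi * b^2)/(-2 * u2)"
    by (rule divide_left_mono) (use assms w in \<open>auto intro: mult_neg_neg\<close>)
  also have "L^2 + xi * b^2 = u2^2 * p^2 * ((sig * (S * DW) + eta * WSg)^2 + xi * WSg^2)"
    unfolding L_def a b power2_eq_square by (simp add: algebra_simps)
  also have "u2^2 * p^2 * ((sig * (S * DW) + eta * WSg)^2 + xi * WSg^2) / (-2 * u2)
      = (-u2) * p^2 * ((sig * (S * DW) + eta * WSg)^2 + xi * WSg^2) / 2"
    using assms(2) by (simp add: power2_eq_square)
  finally show ?thesis .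
qed

lemma zeta_component_deviation_le:
  fixes p ps Pm Cw w d Kb :: real
  assumes "0 < p" "p < 1" "0 < ps" "ps \<le> Pm" "\<bar>w\<bar> \<le> Cw" "\<bar>d\<bar> \<le> Kb * p^2" "0 \<le> Kb"
  shows "\<bar>(if I then p * ps * w else 0) + d\<bar> \<le> p * (Pm * Cw + Kb)"
proof -
  have "p^2 \<le> p" using assms by (simp add: power2_eq_square mult_left_le)
  then have "Kb * p^2 \<le> Kb * p" using assms(7) by (rule mult_left_mono)
  then have "\<bar>d\<bar> \<le> p * Kb" using assms(6) by (simp add: mult.commute)
  moreover have "\<bar>if I then p * ps * w else 0\<bar> \<le> p * (Pm * Cw)"
  proof -
    have "\<bar>ps * w\<bar> \<le> Pm * Cw" using assms(3-5) by (intro abs_mult_le_mult) auto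
    then have "p * \<bar>ps * w\<bar> \<le> p * (Pm * Cw)" using assms(1) by (intro mult_left_mono) auto
    moreover have "0 \<le> Pm * Cw" using assms(3-5) by (intro mult_nonneg_nonneg) auto
    ultimately show ?thesis using assms(1) by (auto simp: abs_mult)
  qed
  ultimately show ?thesis by (simp add: algebra_simps)
qed

text \<open>One component of \<open>\<psi> v\<^sup>T\<zeta>\<^sup>~/2 + f(\<Sigma>,\<zeta>)/\<psi> - v\<^sup>T(\<zeta> - \<zeta>\<^sup>0)\<close>, where \<open>\<zeta> - \<zeta>\<^sup>0 = \<psi>\<Psi>w + d\<close> in the
  interior and \<open>= d\<close> on the boundary, with \<open>|d| \<le> K \<psi>\<^sup>2\<close>. In the interior the \<open>O(\<psi>)\<close> part is
  \<open>\<psi> \<psi>\<^sub>i (w\<^sub>i - v\<^sub>i) w\<^sub>i / 2\<close>, which cancels in the sum by complementary slackness.\<close>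

lemma penalty_component_le:
  fixes p ps w v d e Cw B Kb :: real
  assumes p: "0 < p" "p < 1" and ps: "0 < ps" and e: "e = (if I then p * ps * w else 0) + d"
    and w: "\<bar>w\<bar> \<le> Cw" and v: "\<bar>v\<bar> \<le> B" and d: "\<bar>d\<bar> \<le> Kb * p^2"
  shows "p * (v * ps * w)/2 + e^2/ps/2/p - v * e
    \<le> (if I then p * ps * (w - v) * w/2 else 0)
      + p^(if I then 2 else 1) * (B * ps * Cw/2 + (Cw + B) * Kb + Kb^2/ps/2 + B * Kb)"
proof -
  have B0: "0 \<le> B" and C0: "0 \<le> Cw" using v w by linarith+
  have K0: "0 \<le> Kb" using d p by (smt (verit) abs_ge_zero zero_less_power zero_le_mult_iff)
  have d2: "d^2 \<le> Kb^2 * p^2 * p^2" using square_le_of_abs_le[OF d] by (simp add: power2_eq_square mult_ac)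
  have p2: "p^2 \<le> p" using p by (simp add: power2_eq_square mult_left_le)
  show ?thesis
  proof (cases I)
    case True
    have "p * (v * ps * w)/2 + e^2/ps/2/p - v * e = p * ps * (w - v) * w/2 + ((w - v) * d + d^2/(2 * p * ps))"
      unfolding e using True p ps by (simp add: field_simps power2_eq_square)
    moreover have "(w - v) * d \<le> (Cw + B) * (Kb * p^2)"
      using abs_mult_le_mult[of "w - v" "Cw + B" d "Kb * p^2"] w v d by (auto simp: abs_le_iff)
    moreover have "d^2/(2 * p * ps) \<le> p^2 * (Kb^2/ps/2)"
    proof -
      have "d^2 \<le> Kb^2 * p^2 * p"
        using d2 mult_left_mono[OF p2, of "Kb^2 * p^2"] by simp
      also have "\<dots> = (p^2 * (Kb^2/ps/2)) * (2 * p * ps)" using ps by (simp add: field_simps)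
      finally have "d^2 \<le> (p^2 * (Kb^2/ps/2)) * (2 * p * ps)" .
      then show ?thesis using p ps by (simp add: divide_le_eq)
    qed
    moreover have "0 \<le> p^2 * (B * ps * Cw/2 + B * Kb)" using B0 C0 K0 ps by simp
    ultimately have "p * (v * ps * w)/2 + e^2/ps/2/p - v * e \<le> p * ps * (w - v) * w/2
        + ((Cw + B) * (Kb * p^2) + p^2 * (Kb^2/ps/2) + p^2 * (B * ps * Cw/2 + B * Kb))"
      by linarith
    then show ?thesis using True by (simp add: algebra_simps)
  next
    case False
    have "p * (v * ps * w)/2 \<le> p * (B * ps * Cw/2)"
      using abs_mult_le_mult[OF v w] p ps by (auto simp: abs_le_iff mult_left_mono)
    moreover have "e^2/ps/2/p \<le> p * (Kb^2/ps/2)"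
    proof -
      have "d^2 \<le> Kb^2 * p^2"
        using d2 mult_left_mono[OF power_le_one[of p 2], of "Kb^2 * p^2"] p by (simp add: mult.assoc)
      then have "d^2/(2 * ps * p) \<le> Kb^2 * p^2/(2 * ps * p)" using p ps by (intro divide_right_mono) auto
      then show ?thesis using p ps False e by (simp add: field_simps power2_eq_square)
    qed
    moreover have "- (v * e) \<le> p * (B * Kb)"
    proof -
      have "\<bar>v * d\<bar> \<le> B * (Kb * p^2)" using v d by (rule abs_mult_le_mult)
      also have "\<dots> \<le> B * (Kb * p)" using p2 B0 K0 by (intro mult_left_mono) auto
      finally show ?thesis using False e by (simp add: abs_le_iff algebra_simps)
    qed
    moreover have "0 \<le> p * ((Cw + B) * Kb)" using B0 C0 K0 p by simp
    ultimately have "p * (v * ps * w)/2 + e^2/ps/2/p - v * e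
        \<le> p * (B * ps * Cw/2) + p * ((Cw + B) * Kb) + p * (Kb^2/ps/2) + p * (B * Kb)"
      by linarith
    then show ?thesis using False by (simp add: algebra_simps)
  qed
qed


definition hamiltonian_constant :: "zeta4 \<Rightarrow> real \<Rightarrow> real \<Rightarrow> real \<Rightarrow> real \<Rightarrow> real \<Rightarrow> real \<Rightarrow> real \<Rightarrow> real" where
  "hamiltonian_constant psis KV Kw Sgu sgu etl etu xiu =
     (let Pm = z1 psis + z2 psis + z3 psis + z4 psis;
          iP = 1 / z1 psis + 1 / z2 psis + 1 / z3 psis + 1 / z4 psis;
          B = (1 + Sgu) * KV; Cw = multiplier_bound psis B; c = Pm * Cw; etab = \<bar>etl\<bar> + \<bar>etu\<bar>
      in B * Pm * Cw/2 + 4 * (Cw + B) + iP/2 + 4 * B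
         + (sgu + Sgu) * (c^2 + 2)/2 + 2 * KV * (2 * c^2 + 2)
         + Kw * (4 * B * (c + 1) + 2 * KV * (2 * c^2 + 2))
         + (c^2 + 2) + sgu * (c^2 + 2) + (etab + 1) * (c^2 + 2)/2
         + (sgu^2 + (etab^2 + xiu)))"

text \<open>The data of the estimate at one point \<open>(t, x, y)\<close>: \<open>u\<^sub>1 = U'(y)\<close>, \<open>u\<^sub>2 = U''(y)\<close>, \<open>p = \<psi>\<close>;
  \<open>W\<close> and the \<open>W\<^sub>\<dots>\<close> are \<open>w\<^sup>~\<close> and its Greeks, the \<open>V\<^sub>\<dots>\<close> the Greeks of the option entering \<open>v\<close>;
  \<open>\<zeta>\<^sup>~ = \<Psi>w\<close>, and \<open>\<zeta> = (\<nu>, \<sigma>, \<eta>, \<xi>)\<close> differs from \<open>\<zeta>\<^sup>\<psi>\<close> by \<open>d\<close>. \<open>S\<^sub>1\<close> dominates \<open>1\<close>, \<open>K\<^sup>2\<close>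
  and the squared Greeks of \<open>w\<^sup>~\<close>.\<close>

locale hamiltonian_estimate =
  fixes psis :: zeta4 and u1 u2 p :: real and I :: bool
    and W Kw WA WSg GW dDW WSgSg DW be S Sg Sgu VSg E2V dDV VSgSg KV :: real
    and w1 w2 w3 w4 nu sig eta xi d1 d2 d3 d4 Kb sgu etl etu xiu S1 :: real
  assumes U_derivs: "0 < u1" "u2 < 0"
    and psi: "0 < p" "p < 1"
    and point: "0 < S" "0 < Sg" "Sg \<le> Sgu"
    and zeta_range: "0 \<le> sig" "sig \<le> sgu" "etl \<le> eta" "eta \<le> etu" "0 \<le> xi" "xi \<le> xiu"
    and w_range: "0 \<le> W" "W \<le> Kw"
    and V_bounds: "\<bar>VSg\<bar> \<le> KV" "\<bar>E2V\<bar> \<le> KV" "\<bar>S * dDV\<bar> \<le> KV" "\<bar>VSgSg\<bar> \<le> KV"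
    and Psi_pos: "0 < z1 psis" "0 < z2 psis" "0 < z3 psis" "0 < z4 psis"
    and slackness: "z1 psis * (w1 - VSg) * w1 + z2 psis * (w2 - Sg * E2V) * w2
      + z3 psis * (w3 - Sg * S * dDV) * w3 + z4 psis * (w4 - VSgSg/2) * w4 = 0"
    and w_bounds: "\<bar>w1\<bar> \<le> multiplier_bound psis ((1 + Sgu) * KV)"
      "\<bar>w2\<bar> \<le> multiplier_bound psis ((1 + Sgu) * KV)"
      "\<bar>w3\<bar> \<le> multiplier_bound psis ((1 + Sgu) * KV)"
      "\<bar>w4\<bar> \<le> multiplier_bound psis ((1 + Sgu) * KV)"
    and zeta_eq: "nu = (if I then p * z1 psis * w1 else 0) + d1"
      "sig = Sg + ((if I then p * z2 psis * w2 else 0) + d2)"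
      "eta = (if I then p * z3 psis * w3 else 0) + d3"
      "xi = (if I then p * z4 psis * w4 else 0) + d4"
    and d_bounds: "\<bar>d1\<bar> \<le> Kb * p^2" "\<bar>d2\<bar> \<le> Kb * p^2" "\<bar>d3\<bar> \<le> Kb * p^2" "\<bar>d4\<bar> \<le> Kb * p^2"
    and S1_bounds: "1 \<le> S1" "Kb^2 \<le> S1" "(be * WA + S^2 * GW)^2 \<le> S1" "WSg^2 \<le> S1"
      "(S * dDW)^2 \<le> S1" "WSgSg^2 \<le> S1" "(S * DW)^2 \<le> S1"
begin

abbreviation "ps1 \<equiv> z1 psis"
abbreviation "ps2 \<equiv> z2 psis"
abbreviation "ps3 \<equiv> z3 psis"
abbreviation "ps4 \<equiv> z4 psis"
abbreviation "Pm \<equiv> ps1 + ps2 + ps3 + ps4"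
abbreviation "iP \<equiv> 1 / ps1 + 1 / ps2 + 1 / ps3 + 1 / ps4"
abbreviation "B \<equiv> (1 + Sgu) * KV"
abbreviation "Cw \<equiv> multiplier_bound psis B"
abbreviation "c \<equiv> Pm * Cw"
abbreviation "E \<equiv> c + Kb"
abbreviation "etab \<equiv> \<bar>etl\<bar> + \<bar>etu\<bar>"
abbreviation "pk \<equiv> p ^ (if I then 2 else 1)"

lemma nonneg: "0 \<le> KV" "0 \<le> Kw" "0 \<le> Kb" "0 \<le> Cw" "0 \<le> B" "0 \<le> c" "0 \<le> E" "0 \<le> iP"
proof -
  show KV: "0 \<le> KV" and "0 \<le> Kw" and Cw: "0 \<le> Cw" using V_bounds w_range w_bounds by linarith+
  show Kb: "0 \<le> Kb" using d_bounds(1) psi by (smt (verit) abs_ge_zero zero_less_power zero_le_mult_iff)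
  show "0 \<le> B" using KV point by simp
  show "0 \<le> c" "0 \<le> E" "0 \<le> iP" using Cw Kb Psi_pos by simp_all
qed

lemma pk_bounds: "p^2 \<le> pk" "0 \<le> pk"
  using psi by (auto simp: power2_eq_square mult_left_le)

lemma scale_pk:
  assumes "x \<le> a * pk * (C * S1)" "0 \<le> a" "a \<le> u1 - u2" "0 \<le> C"
  shows "x \<le> (u1 - u2) * pk * (C * S1)"
proof -
  have "a * pk * (C * S1) \<le> (u1 - u2) * pk * (C * S1)"
    using assms(2-4) pk_bounds S1_bounds(1) by (intro mult_right_mono) auto
  with assms(1) show ?thesis by linarith
qed

lemma scale_to_pk:
  assumes "x \<le> a * p^2 * (C * S1)" "0 \<le> a" "a \<le> u1 - u2" "0 \<le> C"
  shows "x \<le> (u1 - u2) * pk * (C * S1)"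
proof (rule scale_pk[OF _ assms(2-4)])
  show "x \<le> a * pk * (C * S1)"
    using assms pk_bounds S1_bounds(1) by (smt (verit) mult_left_mono mult_right_mono zero_le_mult_iff)
qed

lemma zeta_deviation: "\<bar>nu\<bar> \<le> p * E" "\<bar>sig - Sg\<bar> \<le> p * E" "\<bar>eta\<bar> \<le> p * E" "\<bar>xi\<bar> \<le> p * E"
proof -
  have Pm: "ps1 \<le> Pm" "ps2 \<le> Pm" "ps3 \<le> Pm" "ps4 \<le> Pm" using Psi_pos by auto
  note dev = zeta_component_deviation_le[OF psi _ _ _ _ nonneg(3)]
  from dev[OF Psi_pos(1) Pm(1) w_bounds(1) d_bounds(1)] dev[OF Psi_pos(2) Pm(2) w_bounds(2) d_bounds(2)]
    dev[OF Psi_pos(3) Pm(3) w_bounds(3) d_bounds(3)] dev[OF Psi_pos(4) Pm(4) w_bounds(4) d_bounds(4)]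
  show "\<bar>nu\<bar> \<le> p * E" "\<bar>sig - Sg\<bar> \<le> p * E" "\<bar>eta\<bar> \<le> p * E" "\<bar>xi\<bar> \<le> p * E"
    using zeta_eq by simp_all
qed

lemma S1_dominates:
  shows "Kb \<le> S1" "E \<le> (c + 1) * S1" "E^2 \<le> (2 * c^2 + 2) * S1"
    and "X^2 \<le> S1 \<Longrightarrow> E * \<bar>X\<bar> \<le> (c^2 + 2) * S1"
proof -
  show Kb: "Kb \<le> S1"
  proof (cases "Kb \<le> 1")
    case False
    then have "Kb * 1 \<le> Kb * Kb" by (intro mult_left_mono) auto
    then show ?thesis using S1_bounds(2) by (simp add: power2_eq_square)
  qed (use S1_bounds(1) in linarith)
  have cS: "c \<le> c * S1" "c^2 \<le> c^2 * S1" using S1_bounds(1) nonneg(6) by (simp_all add: mult_le_cancel_left1)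
  then show "E \<le> (c + 1) * S1" using Kb by (simp add: algebra_simps)
  have "0 \<le> (c - Kb)^2" by simp
  then have "E^2 \<le> 2 * c^2 + 2 * Kb^2" by (simp add: power2_eq_square algebra_simps)
  then show E2: "E^2 \<le> (2 * c^2 + 2) * S1" using cS S1_bounds(2) by (simp add: algebra_simps)
  assume "X^2 \<le> S1"
  have "0 \<le> (E - \<bar>X\<bar>)^2" by simp
  then have "E * \<bar>X\<bar> \<le> (E^2 + X^2)/2" by (simp add: power2_eq_square algebra_simps)
  also have "\<dots> \<le> (c^2 + 2) * S1" using E2 \<open>X^2 \<le> S1\<close> S1_bounds(1) by (simp add: algebra_simps)
  finally show "E * \<bar>X\<bar> \<le> (c^2 + 2) * S1" .
qed

lemma v_bounds: "\<bar>VSg\<bar> \<le> B" "\<bar>Sg * E2V\<bar> \<le> B" "\<bar>Sg * S * dDV\<bar> \<le> B" "\<bar>VSgSg/2\<bar> \<le> B"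
proof -
  have "KV \<le> B" "Sgu * KV \<le> B" using nonneg(1) point by (simp_all add: algebra_simps)
  moreover have "\<bar>Sg * E2V\<bar> \<le> Sgu * KV" "\<bar>Sg * (S * dDV)\<bar> \<le> Sgu * KV"
    using point V_bounds(2,3) by (auto intro: abs_mult_le_mult)
  ultimately show "\<bar>VSg\<bar> \<le> B" "\<bar>Sg * E2V\<bar> \<le> B" "\<bar>Sg * S * dDV\<bar> \<le> B" "\<bar>VSgSg/2\<bar> \<le> B"
    using V_bounds by (auto simp: mult.assoc)
qed

lemma penalty_constant_le:
  "B * Pm * Cw/2 + 4 * (Cw + B) * Kb + Kb^2 * iP/2 + 4 * B * Kb
    \<le> (B * Pm * Cw/2 + 4 * (Cw + B) + iP/2 + 4 * B) * S1"
  and penalty_constant_nonneg: "0 \<le> B * Pm * Cw/2 + 4 * (Cw + B) + iP/2 + 4 * B"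
proof -
  show "0 \<le> B * Pm * Cw/2 + 4 * (Cw + B) + iP/2 + 4 * B"
    using nonneg Psi_pos point by (intro add_nonneg_nonneg mult_nonneg_nonneg divide_nonneg_nonneg) auto
  have "0 \<le> B * Pm * Cw/2" using nonneg Psi_pos by simp
  then have "B * Pm * Cw/2 \<le> B * Pm * Cw/2 * S1"
    using S1_bounds(1) by (metis mult.right_neutral mult_left_mono)
  moreover have "4 * (Cw + B) * Kb \<le> 4 * (Cw + B) * S1" "4 * B * Kb \<le> 4 * B * S1"
    using S1_dominates(1) nonneg by (simp_all add: mult_left_mono)
  moreover have "Kb^2 * iP/2 \<le> iP/2 * S1"
    using mult_right_mono[OF S1_bounds(2) nonneg(8)] by (simp add: mult.commute)
  moreover have "(B * Pm * Cw/2 + 4 * (Cw + B) + iP/2 + 4 * B) * S1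
      = B * Pm * Cw/2 * S1 + 4 * (Cw + B) * S1 + iP/2 * S1 + 4 * B * S1"
    by (simp only: distrib_right)
  ultimately show "B * Pm * Cw/2 + 4 * (Cw + B) * Kb + Kb^2 * iP/2 + 4 * B * Kb
    \<le> (B * Pm * Cw/2 + 4 * (Cw + B) + iP/2 + 4 * B) * S1" by linarith
qed

lemma penalty_term_le:
  "u1 * (p * (VSg * (ps1 * w1) + (Sg * E2V) * (ps2 * w2) + (Sg * S * dDV) * (ps3 * w3) + (VSgSg/2) * (ps4 * w4))/2
      + ((nu^2/ps1 + (sig - Sg)^2/ps2 + eta^2/ps3 + xi^2/ps4)/2)/p
      - (VSg * nu + (Sg * E2V) * (sig - Sg) + (Sg * S * dDV) * eta + (VSgSg/2) * xi))
   \<le> (u1 - u2) * pk * ((B * Pm * Cw/2 + 4 * (Cw + B) + iP/2 + 4 * B) * S1)"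
proof (rule scale_pk)
  note comp = penalty_component_le[OF psi, of _ _ I]
  have c1: "p * (VSg * ps1 * w1)/2 + nu^2/ps1/2/p - VSg * nu
      \<le> (if I then p * ps1 * (w1 - VSg) * w1/2 else 0) + pk * (B * ps1 * Cw/2 + (Cw + B) * Kb + Kb^2/ps1/2 + B * Kb)"
    by (rule comp[OF Psi_pos(1) zeta_eq(1) w_bounds(1) v_bounds(1) d_bounds(1)])
  have c2: "p * ((Sg * E2V) * ps2 * w2)/2 + (sig - Sg)^2/ps2/2/p - (Sg * E2V) * (sig - Sg)
      \<le> (if I then p * ps2 * (w2 - Sg * E2V) * w2/2 else 0) + pk * (B * ps2 * Cw/2 + (Cw + B) * Kb + Kb^2/ps2/2 + B * Kb)"
    by (rule comp[OF Psi_pos(2) _ w_bounds(2) v_bounds(2) d_bounds(2)]) (simp add: zeta_eq(2))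
  have c3: "p * ((Sg * S * dDV) * ps3 * w3)/2 + eta^2/ps3/2/p - (Sg * S * dDV) * eta
      \<le> (if I then p * ps3 * (w3 - Sg * S * dDV) * w3/2 else 0) + pk * (B * ps3 * Cw/2 + (Cw + B) * Kb + Kb^2/ps3/2 + B * Kb)"
    by (rule comp[OF Psi_pos(3) zeta_eq(3) w_bounds(3) v_bounds(3) d_bounds(3)])
  have c4: "p * ((VSgSg/2) * ps4 * w4)/2 + xi^2/ps4/2/p - (VSgSg/2) * xi
      \<le> (if I then p * ps4 * (w4 - VSgSg/2) * w4/2 else 0) + pk * (B * ps4 * Cw/2 + (Cw + B) * Kb + Kb^2/ps4/2 + B * Kb)"
    by (rule comp[OF Psi_pos(4) zeta_eq(4) w_bounds(4) v_bounds(4) d_bounds(4)])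
  have "(if I then p * ps1 * (w1 - VSg) * w1/2 else 0) + (if I then p * ps2 * (w2 - Sg * E2V) * w2/2 else 0)
      + (if I then p * ps3 * (w3 - Sg * S * dDV) * w3/2 else 0) + (if I then p * ps4 * (w4 - VSgSg/2) * w4/2 else 0)
      = (if I then p/2 * (ps1 * (w1 - VSg) * w1 + ps2 * (w2 - Sg * E2V) * w2
          + ps3 * (w3 - Sg * S * dDV) * w3 + ps4 * (w4 - VSgSg/2) * w4) else 0)"
    by (simp add: field_simps)
  also have "\<dots> = 0" using slackness by simp
  finally have interior_parts: "(if I then p * ps1 * (w1 - VSg) * w1/2 else 0)
      + (if I then p * ps2 * (w2 - Sg * E2V) * w2/2 else 0) + (if I then p * ps3 * (w3 - Sg * S * dDV) * w3/2 else 0)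
      + (if I then p * ps4 * (w4 - VSgSg/2) * w4/2 else 0) = 0" .
  have "pk * (B * ps1 * Cw/2 + (Cw + B) * Kb + Kb^2/ps1/2 + B * Kb) + pk * (B * ps2 * Cw/2 + (Cw + B) * Kb + Kb^2/ps2/2 + B * Kb)
      + pk * (B * ps3 * Cw/2 + (Cw + B) * Kb + Kb^2/ps3/2 + B * Kb) + pk * (B * ps4 * Cw/2 + (Cw + B) * Kb + Kb^2/ps4/2 + B * Kb)
      = pk * (B * Pm * Cw/2 + 4 * (Cw + B) * Kb + Kb^2 * iP/2 + 4 * B * Kb)"
    by (simp add: algebra_simps add_divide_distrib)
  also have "\<dots> \<le> pk * ((B * Pm * Cw/2 + 4 * (Cw + B) + iP/2 + 4 * B) * S1)"
    by (rule mult_left_mono[OF penalty_constant_le pk_bounds(2)])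
  finally have pk_parts: "pk * (B * ps1 * Cw/2 + (Cw + B) * Kb + Kb^2/ps1/2 + B * Kb)
      + pk * (B * ps2 * Cw/2 + (Cw + B) * Kb + Kb^2/ps2/2 + B * Kb)
      + pk * (B * ps3 * Cw/2 + (Cw + B) * Kb + Kb^2/ps3/2 + B * Kb)
      + pk * (B * ps4 * Cw/2 + (Cw + B) * Kb + Kb^2/ps4/2 + B * Kb)
      \<le> pk * ((B * Pm * Cw/2 + 4 * (Cw + B) + iP/2 + 4 * B) * S1)" .
  have "p * (VSg * (ps1 * w1) + (Sg * E2V) * (ps2 * w2) + (Sg * S * dDV) * (ps3 * w3) + (VSgSg/2) * (ps4 * w4))/2
      + ((nu^2/ps1 + (sig - Sg)^2/ps2 + eta^2/ps3 + xi^2/ps4)/2)/p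
      - (VSg * nu + (Sg * E2V) * (sig - Sg) + (Sg * S * dDV) * eta + (VSgSg/2) * xi)
    = (p * (VSg * ps1 * w1)/2 + nu^2/ps1/2/p - VSg * nu)
      + (p * ((Sg * E2V) * ps2 * w2)/2 + (sig - Sg)^2/ps2/2/p - (Sg * E2V) * (sig - Sg))
      + (p * ((Sg * S * dDV) * ps3 * w3)/2 + eta^2/ps3/2/p - (Sg * S * dDV) * eta)
      + (p * ((VSgSg/2) * ps4 * w4)/2 + xi^2/ps4/2/p - (VSgSg/2) * xi)"
    by (simp add: add_divide_distrib diff_divide_distrib algebra_simps)
  also have "\<dots> \<le> pk * ((B * Pm * Cw/2 + 4 * (Cw + B) + iP/2 + 4 * B) * S1)"
    using c1 c2 c3 c4 interior_parts pk_parts by linarith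
  finally have "p * (VSg * (ps1 * w1) + (Sg * E2V) * (ps2 * w2) + (Sg * S * dDV) * (ps3 * w3)
        + (VSgSg/2) * (ps4 * w4))/2 + ((nu^2/ps1 + (sig - Sg)^2/ps2 + eta^2/ps3 + xi^2/ps4)/2)/p
      - (VSg * nu + (Sg * E2V) * (sig - Sg) + (Sg * S * dDV) * eta + (VSgSg/2) * xi)
    \<le> pk * ((B * Pm * Cw/2 + 4 * (Cw + B) + iP/2 + 4 * B) * S1)" .
  then show "u1 * (p * (VSg * (ps1 * w1) + (Sg * E2V) * (ps2 * w2) + (Sg * S * dDV) * (ps3 * w3)
        + (VSgSg/2) * (ps4 * w4))/2 + ((nu^2/ps1 + (sig - Sg)^2/ps2 + eta^2/ps3 + xi^2/ps4)/2)/p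
      - (VSg * nu + (Sg * E2V) * (sig - Sg) + (Sg * S * dDV) * eta + (VSgSg/2) * xi))
    \<le> u1 * pk * ((B * Pm * Cw/2 + 4 * (Cw + B) + iP/2 + 4 * B) * S1)"
    using U_derivs by (simp add: mult.assoc)
qed (use U_derivs penalty_constant_nonneg in auto)

lemma neg_mult_le_of_abs_le: "0 \<le> k \<Longrightarrow> \<bar>y\<bar> \<le> M \<Longrightarrow> -(k * y) \<le> k * (M::real)"
  by (metis abs_le_D2 mult_left_mono mult_minus_right)

lemma volatility_term_le:
  "-(u1 * p) * (sig^2 - Sg^2) * (be * WA + S^2 * GW)/2 \<le> (u1 - u2) * pk * ((sgu + Sgu) * (c^2 + 2)/2 * S1)"
proof (rule scale_to_pk)
  let ?X = "be * WA + S^2 * GW"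
  have "\<bar>sig + Sg\<bar> \<le> sgu + Sgu" using zeta_range point by auto
  then have "\<bar>(sig - Sg) * (sig + Sg)\<bar> \<le> p * E * (sgu + Sgu)"
    using zeta_deviation(2) by (intro abs_mult_le_mult) auto
  moreover have "sig^2 - Sg^2 = (sig - Sg) * (sig + Sg)" by (simp add: power2_eq_square algebra_simps)
  ultimately have X: "\<bar>(sig^2 - Sg^2) * ?X\<bar> \<le> (p * E * (sgu + Sgu)) * \<bar>?X\<bar>"
    by (intro abs_mult_le_mult) auto
  have "-(u1 * p) * (sig^2 - Sg^2) * ?X/2 = -(u1 * p/2 * ((sig^2 - Sg^2) * ?X))" by simp
  also have "\<dots> \<le> u1 * p/2 * ((p * E * (sgu + Sgu)) * \<bar>?X\<bar>)"
    using U_derivs psi X by (intro neg_mult_le_of_abs_le) auto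
  also have "\<dots> = u1 * p^2 * ((sgu + Sgu)/2 * (E * \<bar>?X\<bar>))" by (simp add: power2_eq_square)
  also have "\<dots> \<le> u1 * p^2 * ((sgu + Sgu)/2 * ((c^2 + 2) * S1))"
    using S1_dominates(4)[OF S1_bounds(3)] U_derivs zeta_range point by (intro mult_left_mono) auto
  finally show "-(u1 * p) * (sig^2 - Sg^2) * ?X/2 \<le> u1 * p^2 * ((sgu + Sgu) * (c^2 + 2)/2 * S1)"
    by simp
qed (use U_derivs zeta_range point in auto)

abbreviation "ve \<equiv> VSg * nu + (Sg * E2V) * (sig - Sg) + (Sg * S * dDV) * eta + (VSgSg/2) * xi"
abbreviation "qe \<equiv> E2V * (sig - Sg)^2/2 + (sig - Sg) * eta * (S * dDV) + eta^2 * VSgSg/2"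

lemma bV_split: "nu * VSg + E2V * (sig^2 - Sg^2)/2 + sig * eta * S * dDV + (eta^2 + xi) * VSgSg/2 = ve + qe"
  by (simp add: power2_eq_square field_simps)

lemma qe_bound: "\<bar>qe\<bar> \<le> p^2 * (2 * KV * E^2)"
proof -
  note dev = zeta_deviation
  have "\<bar>E2V * (sig - Sg)^2\<bar> \<le> KV * (p * E)^2"
    using V_bounds(2) square_le_of_abs_le[OF dev(2)] by (intro abs_mult_le_mult) auto
  then have "\<bar>E2V * (sig - Sg)^2/2\<bar> \<le> KV * (p * E)^2/2" by simp
  moreover have "\<bar>(sig - Sg) * eta * (S * dDV)\<bar> \<le> (p * E) * (p * E) * KV"
    by (intro abs_mult_le_mult dev V_bounds)
  moreover have "\<bar>eta^2 * VSgSg\<bar> \<le> (p * E)^2 * KV"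
    using V_bounds(4) square_le_of_abs_le[OF dev(3)] by (intro abs_mult_le_mult) auto
  then have "\<bar>eta^2 * VSgSg/2\<bar> \<le> (p * E)^2 * KV/2" by simp
  ultimately have "\<bar>qe\<bar> \<le> KV * (p * E)^2/2 + (p * E) * (p * E) * KV + (p * E)^2 * KV/2" by linarith
  also have "\<dots> = p^2 * (2 * KV * E^2)" by (simp add: power2_eq_square algebra_simps)
  finally show ?thesis .
qed

lemma vega_convexity_term_le: "-(u1 * qe) \<le> (u1 - u2) * pk * (2 * KV * (2 * c^2 + 2) * S1)"
proof (rule scale_to_pk)
  have "-(u1 * qe) \<le> u1 * (p^2 * (2 * KV * E^2))"
    using U_derivs qe_bound by (intro neg_mult_le_of_abs_le) auto
  also have "\<dots> \<le> u1 * (p^2 * (2 * KV * ((2 * c^2 + 2) * S1)))"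
    using S1_dominates(3) U_derivs nonneg by (intro mult_left_mono) auto
  finally show "-(u1 * qe) \<le> u1 * p^2 * (2 * KV * (2 * c^2 + 2) * S1)" by (simp add: mult_ac)
qed (use U_derivs nonneg in auto)

lemma drift_term_le:
  "u2 * W * p * (ve + qe) \<le> (u1 - u2) * pk * (Kw * (4 * B * (c + 1) + 2 * KV * (2 * c^2 + 2)) * S1)"
proof (rule scale_to_pk)
  note dev = zeta_deviation
  have "\<bar>VSg * nu\<bar> \<le> B * (p * E)" "\<bar>(Sg * E2V) * (sig - Sg)\<bar> \<le> B * (p * E)"
    "\<bar>(Sg * S * dDV) * eta\<bar> \<le> B * (p * E)" "\<bar>(VSgSg/2) * xi\<bar> \<le> B * (p * E)"
    by (intro abs_mult_le_mult v_bounds dev)+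
  then have "\<bar>ve\<bar> \<le> p * (4 * B * E)" by (simp add: algebra_simps)
  moreover have "p^2 * (2 * KV * E^2) \<le> p * (2 * KV * E^2)"
    using psi nonneg by (intro mult_right_mono) (auto simp: power2_eq_square mult_left_le)
  ultimately have bV: "\<bar>ve + qe\<bar> \<le> p * (4 * B * E + 2 * KV * E^2)"
    using qe_bound by (simp add: algebra_simps; linarith)
  have "\<bar>u2 * W * p\<bar> \<le> (-u2) * Kw * p" using U_derivs w_range psi by (simp add: abs_mult mult_mono)
  then have "u2 * W * p * (ve + qe) \<le> ((-u2) * Kw * p) * (p * (4 * B * E + 2 * KV * E^2))"
    by (rule abs_le_D1[OF abs_mult_le_mult[OF _ bV]])
  also have "\<dots> = (-u2) * p^2 * (Kw * (4 * B * E + 2 * KV * E^2))" by (simp add: power2_eq_square)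
  also have "\<dots> \<le> (-u2) * p^2 * (Kw * ((4 * B * (c + 1) + 2 * KV * (2 * c^2 + 2)) * S1))"
  proof (intro mult_left_mono)
    show "4 * B * E + 2 * KV * E^2 \<le> (4 * B * (c + 1) + 2 * KV * (2 * c^2 + 2)) * S1"
      using mult_left_mono[OF S1_dominates(2), of "4 * B"] mult_left_mono[OF S1_dominates(3), of "2 * KV"] nonneg
      by (simp add: algebra_simps)
  qed (use U_derivs nonneg in \<open>simp_all add: mult_nonpos_nonneg\<close>)
  finally show "u2 * W * p * (ve + qe)
      \<le> (-u2) * p^2 * (Kw * (4 * B * (c + 1) + 2 * KV * (2 * c^2 + 2)) * S1)"
    by (simp add: mult_ac)
qed (use U_derivs nonneg point in auto)

lemma nu_term_le: "-(u1 * p) * nu * WSg \<le> (u1 - u2) * pk * ((c^2 + 2) * S1)"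
proof (rule scale_to_pk)
  have "-(u1 * p) * nu * WSg = -(u1 * p * (nu * WSg))" by simp
  also have "\<dots> \<le> u1 * p * ((p * E) * \<bar>WSg\<bar>)"
    using U_derivs psi zeta_deviation(1) by (intro neg_mult_le_of_abs_le abs_mult_le_mult) auto
  also have "\<dots> = u1 * p^2 * (E * \<bar>WSg\<bar>)" by (simp add: power2_eq_square)
  also have "\<dots> \<le> u1 * p^2 * ((c^2 + 2) * S1)"
    using S1_dominates(4)[OF S1_bounds(4)] U_derivs by (intro mult_left_mono) auto
  finally show "-(u1 * p) * nu * WSg \<le> u1 * p^2 * ((c^2 + 2) * S1)" .
qed (use U_derivs in auto)

lemma eta_term_le: "-(u1 * p) * sig * eta * (S * dDW) \<le> (u1 - u2) * pk * (sgu * (c^2 + 2) * S1)"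
proof (rule scale_to_pk)
  have "\<bar>sig * eta\<bar> \<le> sgu * (p * E)" using zeta_range zeta_deviation(3) by (intro abs_mult_le_mult) auto
  have "-(u1 * p) * sig * eta * (S * dDW) = -(u1 * p * ((sig * eta) * (S * dDW)))" by simp
  also have "\<dots> \<le> u1 * p * ((sgu * (p * E)) * \<bar>S * dDW\<bar>)"
    using U_derivs psi abs_mult_le_mult[OF \<open>\<bar>sig * eta\<bar> \<le> sgu * (p * E)\<close> order_refl]
    by (intro neg_mult_le_of_abs_le) auto
  also have "\<dots> = u1 * p^2 * (sgu * (E * \<bar>S * dDW\<bar>))" by (simp add: power2_eq_square)
  also have "\<dots> \<le> u1 * p^2 * (sgu * ((c^2 + 2) * S1))"
    using S1_dominates(4)[OF S1_bounds(5)] U_derivs zeta_range by (intro mult_left_mono) auto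
  finally show "-(u1 * p) * sig * eta * (S * dDW) \<le> u1 * p^2 * (sgu * (c^2 + 2) * S1)"
    by (simp add: mult_ac)
qed (use U_derivs zeta_range in auto)

lemma xi_term_le: "-(u1 * p) * (eta^2 + xi) * WSgSg/2 \<le> (u1 - u2) * pk * ((etab + 1) * (c^2 + 2)/2 * S1)"
proof (rule scale_to_pk)
  have "\<bar>eta\<bar> \<le> etab" using zeta_range by auto
  then have "\<bar>eta * eta\<bar> \<le> etab * (p * E)" using zeta_deviation(3) by (rule abs_mult_le_mult)
  then have "\<bar>eta^2 + xi\<bar> \<le> (etab + 1) * (p * E)"
    using zeta_deviation(4) abs_triangle_ineq[of "eta^2" xi] by (simp add: power2_eq_square algebra_simps)
  have "-(u1 * p) * (eta^2 + xi) * WSgSg/2 = -(u1 * p/2 * ((eta^2 + xi) * WSgSg))" by simp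
  also have "\<dots> \<le> u1 * p/2 * (((etab + 1) * (p * E)) * \<bar>WSgSg\<bar>)"
    using U_derivs psi abs_mult_le_mult[OF \<open>\<bar>eta^2 + xi\<bar> \<le> (etab + 1) * (p * E)\<close> order_refl]
    by (intro neg_mult_le_of_abs_le) auto
  also have "\<dots> = u1 * p^2 * ((etab + 1)/2 * (E * \<bar>WSgSg\<bar>))" by (simp add: power2_eq_square)
  also have "\<dots> \<le> u1 * p^2 * ((etab + 1)/2 * ((c^2 + 2) * S1))"
    using S1_dominates(4)[OF S1_bounds(6)] U_derivs by (intro mult_left_mono) auto
  finally show "-(u1 * p) * (eta^2 + xi) * WSgSg/2 \<le> u1 * p^2 * ((etab + 1) * (c^2 + 2)/2 * S1)"
    by simp
qed (use U_derivs in auto)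


lemma hedge_term_le:
  assumes "wYY \<le> u2" "a = -(u2 * p) * DW" "b = -(u2 * p) * WSg"
  shows "sig^2 * S^2 * Dth * a + sig * S * eta * Dph * a + sig * S * eta * Dth * b + Dph * (eta^2+xi) * b
        + sig^2 * S^2 * Dth^2 * wYY/2 + (eta^2+xi) * Dph^2 * wYY/2 + sig * S * eta * Dth * Dph * wYY
     \<le> (u1 - u2) * pk * ((sgu^2 + (etab^2 + xiu)) * S1)"
proof (rule scale_to_pk)
  have "\<bar>sig\<bar> \<le> sgu" "\<bar>eta\<bar> \<le> etab" using zeta_range by auto
  then have sq: "sig^2 \<le> sgu^2" "eta^2 \<le> etab^2" by (simp_all add: square_le_of_abs_le)
  have "(sig * (S * DW) + eta * WSg)^2 \<le> 2 * (sig^2 * (S * DW)^2) + 2 * (eta^2 * WSg^2)"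
    using sum_squares_bound[of "sig * (S * DW)" "eta * WSg"] by (simp add: power2_eq_square algebra_simps)
  also have "\<dots> \<le> 2 * (sgu^2 * S1) + 2 * (etab^2 * S1)"
    using mult_mono[OF sq(1) S1_bounds(7)] mult_mono[OF sq(2) S1_bounds(4)] by simp
  finally have X: "(sig * (S * DW) + eta * WSg)^2 \<le> 2 * (sgu^2 * S1) + 2 * (etab^2 * S1)" .
  have "xi * WSg^2 \<le> xiu * S1" using mult_mono[OF zeta_range(6) S1_bounds(4)] zeta_range(5,6) by auto
  moreover have "0 \<le> xiu * S1" using zeta_range S1_bounds(1) by simp
  ultimately have "((sig * (S * DW) + eta * WSg)^2 + xi * WSg^2)/2
      \<le> (2 * (sgu^2 * S1) + 2 * (etab^2 * S1) + xiu * S1)/2"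
    using X by (intro divide_right_mono add_mono) auto
  also have "\<dots> \<le> (sgu^2 + (etab^2 + xiu)) * S1"
    using \<open>0 \<le> xiu * S1\<close> by (simp add: algebra_simps)
  finally have F: "((sig * (S * DW) + eta * WSg)^2 + xi * WSg^2)/2 \<le> (sgu^2 + (etab^2 + xiu)) * S1" .
  have "(-u2) * p^2 * ((sig * (S * DW) + eta * WSg)^2 + xi * WSg^2) / 2
      \<le> (-u2) * p^2 * ((sgu^2 + (etab^2 + xiu)) * S1)"
    using mult_left_mono[OF F, of "(-u2) * p^2"] mult_nonpos_nonneg[of u2 "p^2"] U_derivs by simp
  with order_trans[OF hedging_terms_le[OF assms(1) U_derivs(2) zeta_range(5) assms(2,3)]]
  show "sig^2 * S^2 * Dth * a + sig * S * eta * Dph * a + sig * S * eta * Dth * b + Dph * (eta^2+xi) * b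
        + sig^2 * S^2 * Dth^2 * wYY/2 + (eta^2+xi) * Dph^2 * wYY/2 + sig * S * eta * Dth * Dph * wYY
     \<le> (-u2) * p^2 * ((sgu^2 + (etab^2 + xiu)) * S1)"
    by blast
qed (use U_derivs zeta_range in auto)

lemma hamiltonian_constant_eq:
  "hamiltonian_constant psis KV Kw Sgu sgu etl etu xiu =
     (B * Pm * Cw/2 + 4 * (Cw + B) + iP/2 + 4 * B) + (sgu + Sgu) * (c^2 + 2)/2 + 2 * KV * (2 * c^2 + 2)
     + Kw * (4 * B * (c + 1) + 2 * KV * (2 * c^2 + 2)) + (c^2 + 2) + sgu * (c^2 + 2)
     + (etab + 1) * (c^2 + 2)/2 + (sgu^2 + (etab^2 + xiu))"
  by (simp add: hamiltonian_constant_def Let_def)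

theorem hamiltonian_le:
  fixes Wt al wSg wA wY wSS wSA wAA wSSg wASg wSgSg wSY wAY wSgY wYY g Dth Dph fz bVz :: real
  assumes derivs: "wSg = -(u1 * p) * WSg" "wA = -(u1 * p) * WA" "wY = u1 - u2 * W * p"
      "wSS + 2 * g * wSA + g^2 * wAA = -(u1 * p) * GW" "wSSg + g * wASg = -(u1 * p) * dDW"
      "wSgSg = -(u1 * p) * WSgSg" "wSY + g * wAY = -(u2 * p) * DW" "wSgY = -(u2 * p) * WSg" "wYY \<le> u2"
    and cash_pde: "Wt + (al + be * Sg^2/2) * WA + Sg^2 * S^2 * GW/2
        + (VSg * (ps1 * w1) + (Sg * E2V) * (ps2 * w2) + (Sg * S * dDV) * (ps3 * w3) + (VSgSg/2) * (ps4 * w4))/2 = 0"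
    and fz: "fz = (nu^2/ps1 + (sig - Sg)^2/ps2 + eta^2/ps3 + xi^2/ps4)/2"
    and bV: "bVz = nu * VSg + E2V * (sig^2 - Sg^2)/2 + sig * eta * S * dDV + (eta^2 + xi) * VSgSg/2"
  shows "-(u1 * p) * Wt + ((1/p) * u1 * fz + nu * wSg + (al + be * sig^2/2) * wA - bVz * wY
      + sig^2 * S^2 * (wSS + 2 * g * wSA + g^2 * wAA)/2 + sig * S * eta * (wSSg + g * wASg) + (eta^2+xi) * wSgSg/2
      + sig^2 * S^2 * Dth * (wSY + g * wAY) + sig * S * eta * Dph * (wSY + g * wAY) + sig * S * eta * Dth * wSgY
      + Dph * (eta^2+xi) * wSgY + sig^2 * S^2 * Dth^2 * wYY/2 + (eta^2+xi) * Dph^2 * wYY/2 + sig * S * eta * Dth * Dph * wYY)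
    \<le> (u1 - u2) * pk * (hamiltonian_constant psis KV Kw Sgu sgu etl etu xiu * S1)"
    (is "?lhs \<le> _")
proof -
  define pen where "pen = p * (VSg * (ps1 * w1) + (Sg * E2V) * (ps2 * w2) + (Sg * S * dDV) * (ps3 * w3)
      + (VSgSg/2) * (ps4 * w4))/2 + ((nu^2/ps1 + (sig - Sg)^2/ps2 + eta^2/ps3 + xi^2/ps4)/2)/p - ve"
  define hedge where "hedge = sig^2 * S^2 * Dth * (wSY + g * wAY) + sig * S * eta * Dph * (wSY + g * wAY)
      + sig * S * eta * Dth * wSgY + Dph * (eta^2+xi) * wSgY + sig^2 * S^2 * Dth^2 * wYY/2
      + (eta^2+xi) * Dph^2 * wYY/2 + sig * S * eta * Dth * Dph * wYY"
  have "?lhs = u1 * pen + (-(u1 * p) * (sig^2 - Sg^2) * (be * WA + S^2 * GW)/2) + (-(u1 * qe))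
      + u2 * W * p * (ve + qe) + (-(u1 * p) * nu * WSg) + (-(u1 * p) * sig * eta * (S * dDW))
      + (-(u1 * p) * (eta^2 + xi) * WSgSg/2) + hedge"
  proof -
    have Wt: "Wt = -((al + be * Sg^2/2) * WA + Sg^2 * S^2 * GW/2 + (VSg * (ps1 * w1) + (Sg * E2V) * (ps2 * w2)
        + (Sg * S * dDV) * (ps3 * w3) + (VSgSg/2) * (ps4 * w4))/2)"
      using cash_pde by linarith
    show ?thesis unfolding pen_def hedge_def bV bV_split derivs(4,5) fz
      using psi by (simp add: derivs(1-3,6) Wt field_simps)
  qed
  also have "\<dots> \<le> (u1 - u2) * pk * ((B * Pm * Cw/2 + 4 * (Cw + B) + iP/2 + 4 * B) * S1)
      + (u1 - u2) * pk * ((sgu + Sgu) * (c^2 + 2)/2 * S1) + (u1 - u2) * pk * (2 * KV * (2 * c^2 + 2) * S1)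
      + (u1 - u2) * pk * (Kw * (4 * B * (c + 1) + 2 * KV * (2 * c^2 + 2)) * S1)
      + (u1 - u2) * pk * ((c^2 + 2) * S1) + (u1 - u2) * pk * (sgu * (c^2 + 2) * S1)
      + (u1 - u2) * pk * ((etab + 1) * (c^2 + 2)/2 * S1) + (u1 - u2) * pk * ((sgu^2 + (etab^2 + xiu)) * S1)"
    unfolding pen_def hedge_def
    by (intro add_mono penalty_term_le volatility_term_le vega_convexity_term_le drift_term_le
          nu_term_le eta_term_le xi_term_le hedge_term_le derivs)
  also have "\<dots> = (u1 - u2) * pk * (hamiltonian_constant psis KV Kw Sgu sgu etl etu xiu * S1)"
    unfolding hamiltonian_constant_eq by (simp only: distrib_left distrib_right)
  finally show ?thesis .
qed

end


definition greeks_square_sum ::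
    "(real \<Rightarrow> real \<Rightarrow> real \<Rightarrow> real \<Rightarrow> real) \<Rightarrow> (real \<Rightarrow> real \<Rightarrow> real \<Rightarrow> real \<Rightarrow> real) \<Rightarrow> fun5 \<Rightarrow> fun5 \<Rightarrow> fun5"
  where "greeks_square_sum bet gam wt Kbar t S A M Sg = 1 + (Kbar t S A M Sg)^2
     + (bet t S A M * D5 2 wt t S A M Sg + S^2 * GammaV gam wt t S A M Sg)^2
     + (D5 4 wt t S A M Sg)^2 + (S * dDeltaV gam wt t S A M Sg)^2
     + (D5 4 (D5 4 wt) t S A M Sg)^2 + (S * DeltaV gam wt t S A M Sg)^2"

lemma positive_models_if_in_P0:
  assumes "0 < T" "\<forall>P\<in>Ps. in_P0 T x0 C alp bet gam del P (zeta P)"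
  shows "positive_models T x0 Ps"
  using assms by (auto simp: positive_models_def in_P0_def in_P00_def)

lemma greeks_square_sum_Lp2:
  assumes models: "positive_models T x0 Ps"
    and A_e: "assmA_e T C V wt alp bet gam del psis Sgl Sgu Ps Kw" and Kbar: "Lp_P T Ps 4 Kbar"
  shows "Lp_P T Ps 2 (greeks_square_sum bet gam wt Kbar)"
proof -
  have L4: "Lp_P T Ps (2 * 2) (D5 4 wt)" "Lp_P T Ps (2 * 2) (\<lambda>t S A M Sg. S * DeltaV gam wt t S A M Sg)"
    "Lp_P T Ps (2 * 2) (\<lambda>t S A M Sg. bet t S A M * D5 2 wt t S A M Sg + S\<^sup>2 * GammaV gam wt t S A M Sg)"
    "Lp_P T Ps (2 * 2) (\<lambda>t S A M Sg. S * dDeltaV gam wt t S A M Sg)" "Lp_P T Ps (2 * 2) (D5 4 (D5 4 wt))"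
    "Lp_P T Ps (2 * 2) Kbar"
    using A_e Kbar by (simp_all add: assmA_e_def)
  note sum = Lp_P_lincomb[OF models, of _ _ 1 1, simplified]
  have "Lp_P T Ps 2 (\<lambda>t S A M Sg. 1 + (Kbar t S A M Sg)^2
     + (bet t S A M * D5 2 wt t S A M Sg + S^2 * GammaV gam wt t S A M Sg)^2
     + (D5 4 wt t S A M Sg)^2 + (S * dDeltaV gam wt t S A M Sg)^2
     + (D5 4 (D5 4 wt) t S A M Sg)^2 + (S * DeltaV gam wt t S A M Sg)^2)"
    by (intro sum Lp_P_const[OF models] Lp_P_square[OF L4(6)] Lp_P_square[OF L4(3)] Lp_P_square[OF L4(1)]
          Lp_P_square[OF L4(4)] Lp_P_square[OF L4(5)] Lp_P_square[OF L4(2)])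
  then show ?thesis by (simp add: greeks_square_sum_def[abs_def])
qed

lemma abs_z_le_norm: "\<bar>z1 x\<bar> \<le> norm x" "\<bar>z2 x\<bar> \<le> norm x" "\<bar>z3 x\<bar> \<le> norm x" "\<bar>z4 x\<bar> \<le> norm x"
  for x :: zeta4
proof -
  obtain a b c d where x: "x = (a, b, c, d)" by (cases x) auto
  have "norm a \<le> norm (a, b, c, d)" "norm (b, c, d) \<le> norm (a, b, c, d)" "norm b \<le> norm (b, c, d)"
    "norm (c, d) \<le> norm (b, c, d)" "norm c \<le> norm (c, d)" "norm d \<le> norm (c, d)"
    by (rule norm_fst_le norm_snd_le)+
  then show "\<bar>z1 x\<bar> \<le> norm x" "\<bar>z2 x\<bar> \<le> norm x" "\<bar>z3 x\<bar> \<le> norm x" "\<bar>z4 x\<bar> \<le> norm x"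
    by (auto simp: x z1_def z2_def z3_def z4_def)
qed

lemma z_minus: "z1 (a - b) = z1 a - z1 b" "z2 (a - b) = z2 a - z2 b" "z3 (a - b) = z3 a - z3 b"
    "z4 (a - b) = z4 a - z4 b"
  by (simp_all add: z1_def z2_def z3_def z4_def)

lemma vvec_components:
  "z1 (vvec bet gam V t S A M Sg) = D5 4 V t S A M Sg"
  "z2 (vvec bet gam V t S A M Sg) = Sg * (bet t S A M * D5 2 V t S A M Sg + S^2 * GammaV gam V t S A M Sg)"
  "z3 (vvec bet gam V t S A M Sg) = Sg * S * dDeltaV gam V t S A M Sg"
  "z4 (vvec bet gam V t S A M Sg) = D5 4 (D5 4 V) t S A M Sg / 2"
  by (simp_all add: vvec_def z1_def z2_def z3_def z4_def mult.assoc)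

lemma ztilde_multiplier_form:
  assumes Psi_pos: "0 < z1 psis" "0 < z2 psis" "0 < z3 psis" "0 < z4 psis"
    and C_vega: "DC 4 C t S Sg \<noteq> 0" and Sg: "0 < Sg" "Sg \<le> Sgu"
    and V_bounds: "\<bar>D5 4 V t S A M Sg\<bar> \<le> KV"
      "\<bar>bet t S A M * D5 2 V t S A M Sg + S\<^sup>2 * GammaV gam V t S A M Sg\<bar> \<le> KV"
      "\<bar>S * dDeltaV gam V t S A M Sg\<bar> \<le> KV" "\<bar>D5 4 (D5 4 V) t S A M Sg\<bar> \<le> KV"
  obtains w where "ztilde C V bet gam psis t S A M Sg = Psi_mul psis w"
    and "ipsi psis (w - vvec bet gam V t S A M Sg) w = 0"
    and "\<bar>z1 w\<bar> \<le> multiplier_bound psis ((1 + Sgu) * KV)" "\<bar>z2 w\<bar> \<le> multiplier_bound psis ((1 + Sgu) * KV)"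
    and "\<bar>z3 w\<bar> \<le> multiplier_bound psis ((1 + Sgu) * KV)" "\<bar>z4 w\<bar> \<le> multiplier_bound psis ((1 + Sgu) * KV)"
proof -
  let ?v = "vvec bet gam V t S A M Sg" and ?c = "cvec C t S Sg" and ?B = "(1 + Sgu) * KV"
  have "KV \<le> ?B" "Sgu * KV \<le> ?B" using V_bounds(1) Sg by (simp_all add: algebra_simps)
  moreover have "\<bar>Sg * X\<bar> \<le> Sgu * KV" if "\<bar>X\<bar> \<le> KV" for X
    using Sg that by (intro abs_mult_le_mult) auto
  ultimately have v: "\<bar>z1 ?v\<bar> \<le> ?B" "\<bar>z2 ?v\<bar> \<le> ?B" "\<bar>z3 ?v\<bar> \<le> ?B" "\<bar>z4 ?v\<bar> \<le> ?B"
    using V_bounds by (force simp: vvec_components mult.assoc)+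
  have c: "z1 ?c \<noteq> 0" "DC 4 (DC 4 C) t S Sg = 2 * z4 ?c" using C_vega by (simp_all add: cvec_def z1_def z4_def)
  have "D5 4 (D5 4 V) t S A M Sg = 2 * z4 ?v" by (simp add: vvec_components)
  note L = lagrange_multipliers[OF Psi_pos c(1,2) this v]
  show ?thesis
  proof (rule that[OF _ L])
    show "ztilde C V bet gam psis t S A M Sg = Psi_mul psis (?v - lamf psis ?c ?v (DC 4 (DC 4 C) t S Sg)
        (D5 4 (D5 4 V) t S A M Sg) *\<^sub>R ?c + (negpart (D5 4 (D5 4 V) t S A M Sg - lamf psis ?c ?v
        (DC 4 (DC 4 C) t S Sg) (D5 4 (D5 4 V) t S A M Sg) * DC 4 (DC 4 C) t S Sg) / 2) *\<^sub>R e4)"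
      by (simp add: ztilde_def lam_at_def mu_at_def)
  qed
qed

lemma zeta_psi_components:
  assumes "ztilde C V bet gam psis t S A M Sg = Psi_mul psis w"
  shows "z1 (zeta_psi C V bet gam psis Sgl Sgu psi t S A M Sg)
      = (if Sgl < Sg \<and> Sg < Sgu then psi * z1 psis * z1 w else 0)"
    "z2 (zeta_psi C V bet gam psis Sgl Sgu psi t S A M Sg)
      = Sg + (if Sgl < Sg \<and> Sg < Sgu then psi * z2 psis * z2 w else 0)"
    "z3 (zeta_psi C V bet gam psis Sgl Sgu psi t S A M Sg)
      = (if Sgl < Sg \<and> Sg < Sgu then psi * z3 psis * z3 w else 0)"
    "z4 (zeta_psi C V bet gam psis Sgl Sgu psi t S A M Sg)
      = (if Sgl < Sg \<and> Sg < Sgu then psi * z4 psis * z4 w else 0)"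
  using assms by (simp_all add: zeta_psi_def zeta0_def Psi_mul_def z1_def z2_def z3_def z4_def mult.assoc)

lemma greeks_square_sum_bounds:
  "1 \<le> greeks_square_sum bet gam wt Kbar t S A M Sg"
  "(Kbar t S A M Sg)^2 \<le> greeks_square_sum bet gam wt Kbar t S A M Sg"
  "(bet t S A M * D5 2 wt t S A M Sg + S^2 * GammaV gam wt t S A M Sg)^2 \<le> greeks_square_sum bet gam wt Kbar t S A M Sg"
  "(D5 4 wt t S A M Sg)^2 \<le> greeks_square_sum bet gam wt Kbar t S A M Sg"
  "(S * dDeltaV gam wt t S A M Sg)^2 \<le> greeks_square_sum bet gam wt Kbar t S A M Sg"
  "(D5 4 (D5 4 wt) t S A M Sg)^2 \<le> greeks_square_sum bet gam wt Kbar t S A M Sg"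
  "(S * DeltaV gam wt t S A M Sg)^2 \<le> greeks_square_sum bet gam wt Kbar t S A M Sg"
  unfolding greeks_square_sum_def by (simp_all add: add_increasing add_increasing2)

lemma gtilde_eq:
  assumes "ztilde C V bet gam psis t S A M Sg = Psi_mul psis w"
  shows "gtilde C V bet gam psis t S A M Sg = D5 4 V t S A M Sg * (z1 psis * z1 w)
    + (Sg * (bet t S A M * D5 2 V t S A M Sg + S\<^sup>2 * GammaV gam V t S A M Sg)) * (z2 psis * z2 w)
    + (Sg * S * dDeltaV gam V t S A M Sg) * (z3 psis * z3 w) + (D5 4 (D5 4 V) t S A M Sg / 2) * (z4 psis * z4 w)"
  using assms by (simp add: gtilde_def vvec_def Psi_mul_def z1_def z2_def z3_def z4_def mult.assoc)

lemma wpsi_greeks: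
  assumes reg: "C12212 wt (D0set T)" and pt: "(t, S, A, M, Sg) \<in> D0set T" and U: "C3 U"
  shows "pd 4 (wpsi U wt psi) t S A M Sg y = -(deriv U y * psi) * D5 4 wt t S A M Sg"
    "pd 2 (wpsi U wt psi) t S A M Sg y = -(deriv U y * psi) * D5 2 wt t S A M Sg"
    "pd 5 (wpsi U wt psi) t S A M Sg y = deriv U y - deriv (deriv U) y * wt t S A M Sg * psi"
    "pd 1 (pd 1 (wpsi U wt psi)) t S A M Sg y + 2 * gam t S A M * pd 2 (pd 1 (wpsi U wt psi)) t S A M Sg y
       + (gam t S A M)\<^sup>2 * pd 2 (pd 2 (wpsi U wt psi)) t S A M Sg y = -(deriv U y * psi) * GammaV gam wt t S A M Sg"
    "pd 4 (pd 1 (wpsi U wt psi)) t S A M Sg y + gam t S A M * pd 4 (pd 2 (wpsi U wt psi)) t S A M Sg y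
       = -(deriv U y * psi) * dDeltaV gam wt t S A M Sg"
    "pd 4 (pd 4 (wpsi U wt psi)) t S A M Sg y = -(deriv U y * psi) * D5 4 (D5 4 wt) t S A M Sg"
    "pd 5 (pd 1 (wpsi U wt psi)) t S A M Sg y + gam t S A M * pd 5 (pd 2 (wpsi U wt psi)) t S A M Sg y
       = -(deriv (deriv U) y * psi) * DeltaV gam wt t S A M Sg"
    "pd 5 (pd 4 (wpsi U wt psi)) t S A M Sg y = -(deriv (deriv U) y * psi) * D5 4 wt t S A M Sg"
  using pd_wpsi[OF reg pt] pd_wpsi_y[OF U] pd_wpsi_space2[OF reg pt, of _ U psi y]
    pd_wpsi_y_space[OF U reg pt, of _ psi y]
  by (auto simp: GammaV_def dDeltaV_def DeltaV_def algebra_simps)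

lemma hamiltonian_estimate_at_point:
  assumes Sgl: "0 < Sgl" and sgl: "0 \<le> sgl"
    and Psi_pos: "0 < z1 psis" "0 < z2 psis" "0 < z3 psis" "0 < z4 psis"
    and A_c: "assmA_c T TC Cpay C Sgl Sgu Ps KC"
    and A_d: "assmA_d T Vpay V alp bet gam del Sgl Sgu KV"
    and A_e: "assmA_e T C V wt alp bet gam del psis Sgl Sgu Ps Kw"
    and A_f: "assmA_f U"
    and pt: "(t, S, A, M, Sg) \<in> Dset T Sgl Sgu" and z: "z \<in> Zset nul nuu sgl sgu etl etu xiu"
    and psi: "0 < psi" "psi < 1"
    and near: "norm (z - zeta_psi C V bet gam psis Sgl Sgu psi t S A M Sg) \<le> Kbar t S A M Sg * psi\<^sup>2"
  obtains w where "ztilde C V bet gam psis t S A M Sg = Psi_mul psis w"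
    and "hamiltonian_estimate psis (deriv U y) (deriv (deriv U) y) psi (Sgl < Sg \<and> Sg < Sgu)
      (wt t S A M Sg) Kw (D5 2 wt t S A M Sg) (D5 4 wt t S A M Sg) (GammaV gam wt t S A M Sg)
      (dDeltaV gam wt t S A M Sg) (D5 4 (D5 4 wt) t S A M Sg) (DeltaV gam wt t S A M Sg) (bet t S A M) S Sg Sgu
      (D5 4 V t S A M Sg) (bet t S A M * D5 2 V t S A M Sg + S\<^sup>2 * GammaV gam V t S A M Sg)
      (dDeltaV gam V t S A M Sg) (D5 4 (D5 4 V) t S A M Sg) KV (z1 w) (z2 w) (z3 w) (z4 w)
      (z1 z) (z2 z) (z3 z) (z4 z)
      (z1 z - z1 (zeta_psi C V bet gam psis Sgl Sgu psi t S A M Sg))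
      (z2 z - z2 (zeta_psi C V bet gam psis Sgl Sgu psi t S A M Sg))
      (z3 z - z3 (zeta_psi C V bet gam psis Sgl Sgu psi t S A M Sg))
      (z4 z - z4 (zeta_psi C V bet gam psis Sgl Sgu psi t S A M Sg))
      (Kbar t S A M Sg) sgu etl etu xiu (greeks_square_sum bet gam wt Kbar t S A M Sg)"
proof -
  let ?I = "Sgl < Sg \<and> Sg < Sgu" and ?zp = "zeta_psi C V bet gam psis Sgl Sgu psi t S A M Sg"
  have pt': "0 < S" "0 < Sg" "Sg \<le> Sgu" using pt Sgl by (auto simp: Dset_def)
  have w_range: "0 \<le> wt t S A M Sg" "wt t S A M Sg \<le> Kw" using A_e pt by (auto simp: assmA_e_def)
  have V_bounds: "\<bar>D5 4 V t S A M Sg\<bar> \<le> KV"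
      "\<bar>bet t S A M * D5 2 V t S A M Sg + S\<^sup>2 * GammaV gam V t S A M Sg\<bar> \<le> KV"
      "\<bar>S * dDeltaV gam V t S A M Sg\<bar> \<le> KV" "\<bar>D5 4 (D5 4 V) t S A M Sg\<bar> \<le> KV"
    using A_d pt by (auto simp: assmA_d_def)
  have C_vega: "DC 4 C t S Sg \<noteq> 0" using A_c pt by (auto simp: assmA_c_def)
  obtain w where zt: "ztilde C V bet gam psis t S A M Sg = Psi_mul psis w"
    and slack: "ipsi psis (w - vvec bet gam V t S A M Sg) w = 0"
    and w_bounds: "\<bar>z1 w\<bar> \<le> multiplier_bound psis ((1 + Sgu) * KV)"
      "\<bar>z2 w\<bar> \<le> multiplier_bound psis ((1 + Sgu) * KV)" "\<bar>z3 w\<bar> \<le> multiplier_bound psis ((1 + Sgu) * KV)"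
      "\<bar>z4 w\<bar> \<le> multiplier_bound psis ((1 + Sgu) * KV)"
    using ztilde_multiplier_form[where t=t and S=S and A=A and M=M and Sg=Sg and bet=bet and gam=gam,
        OF Psi_pos C_vega pt'(2,3) V_bounds] by blast
  have U: "0 < deriv U y" "deriv (deriv U) y < 0" using A_f by (auto simp: assmA_f_def)
  have z_range: "0 \<le> z2 z" "z2 z \<le> sgu" "etl \<le> z3 z" "z3 z \<le> etu" "0 \<le> z4 z" "z4 z \<le> xiu"
    using z sgl by (auto simp: Zset_def)
  have slackness: "z1 psis * (z1 w - D5 4 V t S A M Sg) * z1 w + z2 psis * (z2 w - Sg * (bet t S A M
      * D5 2 V t S A M Sg + S\<^sup>2 * GammaV gam V t S A M Sg)) * z2 w
      + z3 psis * (z3 w - Sg * S * dDeltaV gam V t S A M Sg) * z3 w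
      + z4 psis * (z4 w - D5 4 (D5 4 V) t S A M Sg / 2) * z4 w = 0"
    using slack by (simp add: ipsi_def z_minus vvec_components)
  have zeta_eq: "z1 z = (if ?I then psi * z1 psis * z1 w else 0) + (z1 z - z1 ?zp)"
    "z2 z = Sg + ((if ?I then psi * z2 psis * z2 w else 0) + (z2 z - z2 ?zp))"
    "z3 z = (if ?I then psi * z3 psis * z3 w else 0) + (z3 z - z3 ?zp)"
    "z4 z = (if ?I then psi * z4 psis * z4 w else 0) + (z4 z - z4 ?zp)"
    by (simp_all add: zeta_psi_components[OF zt])
  have d: "\<bar>z1 z - z1 ?zp\<bar> \<le> Kbar t S A M Sg * psi\<^sup>2" "\<bar>z2 z - z2 ?zp\<bar> \<le> Kbar t S A M Sg * psi\<^sup>2"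
    "\<bar>z3 z - z3 ?zp\<bar> \<le> Kbar t S A M Sg * psi\<^sup>2" "\<bar>z4 z - z4 ?zp\<bar> \<le> Kbar t S A M Sg * psi\<^sup>2"
    using abs_z_le_norm[of "z - ?zp"] near by (simp_all add: z_minus)
  show ?thesis
    by (rule that[OF zt hamiltonian_estimate.intro[OF U psi pt' z_range w_range V_bounds Psi_pos
          slackness w_bounds zeta_eq d greeks_square_sum_bounds[where bet=bet and gam=gam and wt=wt
          and Kbar=Kbar and t=t and S=S and A=A and M=M and Sg=Sg]]])
qed

lemma hamiltonian_pointwise_le:
  assumes Sgl: "0 < Sgl" and sgl: "0 \<le> sgl"
    and Psi_pos: "0 < z1 psis" "0 < z2 psis" "0 < z3 psis" "0 < z4 psis"
    and A_c: "assmA_c T TC Cpay C Sgl Sgu Ps KC"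
    and A_d: "assmA_d T Vpay V alp bet gam del Sgl Sgu KV"
    and A_e: "assmA_e T C V wt alp bet gam del psis Sgl Sgu Ps Kw"
    and A_f: "assmA_f U"
    and pt: "(t, S, A, M, Sg) \<in> Dset T Sgl Sgu" and z: "z \<in> Zset nul nuu sgl sgu etl etu xiu"
    and psi: "0 < psi" "psi < 1"
    and near: "norm (z - zeta_psi C V bet gam psis Sgl Sgu psi t S A M Sg) \<le> Kbar t S A M Sg * psi\<^sup>2"
  shows "pd 0 (wpsi U wt psi) t S A M Sg y + Hpsi U wt psi C V alp bet gam psis t S A M Sg y th ph z
    \<le> (deriv U y - deriv (deriv U) y) * psi ^ (if Sgl < Sg \<and> Sg < Sgu then 2 else 1)
      * (hamiltonian_constant psis KV Kw Sgu sgu etl etu xiu * greeks_square_sum bet gam wt Kbar t S A M Sg)"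
proof (rule hamiltonian_estimate_at_point[where Kbar=Kbar, OF assms, of y], goal_cases)
  case (1 w)
  note zt = 1(1) and estimate = hamiltonian_estimate.hamiltonian_le[OF 1(2)]
  have w_range: "0 \<le> wt t S A M Sg" using A_e pt by (auto simp: assmA_e_def)
  have pt0: "(t, S, A, M, Sg) \<in> D0set T" using pt Sgl by (auto simp: Dset_def D0set_def)
  have reg: "C12212 wt (D0set T)"
    and cash_pde: "D5 0 wt t S A M Sg + (alp t S A M + bet t S A M * Sg\<^sup>2 / 2) * D5 2 wt t S A M Sg
        + Sg\<^sup>2 * S\<^sup>2 * GammaV gam wt t S A M Sg / 2 + gtilde C V bet gam psis t S A M Sg / 2 = 0"
    using A_e pt by (auto simp: assmA_e_def)
  have C3: "C3 U" using A_f by (simp add: assmA_f_def)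
  have wYY: "pd 5 (pd 5 (wpsi U wt psi)) t S A M Sg y \<le> deriv (deriv U) y"
    using deriv3_nonneg_if_DARA[OF A_f, of y] w_range psi by (simp add: pd_wpsi_yy[OF C3])
  have fpen: "fpen psis Sg z
      = ((z1 z)\<^sup>2/z1 psis + (z2 z - Sg)\<^sup>2/z2 psis + (z3 z)\<^sup>2/z3 psis + (z4 z)\<^sup>2/z4 psis)/2"
    by (simp add: fpen_def zeta0_def z1_def z2_def z3_def z4_def)
  note greeks = wpsi_greeks[OF reg pt0 C3, of psi y]
  show ?thesis
    unfolding Hpsi_def Let_def pd_wpsi(1)[OF reg pt0]
    by (rule estimate[OF greeks(1-3) greeks(4,5)[of gam] greeks(6) greeks(7)[of gam] greeks(8) wYY
          cash_pde[unfolded gtilde_eq[OF zt]] fpen bV_def[of bet gam V t S A M Sg z]])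
qed

lemma hamiltonian_constant_nonneg:
  assumes "0 < z1 psis" "0 < z2 psis" "0 < z3 psis" "0 < z4 psis"
    and "0 \<le> KV" "0 \<le> Kw" "0 \<le> Sgu" "0 \<le> sgu" "0 \<le> xiu"
  shows "0 \<le> hamiltonian_constant psis KV Kw Sgu sgu etl etu xiu"
  using assms unfolding hamiltonian_constant_def Let_def multiplier_bound_def
  by (intro add_nonneg_nonneg mult_nonneg_nonneg divide_nonneg_nonneg) auto

lemma greek_bounds_nonneg:
  assumes "0 < T" "Sgl \<le> Sgu"
    and "assmA_d T Vpay V alp bet gam del Sgl Sgu KV" "assmA_e T C V wt alp bet gam del psis Sgl Sgu Ps Kw"
  shows "0 \<le> KV" "0 \<le> Kw"
proof -
  have pt: "(T/2, 1, 0, 1, Sgl) \<in> Dset T Sgl Sgu" using assms(1,2) by (simp add: Dset_def)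
  have "\<bar>D5 4 V (T/2) 1 0 1 Sgl\<bar> \<le> KV" using assms(3) pt by (auto simp: assmA_d_def)
  then show "0 \<le> KV" by linarith
  have "0 \<le> wt (T/2) 1 0 1 Sgl \<and> wt (T/2) 1 0 1 Sgl \<le> Kw" using assms(4) pt by (auto simp: assmA_e_def)
  then show "0 \<le> Kw" by linarith
qed

lemma Lp_P_scale:
  assumes "positive_models T x0 Ps" "Lp_P T Ps 2 f"
  shows "Lp_P T Ps 2 (\<lambda>t S A M Sg. a * f t S A M Sg)"
  using Lp_P_lincomb[OF assms assms(2), of a 0] by simp

lemma ereal_add_SUP_le:
  assumes "\<And>u. a + f u \<le> r"
  shows "ereal a + (SUP u\<in>X. ereal (f u)) \<le> ereal r"
proof -
  have "(SUP u\<in>X. ereal (f u)) \<le> ereal (r - a)"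
    using assms by (intro SUP_least) (simp add: algebra_simps)
  then have "ereal a + (SUP u\<in>X. ereal (f u)) \<le> ereal a + ereal (r - a)" by (rule add_left_mono)
  then show ?thesis by simp
qed

lemma hamiltonian_sup_le:
  assumes "0 < Sgl" "0 \<le> sgl" "0 < z1 psis" "0 < z2 psis" "0 < z3 psis" "0 < z4 psis"
    and "assmA_c T TC Cpay C Sgl Sgu Ps KC" "assmA_d T Vpay V alp bet gam del Sgl Sgu KV"
    and "assmA_e T C V wt alp bet gam del psis Sgl Sgu Ps Kw" and A_f: "assmA_f U"
    and "(t, S, A, M, Sg) \<in> Dset T Sgl Sgu" "z \<in> Zset nul nuu sgl sgu etl etu xiu" "0 < psi" "psi < 1"
    and "norm (z - zeta_psi C V bet gam psis Sgl Sgu psi t S A M Sg) \<le> Kbar t S A M Sg * psi\<^sup>2"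
  shows "ereal (pd 0 (wpsi U wt psi) t S A M Sg y)
      + (SUP ups\<in>UNIV. ereal (Hpsi U wt psi C V alp bet gam psis t S A M Sg y (fst ups) (snd ups) z))
    \<le> ereal (hamiltonian_constant psis KV Kw Sgu sgu etl etu xiu * greeks_square_sum bet gam wt Kbar t S A M Sg
      * deriv U y * (1 + (- deriv (deriv U) y) / deriv U y) * psi ^ (if Sgl < Sg \<and> Sg < Sgu then 2 else 1))"
proof (rule ereal_add_SUP_le)
  have "deriv U y > 0" using A_f by (simp add: assmA_f_def)
  then have U: "deriv U y - deriv (deriv U) y = deriv U y * (1 + (- deriv (deriv U) y) / deriv U y)"
    by (simp add: field_simps)
  show "pd 0 (wpsi U wt psi) t S A M Sg y + Hpsi U wt psi C V alp bet gam psis t S A M Sg y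
      (fst ups) (snd ups) z \<le> hamiltonian_constant psis KV Kw Sgu sgu etl etu xiu
      * greeks_square_sum bet gam wt Kbar t S A M Sg * deriv U y * (1 + (- deriv (deriv U) y) / deriv U y)
      * psi ^ (if Sgl < Sg \<and> Sg < Sgu then 2 else 1)" for ups
    using hamiltonian_pointwise_le[where Kbar=Kbar, OF assms, of y "fst ups" "snd ups"]
    by (simp only: U mult_ac)
qed

theorem lemma5p14:
  fixes T S0 Sg0 A0 Sgl Sgu TC Y0 nul nuu sgl sgu etl etu xiu KV Kw psi0 :: real
    and alp bet gam del :: "real \<Rightarrow> real \<Rightarrow> real \<Rightarrow> real \<Rightarrow> real"
    and Cpay :: "real \<Rightarrow> real" and C :: "real \<Rightarrow> real \<Rightarrow> real \<Rightarrow> real"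
    and Vpay :: "real \<Rightarrow> real \<Rightarrow> real \<Rightarrow> real" and V wt KC Kbar :: fun5
    and psis :: zeta4 and U :: "real \<Rightarrow> real"
    and Ys :: "(real \<Rightarrow> path \<Rightarrow> real \<times> real) set" and Ps :: "path measure set"
    and zeta :: "path measure \<Rightarrow> real \<Rightarrow> path \<Rightarrow> zeta4"
    and Pf :: "real \<Rightarrow> path measure"
  assumes setting: "0 < T" "0 < S0" "0 < Sgl" "Sgl < Sg0" "Sg0 < Sgu"
    and coeffs_borel: "(\<lambda>(t,S,A,M). alp t S A M) \<in> borel_measurable borel"
        "(\<lambda>(t,S,A,M). bet t S A M) \<in> borel_measurable borel"
        "(\<lambda>(t,S,A,M). gam t S A M) \<in> borel_measurable borel"
        "(\<lambda>(t,S,A,M). del t S A M) \<in> borel_measurable borel"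
    and Psi_pos: "0 < z1 psis" "0 < z2 psis" "0 < z3 psis" "0 < z4 psis"
    and strategies: "\<forall>ups\<in>Ys. strategy T (S0, Sg0, A0) ups"
    and models: "\<forall>P\<in>Ps. in_P0 T (S0, Sg0, A0) C alp bet gam del P (zeta P)"
    and A_a: "assmA_a T (S0, Sg0, A0) C V Y0 Ys Ps zeta"
    and A_b: "assmA_b T C V bet gam psis Sgl Sgu Ps zeta nul nuu sgl sgu etl etu xiu"
    and A_c: "assmA_c T TC Cpay C Sgl Sgu Ps KC"
    and A_d: "assmA_d T Vpay V alp bet gam del Sgl Sgu KV"
    and A_e: "assmA_e T C V wt alp bet gam del psis Sgl Sgu Ps Kw"
    and A_f: "assmA_f U"
    and hedge: "delta_vega C V gam \<in> Ys"
    and family: "candidate_family T Ps zeta C V bet gam psis Sgl Sgu Pf psi0"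
    and Kbar_nonneg: "\<forall>(t,S,A,M,Sg)\<in>D0set T. 0 \<le> Kbar t S A M Sg"
    and Kbar_L4: "Lp_P T Ps 4 Kbar"
  shows "\<exists>Kup :: fun5. (\<forall>t S A M Sg. 0 \<le> Kup t S A M Sg) \<and> Lp_P T Ps 2 Kup \<and>
    (\<forall>t S A M Sg y z psi. (t,S,A,M,Sg) \<in> Dset T Sgl Sgu \<longrightarrow> z \<in> Zset nul nuu sgl sgu etl etu xiu
       \<longrightarrow> 0 < psi \<longrightarrow> psi < 1
       \<longrightarrow> norm (z - zeta_psi C V bet gam psis Sgl Sgu psi t S A M Sg) \<le> Kbar t S A M Sg * psi\<^sup>2
       \<longrightarrow> ereal (pd 0 (wpsi U wt psi) t S A M Sg y)
             + (SUP ups\<in>(UNIV :: (real \<times> real) set).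
                  ereal (Hpsi U wt psi C V alp bet gam psis t S A M Sg y (fst ups) (snd ups) z))
           \<le> ereal (Kup t S A M Sg * deriv U y * (1 + (- deriv (deriv U) y) / deriv U y)
                    * psi ^ (if Sgl < Sg \<and> Sg < Sgu then 2 else 1)))"
proof -
  have models': "positive_models T (S0, Sg0, A0) Ps" by (rule positive_models_if_in_P0[OF setting(1) models])
  have sgl: "0 < sgl" and sgu: "Sgu < sgu" and xiu: "0 < xiu" using A_b by (auto simp: assmA_b_def)
  have KV: "0 \<le> KV" and Kw: "0 \<le> Kw" using greek_bounds_nonneg[OF setting(1) _ A_d A_e] setting by auto
  let ?C0 = "hamiltonian_constant psis KV Kw Sgu sgu etl etu xiu"
  have "0 \<le> ?C0" using hamiltonian_constant_nonneg Psi_pos KV Kw sgu xiu setting by simp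
  show ?thesis
  proof (intro exI[of _ "\<lambda>t S A M Sg. ?C0 * greeks_square_sum bet gam wt Kbar t S A M Sg"] conjI allI impI)
    show "0 \<le> ?C0 * greeks_square_sum bet gam wt Kbar t S A M Sg" for t S A M Sg
      using \<open>0 \<le> ?C0\<close> greeks_square_sum_bounds(1)[of bet gam wt Kbar t S A M Sg] by simp
    show "Lp_P T Ps 2 (\<lambda>t S A M Sg. ?C0 * greeks_square_sum bet gam wt Kbar t S A M Sg)"
      by (rule Lp_P_scale[OF models' greeks_square_sum_Lp2[OF models' A_e Kbar_L4]])
  qed (rule hamiltonian_sup_le[OF setting(3) less_imp_le[OF sgl] Psi_pos A_c A_d A_e A_f]; assumption)+
qed
end
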